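(* Let $n\ge 2k$. The map $\beta\mapsto\phi(\beta)|_{eM}$ restricted to $bB_{k,k}(n)b$ is an algebra isomorphism from $bB_{k,k}(n)b$ onto $\mathrm{End}_{\mathfrak g}(eM)\cong\mathrm{End}_{\mathfrak{sl}_n}(\mathfrak{sl}_n^{\otimes k})$. Moreover, the set of all elements $bdb$, as $d$ ranges over all walled Brauer diagrams in $B_{k,k}(n)$ with no forbidden pairs, is a basis of $bB_{k,k}(n)b$.
   Context: $\mathfrak g=\mathfrak{gl}_n(\mathbb{C})$; $V=\mathbb{C}^n$ (column vectors, basis $v_1,\dots,v_n$), $V^*$ row vectors (dual basis $v_1^*,\dots,v_n^*$), $\mathfrak g$ acting on $V$ by left multiplication and on $V^*$ by $w^*\mapsto-w^*x$; $M=V^{\otimes k}\otimes(V^* )^{\otimes k}$ with the tensor product action. For $1\le i,j\le k$, $c_{i,j}:M\to M$ is $c_{i,j}(u_1\otimes\cdots\otimes u_k\otimes w_1^*\otimes\cdots\otimes w_k^* )=(w_j^*u_i)\sum_{\ell=1}^n(\text{same tensor with }u_i\text{ replaced by }v_\ell\text{ and }w_j^*\text{ by }v_\ell^* )$; $p_i=\frac1nc_{i,i}$; $e=(\mathrm{id}-p_1)\cdots(\mathrm{id}-p_k)$; $eM\cong\mathfrak{sl}_n^{\otimes k}$ as $\mathfrak g$-modules ($\mathfrak g$ acting adjointly on $\mathfrak{sl}_n$), via $V\otimes V^*\cong\mathfrak{gl}_n$, $u\otimes w^*\mapsto uw^*$. Walled Brauer algebra $B_{k,k}(n)$: the vector space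 with basis all diagrams consisting of a top row and a bottom row of $2k$ vertices each, positioned $1,\dots,2k$, with a wall between positions $k$ and $k+1$, and a set of edges pairing all $4k$ vertices, such that every edge joining two vertices of the same row (horizontal edge) joins a vertex in positions $1,\dots,k$ to one in positions $k+1,\dots,2k$, and every edge joining the two rows (vertical edge) joins vertices on the same side of the wall. The product $d_1d_2$ is obtained by placing $d_1$ above $d_2$, identifying the bottom row of $d_1$ with the top row of $d_2$, following paths, deleting the closed cycles formed in the middle, and multiplying by $n^{\#\text{cycles}}$. The representation $\phi:B_{k,k}(n)\to\mathrm{End}(M)$ is defined by $\phi(d)(v_{a_1}\otimes\cdots\otimes v_{a_k}\otimes v^*_{a_{k+1}}\otimes\cdots\otimes v^*_{a_{2k}})=\sum_{b}\delta_d(a,b)\,v_{b_1}\otimes\cdots\otimes v_{b_k}\otimes v^*_{b_{k+1}}\otimes\cdots\otimes v^*_{b_{2k}}$, summing over $b\in\{1,\dots,n\}^{2k}$, where $\delta_d(a,b)=1$ if, labelling bottom vertex $i$ by $a_i$ and top vertex $i$ by $b_i$, every edge of $d$ joins two equal labels, and $0$ otherwise. Its image lies in $\mathrm{End}_{\mathfrak g}(M)$. For $1\le j\le k$, $c_j$ is $\frac1n$ times the diagram whose horizontal edges are top $j$–top $k+j$ and bottom $j$–bottom $k+j$, all other vertices being joined vertically to the vertex directly below; so $\phi(c_j)=p_j$. Let $b=\prod_{j=1}^k(1-c_j)$ (with $1$ the identity diagram), so $\phi(b)=e$ and $\phi(bB_{k,k}(n)b)$ preserves $eM$. A diagram $d$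 has a forbidden pair if for some $i\in\{1,\dots,k\}$ vertex $i$ is joined to vertex $k+i$ in the top row or in the bottom row of $d$. *)

theory Defs
  imports Complex_Main "HOL-Library.FuncSet"
begin

text \<open>Vertices: (True,i) is top vertex at position i, (False,i) bottom vertex at
position i; positions are 0-indexed, 0..k-1 left of the wall, k..2k-1 right of it.
A diagram is its partner function (identity outside the vertex set).\<close>

type_synonym vtx = "bool \<times> nat"
type_synonym diagram = "vtx \<Rightarrow> vtx"

definition verts :: "nat \<Rightarrow> vtx set" where
  "verts k = UNIV \<times> {..<2*k}"

definition is_wb :: "nat \<Rightarrow> diagram \<Rightarrow> bool" where
  "is_wb k d \<longleftrightarrow>
     (\<forall>v\<in>verts k. d v \<in> verts k \<and> d v \<noteq> v \<and> d (d v) = v \<and>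
        (fst (d v) = fst v \<longrightarrow> (snd v < k \<longleftrightarrow> k \<le> snd (d v))) \<and>
        (fst (d v) \<noteq> fst v \<longrightarrow> (snd v < k \<longleftrightarrow> snd (d v) < k))) \<and>
     (\<forall>v. v \<notin> verts k \<longrightarrow> d v = v)"

definition WB :: "nat \<Rightarrow> diagram set" where
  "WB k = {d. is_wb k d}"

text \<open>Stacking d1 above d2: level 0 = top row of d1, level 1 = middle
(bottom of d1 = top of d2), level 2 = bottom row of d2.\<close>

definition stack_edges :: "nat \<Rightarrow> diagram \<Rightarrow> diagram \<Rightarrow> ((nat \<times> nat) \<times> (nat \<times> nat)) set" where
  "stack_edges k d1 d2 =
     {((if fst v then 0 else 1, snd v), (if fst (d1 v) then 0 else 1, snd (d1 v))) | v. v \<in> verts k}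
   \<union> {((if fst v then 1 else 2, snd v), (if fst (d2 v) then 1 else 2, snd (d2 v))) | v. v \<in> verts k}"

definition stack_conn :: "nat \<Rightarrow> diagram \<Rightarrow> diagram \<Rightarrow> ((nat \<times> nat) \<times> (nat \<times> nat)) set" where
  "stack_conn k d1 d2 = (stack_edges k d1 d2 \<union> (stack_edges k d1 d2)\<inverse>)\<^sup>*"

definition lift :: "vtx \<Rightarrow> nat \<times> nat" where
  "lift v = (if fst v then 0 else 2, snd v)"

definition compose :: "nat \<Rightarrow> diagram \<Rightarrow> diagram \<Rightarrow> diagram" where
  "compose k d1 d2 v =
     (if v \<in> verts k then (THE w. w \<in> verts k \<and> w \<noteq> v \<and> (lift v, lift w) \<in> stack_conn k d1 d2)
      else v)"

text \<open>Number of closed cycles: connected components lying entirely in the middle row.\<close>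
definition cycles :: "nat \<Rightarrow> diagram \<Rightarrow> diagram \<Rightarrow> nat" where
  "cycles k d1 d2 = card {C. \<exists>i<2*k. C = stack_conn k d1 d2 `` {(1, i)} \<and> C \<subseteq> {1} \<times> {..<2*k}}"

section \<open>The walled Brauer algebra B_{k,k}(n) (elements = coefficient functions on diagrams)\<close>

definition Alg :: "nat \<Rightarrow> (diagram \<Rightarrow> complex) set" where
  "Alg k = {x. \<forall>d. d \<notin> WB k \<longrightarrow> x d = 0}"

definition dbas :: "diagram \<Rightarrow> diagram \<Rightarrow> complex" where
  "dbas d = (\<lambda>d'. if d' = d then 1 else 0)"

definition dmul :: "nat \<Rightarrow> nat \<Rightarrow> (diagram \<Rightarrow> complex) \<Rightarrow> (diagram \<Rightarrow> complex) \<Rightarrow> diagram \<Rightarrow> complex" where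
  "dmul k n x y = (\<lambda>d. \<Sum>d1\<in>WB k. \<Sum>d2\<in>WB k.
      if compose k d1 d2 = d then x d1 * y d2 * of_nat n ^ cycles k d1 d2 else 0)"

definition idd :: "nat \<Rightarrow> diagram" where
  "idd k v = (if v \<in> verts k then (\<not> fst v, snd v) else v)"

text \<open>The diagram underlying c_j (j 0-indexed, 0 \<le> j < k).\<close>
definition cdiag :: "nat \<Rightarrow> nat \<Rightarrow> diagram" where
  "cdiag k j v = (if v \<in> verts k then
      (if snd v = j then (fst v, k + j) else if snd v = k + j then (fst v, j) else (\<not> fst v, snd v))
    else v)"

definition c_elem :: "nat \<Rightarrow> nat \<Rightarrow> nat \<Rightarrow> diagram \<Rightarrow> complex" where
  "c_elem k n j = (\<lambda>d. if d = cdiag k j then 1 / of_nat n else 0)"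

fun bprod :: "nat \<Rightarrow> nat \<Rightarrow> nat \<Rightarrow> diagram \<Rightarrow> complex" where
  "bprod k n 0 = dbas (idd k)"
| "bprod k n (Suc j) = dmul k n (bprod k n j) (\<lambda>d. dbas (idd k) d - c_elem k n j d)"

definition b_elem :: "nat \<Rightarrow> nat \<Rightarrow> diagram \<Rightarrow> complex" where
  "b_elem k n = bprod k n k"

definition bBb :: "nat \<Rightarrow> nat \<Rightarrow> (diagram \<Rightarrow> complex) set" where
  "bBb k n = {dmul k n (dmul k n (b_elem k n) x) (b_elem k n) | x. x \<in> Alg k}"

definition has_forbidden :: "nat \<Rightarrow> diagram \<Rightarrow> bool" where
  "has_forbidden k d \<longleftrightarrow> (\<exists>i<k. d (True, i) = (True, k + i) \<or> d (False, i) = (False, k + i))"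

section \<open>The module M = V^{\<otimes>k} \<otimes> (V^*)^{\<otimes>k}\<close>

text \<open>Basis tensors indexed by a : positions 0..2k-1 \<rightarrow> {0..n-1} (extended by 0);
vectors are coefficient functions vanishing off the index set.\<close>

definition Idx :: "nat \<Rightarrow> nat \<Rightarrow> (nat \<Rightarrow> nat) set" where
  "Idx n k = {a. (\<forall>i<2*k. a i < n) \<and> (\<forall>i. 2*k \<le> i \<longrightarrow> a i = 0)}"

definition Mvec :: "nat \<Rightarrow> nat \<Rightarrow> ((nat \<Rightarrow> nat) \<Rightarrow> complex) set" where
  "Mvec n k = {v. \<forall>a. a \<notin> Idx n k \<longrightarrow> v a = 0}"

definition vlab :: "(nat \<Rightarrow> nat) \<Rightarrow> (nat \<Rightarrow> nat) \<Rightarrow> vtx \<Rightarrow> nat" where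
  "vlab a b v = (if fst v then b (snd v) else a (snd v))"

definition delta :: "nat \<Rightarrow> diagram \<Rightarrow> (nat \<Rightarrow> nat) \<Rightarrow> (nat \<Rightarrow> nat) \<Rightarrow> bool" where
  "delta k d a b \<longleftrightarrow> (\<forall>v\<in>verts k. vlab a b (d v) = vlab a b v)"

definition phi :: "nat \<Rightarrow> nat \<Rightarrow> (diagram \<Rightarrow> complex) \<Rightarrow> ((nat \<Rightarrow> nat) \<Rightarrow> complex) \<Rightarrow> (nat \<Rightarrow> nat) \<Rightarrow> complex" where
  "phi k n x v = (\<lambda>b. if b \<in> Idx n k then
       (\<Sum>a\<in>Idx n k. (\<Sum>d\<in>WB k. x d * (if delta k d a b then 1 else 0)) * v a) else 0)"

text \<open>p_i = c_{i,i}/n (i 0-indexed, paired with position k+i).\<close>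
definition pmap :: "nat \<Rightarrow> nat \<Rightarrow> nat \<Rightarrow> ((nat \<Rightarrow> nat) \<Rightarrow> complex) \<Rightarrow> (nat \<Rightarrow> nat) \<Rightarrow> complex" where
  "pmap k n i v = (\<lambda>b. if b \<in> Idx n k then
      (1 / of_nat n) * (if b i = b (k + i) then (\<Sum>l<n. v (b(i := l, k + i := l))) else 0) else 0)"

fun eprod :: "nat \<Rightarrow> nat \<Rightarrow> nat \<Rightarrow> ((nat \<Rightarrow> nat) \<Rightarrow> complex) \<Rightarrow> (nat \<Rightarrow> nat) \<Rightarrow> complex" where
  "eprod k n 0 v = v"
| "eprod k n (Suc j) v = eprod k n j (\<lambda>b. v b - pmap k n j v b)"

text \<open>e = (id - p_1) \<circ> ... \<circ> (id - p_k).\<close>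
definition emap :: "nat \<Rightarrow> nat \<Rightarrow> ((nat \<Rightarrow> nat) \<Rightarrow> complex) \<Rightarrow> (nat \<Rightarrow> nat) \<Rightarrow> complex" where
  "emap k n = eprod k n k"

definition eM :: "nat \<Rightarrow> nat \<Rightarrow> ((nat \<Rightarrow> nat) \<Rightarrow> complex) set" where
  "eM k n = emap k n ` Mvec n k"

text \<open>x : n\<times>n complex matrix, x i j the (i,j) entry (0-indexed). Image of the basis tensor a:
 x v_c = \<Sum>_r x_{r,c} v_r on V, and v_c^* \<mapsto> -v_c^* x = -\<Sum>_r x_{c,r} v_r^* on V^*.\<close>
definition glact_basis :: "nat \<Rightarrow> nat \<Rightarrow> (nat \<Rightarrow> nat \<Rightarrow> complex) \<Rightarrow> (nat \<Rightarrow> nat) \<Rightarrow> (nat \<Rightarrow> nat) \<Rightarrow> complex" where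
  "glact_basis k n x a = (\<lambda>b.
      (\<Sum>i<k. \<Sum>r<n. if b = a(i := r) then x r (a i) else 0)
    - (\<Sum>i\<in>{k..<2*k}. \<Sum>r<n. if b = a(i := r) then x (a i) r else 0))"

definition glact :: "nat \<Rightarrow> nat \<Rightarrow> (nat \<Rightarrow> nat \<Rightarrow> complex) \<Rightarrow> ((nat \<Rightarrow> nat) \<Rightarrow> complex) \<Rightarrow> (nat \<Rightarrow> nat) \<Rightarrow> complex" where
  "glact k n x v = (\<lambda>b. \<Sum>a\<in>Idx n k. v a * glact_basis k n x a b)"

definition Endg :: "nat \<Rightarrow> nat \<Rightarrow> (((nat \<Rightarrow> nat) \<Rightarrow> complex) \<Rightarrow> (nat \<Rightarrow> nat) \<Rightarrow> complex) set" where
  "Endg k n = {f. f \<in> extensional (eM k n) \<and> (\<forall>v\<in>eM k n. f v \<in> eM k n) \<and>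
      (\<forall>u\<in>eM k n. \<forall>v\<in>eM k n. f (\<lambda>a. u a + v a) = (\<lambda>a. f u a + f v a)) \<and>
      (\<forall>c. \<forall>v\<in>eM k n. f (\<lambda>a. c * v a) = (\<lambda>a. c * f v a)) \<and>
      (\<forall>x. \<forall>v\<in>eM k n. f (glact k n x v) = glact k n x (f v))}"

end

theory Submission
  imports Defs
begin

text \<open>
Everything is computed through labellings of the vertices of a diagram by colours
\<open>0, \<dots>, n - 1\<close>: the matrix entry of \<open>\<phi>(d)\<close> at the basis
tensors \<open>(a, b)\<close> is 1 exactly when the labelling with bottom row \<open>a\<close> and
top row \<open>b\<close> is constant along the edges of \<open>d\<close>.

\<^item> Stacking \<open>d\<^sub>1\<close> on \<open>d\<^sub>2\<close>, the middle-row labellings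
  compatible with both are determined by the colours of the closed loops, so there are
  \<open>n\<^bsup>cycles\<^esup>\<close> of them and \<open>\<phi>\<close> is multiplicative.
\<^item> A matrix commuting with all \<open>E\<^sub>r\<^sub>s\<close> is a function \<open>t\<close> on
  labellings satisfying the exchange equations obtained by recolouring one vertex.  For
  \<open>n \<ge> 2k\<close>, such a \<open>t\<close> is determined by its values on the canonical
  labellings (colour every edge of a diagram \<open>d\<close> by the position of one of its
  endpoints): recolouring moves any labelling with \<open>t \<noteq> 0\<close> to a canonical
  one.  As \<open>\<phi>(d)\<close> is the indicator of the canonical labelling of \<open>d\<close>
  among them, \<open>\<phi>\<close> is injective and onto \<open>End\<^sub>g(M)\<close> (first
  fundamental theorem).
\<^item> Since \<open>\<phi>(b) = e\<close>, \<open>\<phi>(bxb) = e \<phi>(x) e\<close>, which turns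
  the above into the isomorphism \<open>bB\<^sub>k\<^sub>,\<^sub>k(n)b \<cong> End\<^sub>g(eM)\<close>.
  A forbidden pair at \<open>j\<close> makes \<open>\<phi>(d)\<close> factor through
  \<open>p\<^sub>j\<close>, so \<open>e\<close> kills it; without forbidden pairs the canonical
  labelling has distinct colours at \<open>j\<close> and \<open>k + j\<close>, so it is fixed by
  \<open>e\<close> and still separates the \<open>bdb\<close>.
\<close>

section \<open>Walled Brauer diagrams\<close>

lemma finite_verts[simp]: "finite (verts k)"
  unfolding verts_def by simp

lemma verts_iff: "x \<in> verts k \<longleftrightarrow> snd x < 2*k"
  unfolding verts_def by (cases x) auto

text \<open>Every edge of a walled Brauer diagram joins a vertex of each polarity; the positive vertices are
the top-left and the bottom-right ones.\<close>

definition polarity :: "nat \<Rightarrow> vtx \<Rightarrow> bool" where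
  "polarity k x \<longleftrightarrow> (fst x = (snd x < k))"

lemma WB_D:
  assumes "d \<in> WB k" "v \<in> verts k"
  shows "d v \<in> verts k" "d v \<noteq> v" "d (d v) = v" "polarity k (d v) = (\<not> polarity k v)"
proof -
  have H: "d v \<in> verts k \<and> d v \<noteq> v \<and> d (d v) = v \<and>
        (fst (d v) = fst v \<longrightarrow> (snd v < k \<longleftrightarrow> k \<le> snd (d v))) \<and>
        (fst (d v) \<noteq> fst v \<longrightarrow> (snd v < k \<longleftrightarrow> snd (d v) < k))"
    using assms unfolding WB_def is_wb_def by blast
  then show "d v \<in> verts k" "d v \<noteq> v" "d (d v) = v" by auto
  show "polarity k (d v) = (\<not> polarity k v)" using H unfolding polarity_def
    by (cases "fst (d v)"; cases "fst v"; auto)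
qed

lemma WB_outside: "d \<in> WB k \<Longrightarrow> v \<notin> verts k \<Longrightarrow> d v = v"
  unfolding WB_def is_wb_def by (cases v) blast

lemma WB_involution: "d \<in> WB k \<Longrightarrow> d (d v) = v"
  by (cases "v \<in> verts k") (auto simp: WB_D WB_outside)

lemma WB_I:
  assumes "\<And>v. v \<in> verts k \<Longrightarrow> d v \<in> verts k"
    "\<And>v. v \<in> verts k \<Longrightarrow> d (d v) = v"
    "\<And>v. v \<in> verts k \<Longrightarrow> polarity k (d v) = (\<not> polarity k v)"
    "\<And>v. v \<notin> verts k \<Longrightarrow> d v = v"
  shows "d \<in> WB k"
  unfolding WB_def is_wb_def
proof (intro CollectI conjI ballI allI impI)
  fix v assume v: "v \<in> verts k"
  show "d v \<in> verts k" "d (d v) = v" using assms v by auto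
  show "d v \<noteq> v" using assms(3)[OF v] by auto
  show "fst (d v) = fst v \<Longrightarrow> (snd v < k) = (k \<le> snd (d v))"
    using assms(3)[OF v] unfolding polarity_def by auto
  show "fst (d v) \<noteq> fst v \<Longrightarrow> (snd v < k) = (snd (d v) < k)"
    using assms(3)[OF v] unfolding polarity_def by auto
next
  fix v show "v \<notin> verts k \<Longrightarrow> d v = v" using assms by auto
qed

lemma finite_WB[simp]: "finite (WB k)"
proof (rule finite_imageD)
  show "finite ((\<lambda>d. restrict d (verts k)) ` WB k)"
    by (rule finite_subset[of _ "verts k \<rightarrow>\<^sub>E verts k"]) (auto simp: WB_D finite_PiE)
  show "inj_on (\<lambda>d. restrict d (verts k)) (WB k)"
    by (rule inj_onI) (metis WB_outside restrict_apply' ext)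
qed

lemma finite_Idx[simp]: "finite (Idx n k)"
  by (rule finite_subset[OF _ finite_set_of_finite_funs[of "{..<2*k}" "{..<n}" 0]])
    (auto simp: Idx_def)

section \<open>Composition of diagrams\<close>

text \<open>A dart \<open>(s, x)\<close> is the vertex \<open>x\<close> of the upper (\<open>s\<close>) or
lower (\<open>\<not> s\<close>) diagram of the stack. Starting at a boundary vertex, the walk
follows edges alternately in the two layers, changing layer whenever it reaches the middle row,
until it hits the boundary again.\<close>

type_synonym dart = "bool \<times> vtx"

locale diagram_pair =
  fixes k :: nat and d1 d2 :: diagram
  assumes d1: "d1 \<in> WB k" and d2: "d2 \<in> WB k"
begin

definition layer :: "bool \<Rightarrow> diagram" where "layer s = (if s then d1 else d2)"

lemma layer_WB: "layer s \<in> WB k" unfolding layer_def using d1 d2 by auto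

definition step :: "dart \<Rightarrow> dart" where
  "step u = (let y = layer (fst u) (snd u) in
          if fst y \<noteq> fst u then (\<not> fst u, (\<not> fst y, snd y)) else (fst u, y))"

definition at_boundary :: "dart \<Rightarrow> bool" where "at_boundary u \<longleftrightarrow> fst (snd u) = fst u"

definition stack_pos :: "dart \<Rightarrow> nat \<times> nat" where
  "stack_pos u = (if fst u then (if fst (snd u) then 0 else 1, snd (snd u))
           else (if fst (snd u) then 1 else 2, snd (snd u)))"

primrec walk :: "vtx \<Rightarrow> nat \<Rightarrow> dart" where
  "walk v 0 = (fst v, v)"
| "walk v (Suc m) = (if m \<noteq> 0 \<and> at_boundary (walk v m) then walk v m else step (walk v m))"

definition unstep :: "dart \<Rightarrow> dart" where
  "unstep u = (\<not> fst u, layer (\<not> fst u) (\<not> fst (snd u), snd (snd u)))"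

lemma step_verts: "snd u \<in> verts k \<Longrightarrow> snd (step u) \<in> verts k"
  using WB_D(1)[OF layer_WB] unfolding step_def Let_def verts_iff by auto

lemma walk_verts: "v \<in> verts k \<Longrightarrow> snd (walk v m) \<in> verts k"
  by (induction m) (auto simp: step_verts)

lemma unstep_step: "snd u \<in> verts k \<Longrightarrow> \<not> at_boundary (step u) \<Longrightarrow>
    unstep (step u) = u"
proof -
  obtain s x where u: "u = (s, x)" by (cases u)
  obtain b i where y: "layer s x = (b, i)" by (cases "layer s x")
  have inv: "layer s (b, i) = x" using WB_involution[OF layer_WB, of s x] y by simp
  assume "\<not> at_boundary (step u)"
  then show ?thesis unfolding step_def unstep_def at_boundary_def Let_def u using y inv
    by (auto split: if_splits)
qed

lemma walk_0_at_boundary: "at_boundary (walk v 0)" by (simp add: at_boundary_def)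

definition inner_darts :: "dart set" where "inner_darts = {u. snd u \<in> verts k \<and> \<not> at_boundary u}"

lemma finite_inner_darts: "finite inner_darts"
  by (rule finite_subset[of _ "UNIV \<times> verts k"]) (auto simp: inner_darts_def)

lemma card_inner_darts: "card inner_darts \<le> 4 * k"
proof -
  have sub: "inner_darts \<subseteq> (\<lambda>(s, i). (s, (\<not> s, i))) ` (UNIV \<times> {..<2*k})"
    unfolding inner_darts_def at_boundary_def verts_iff by (auto simp: image_iff)
  have "card inner_darts \<le> card (UNIV \<times> {..<2*k} :: (bool \<times> nat) set)"
    by (rule surj_card_le[OF _ sub]) simp
  then show ?thesis by (simp add: card_cartesian_product)
qed

text \<open>The walk can be retraced with \<open>unstep\<close> as long as it stays inside, so it cannot
revisit a dart before returning to the boundary.\<close>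

lemma walk_inj_before_boundary:
  assumes v: "v \<in> verts k" and inner: "\<And>j. 0 < j \<Longrightarrow> j \<le> M \<Longrightarrow>
      \<not> at_boundary (walk v j)"
  shows "inj_on (walk v) {..M}"
proof (rule linorder_inj_onI')
  have retrace: "unstep (walk v (Suc m)) = walk v m" if "Suc m \<le> M" for m
  proof -
    have "walk v (Suc m) = step (walk v m)" using inner[of m] that by auto
    then show ?thesis using unstep_step[OF walk_verts[OF v]] inner[of "Suc m"] that by simp
  qed
  fix p q assume pq: "p \<in> {..M}" "q \<in> {..M}" "p < q"
  show "walk v p \<noteq> walk v q"
  proof
    assume eq: "walk v p = walk v q"
    have "walk v (p - j) = walk v (q - j)" if "j \<le> p" for j
      using that
    proof (induction j)
      case (Suc j)
      have "p - j = Suc (p - Suc j)" "q - j = Suc (q - Suc j)" using Suc.prems pq by auto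
      then show ?case using Suc retrace[of "p - Suc j"] retrace[of "q - Suc j"] pq by auto
    qed (use eq in simp)
    then have "walk v 0 = walk v (q - p)" by (metis diff_self_eq_0 order_refl)
    then have "at_boundary (walk v (q - p))" by (metis walk_0_at_boundary)
    moreover have "0 < q - p" "q - p \<le> M" using pq by auto
    ultimately show False using inner by blast
  qed
qed

lemma walk_terminates:
  assumes v: "v \<in> verts k"
  shows "\<exists>m. 0 < m \<and> m \<le> 4*k+1 \<and> at_boundary (walk v m)"
proof (rule ccontr)
  assume "\<not> ?thesis"
  then have inner: "\<And>j. 0 < j \<Longrightarrow> j \<le> 4*k+1 \<Longrightarrow>
      \<not> at_boundary (walk v j)" by auto
  have "inj_on (walk v) {1..4*k+1}"
    by (rule inj_on_subset[OF walk_inj_before_boundary[OF v inner]]) auto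
  moreover have "walk v ` {1..4*k+1} \<subseteq> inner_darts"
    using inner walk_verts[OF v] unfolding inner_darts_def by auto
  ultimately have "card {1..4*k+1} \<le> card inner_darts"
    using card_inj_on_le finite_inner_darts by blast
  then show False using card_inner_darts by simp
qed

declare walk.simps(2)[simp del]

definition walk_len :: "vtx \<Rightarrow> nat" where "walk_len v = (LEAST m. 0 < m \<and> at_boundary (walk v m))"

lemma walk_len_props:
  assumes v: "v \<in> verts k"
  shows "0 < walk_len v" "walk_len v \<le> 4*k+1" "at_boundary (walk v (walk_len v))" "\<And>m. 0 < m
      \<Longrightarrow> m < walk_len v \<Longrightarrow> \<not> at_boundary (walk v m)"
proof -
  obtain m0 where m0: "0 < m0" "m0 \<le> 4*k+1" "at_boundary (walk v m0)" using walk_terminates[OF v] by blast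
  have "0 < walk_len v \<and> at_boundary (walk v (walk_len v))" unfolding walk_len_def
    by (rule LeastI[of _ m0]) (use m0 in auto)
  then show "0 < walk_len v" "at_boundary (walk v (walk_len v))" by auto
  show "walk_len v \<le> 4*k+1" using Least_le[of "\<lambda>m. 0 < m \<and>
      at_boundary (walk v m)" m0] m0 unfolding walk_len_def by simp
  fix m assume "0 < m" "m < walk_len v"
  then show "\<not> at_boundary (walk v m)"
    using not_less_Least[of m "\<lambda>m. 0 < m \<and> at_boundary (walk v m)"] unfolding walk_len_def
    by auto
qed

lemma walk_Suc: "v \<in> verts k \<Longrightarrow> m < walk_len v \<Longrightarrow> walk v (Suc m) = step (walk v m)"
  using walk_len_props(4)[of v m] by (auto simp: walk.simps(2))

definition endpoint :: "vtx \<Rightarrow> vtx" where "endpoint v = snd (walk v (walk_len v))"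

lemma endpoint_verts: "v \<in> verts k \<Longrightarrow> endpoint v \<in> verts k"
  unfolding endpoint_def by (rule walk_verts)

lemma polarity_step: "snd u \<in> verts k \<Longrightarrow>
   polarity k (snd (step u)) = (if at_boundary (step u) then \<not> polarity k (snd u) else polarity k (snd u))"
proof -
  assume x: "snd u \<in> verts k"
  obtain s x where u: "u = (s, x)" by (cases u)
  have py: "polarity k (layer s x) = (\<not> polarity k x)" using WB_D(4)[OF layer_WB] x u by simp
  show ?thesis unfolding step_def Let_def u at_boundary_def using py
    by (cases "layer s x") (auto simp: polarity_def)
qed

lemma polarity_walk: "v \<in> verts k \<Longrightarrow> m < walk_len v \<Longrightarrow>
    polarity k (snd (walk v m)) = polarity k v"
proof (induction m)
  case 0 then show ?case by simp
next
  case (Suc m)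
  have "walk v (Suc m) = step (walk v m)" using walk_Suc Suc by auto
  moreover have "\<not> at_boundary (walk v (Suc m))" using walk_len_props(4)[of v "Suc m"] Suc by auto
  ultimately show ?case using polarity_step[OF walk_verts[OF Suc(2)], of m] Suc by auto
qed

lemma polarity_endpoint: "v \<in> verts k \<Longrightarrow> polarity k (endpoint v) = (\<not> polarity k v)"
proof -
  assume v: "v \<in> verts k"
  obtain m where m: "walk_len v = Suc m" using walk_len_props(1)[OF v] gr0_implies_Suc by blast
  have "walk v (walk_len v) = step (walk v m)" using walk_Suc[OF v, of m] m by auto
  then show ?thesis unfolding endpoint_def
    using polarity_step[OF walk_verts[OF v], of m] walk_len_props(3)[OF v] polarity_walk[OF v, of m] m by auto
qed

lemma endpoint_neq: "v \<in> verts k \<Longrightarrow> endpoint v \<noteq> v"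
proof
  assume "v \<in> verts k" "endpoint v = v"
  then show False using polarity_endpoint[of v] by simp
qed

lemma lift_eq_stack_pos: "lift w = stack_pos (fst w, w)"
  unfolding lift_def stack_pos_def by auto

lemma stack_pos_step: "stack_pos (step u) = stack_pos (fst u, layer (fst u) (snd u))"
  unfolding step_def Let_def stack_pos_def by (auto split: if_splits)

abbreviation SE :: "((nat \<times> nat) \<times> (nat \<times> nat)) set" where "SE \<equiv> stack_edges k d1 d2"

lemma stack_edges_iff:
  "(u, u') \<in> SE \<longleftrightarrow> (\<exists>t z. z \<in> verts k \<and> u =
      stack_pos (t, z) \<and> u' = stack_pos (t, layer t z))"
proof
  assume "(u, u') \<in> SE"
  then show "\<exists>t z. z \<in> verts k \<and> u = stack_pos (t, z) \<and> u' = stack_pos (t, layer t z)"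
    unfolding stack_edges_def
  proof (elim UnE CollectE exE conjE)
    fix v assume "(u, u') = ((if fst v then 0 else 1, snd v), if fst (d1 v) then 0 else 1, snd (d1 v))"
      "v \<in> verts k"
    then show ?thesis by (intro exI[of _ True] exI[of _ v]) (auto simp: stack_pos_def layer_def)
  next
    fix v assume "(u, u') = ((if fst v then 1 else 2, snd v), if fst (d2 v) then 1 else 2, snd (d2 v))"
      "v \<in> verts k"
    then show ?thesis by (intro exI[of _ False] exI[of _ v]) (auto simp: stack_pos_def layer_def)
  qed
next
  assume "\<exists>t z. z \<in> verts k \<and> u = stack_pos (t, z) \<and> u' = stack_pos (t, layer t z)"
  then obtain t z where "z \<in> verts k" "u = stack_pos (t, z)" "u' = stack_pos (t, layer t z)" by blast
  then show "(u, u') \<in> SE"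
  proof (cases t)
    case True
    then have "(u, u') = ((if fst z then 0 else 1, snd z), (if fst (d1 z) then 0 else 1, snd (d1 z)))"
      using \<open>u = stack_pos (t, z)\<close> \<open>u' = stack_pos (t, layer t z)\<close>
        by (simp add: stack_pos_def layer_def)
    then show ?thesis unfolding stack_edges_def using \<open>z \<in> verts k\<close> by blast
  next
    case False
    then have "(u, u') = ((if fst z then 1 else 2, snd z), (if fst (d2 z) then 1 else 2, snd (d2 z)))"
      using \<open>u = stack_pos (t, z)\<close> \<open>u' = stack_pos (t, layer t z)\<close>
        by (simp add: stack_pos_def layer_def)
    then show ?thesis unfolding stack_edges_def using \<open>z \<in> verts k\<close> by blast
  qed
qed

lemma stack_edges_sym_iff:
  "(u, u') \<in> SE \<union> SE\<inverse> \<longleftrightarrow> (\<exists>t z. z \<in> verts k \<and> u =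
      stack_pos (t, z) \<and> u' = stack_pos (t, layer t z))"
proof -
  have "\<exists>t z. z \<in> verts k \<and> u = stack_pos (t, z) \<and> u' = stack_pos (t, layer t z)"
      if rev: "(u', u) \<in> SE"
  proof -
    obtain t z where z: "z \<in> verts k" "u' = stack_pos (t, z)" "u = stack_pos (t, layer t z)"
      using rev stack_edges_iff by blast
    show ?thesis
      by (rule exI[of _ t], rule exI[of _ "layer t z"])
        (simp add: z WB_D(1)[OF layer_WB z(1)] WB_involution[OF layer_WB])
  qed
  then show ?thesis using stack_edges_iff by blast
qed

lemma stack_pos_eqD:
  "stack_pos (t, z) = stack_pos u \<Longrightarrow>
    (t, z) = u \<or> ((t, z) = (\<not> fst u, (\<not> fst (snd u), snd (snd u))) \<and> \<not> at_boundary u)"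
  unfolding stack_pos_def at_boundary_def by (cases u; cases z; cases t) (auto split: if_splits)

lemma at_boundary_iff_level: "at_boundary u \<longleftrightarrow> fst (stack_pos u) \<noteq> 1"
  unfolding stack_pos_def at_boundary_def by (cases u) auto

definition walk_trace :: "vtx \<Rightarrow> (nat \<times> nat) set" where
  "walk_trace v = stack_pos ` walk v ` {..walk_len v}"

lemma walk_trace_mem: "m \<le> walk_len v \<Longrightarrow> stack_pos (walk v m) \<in> walk_trace v"
  unfolding walk_trace_def by auto

lemma walk_edge:
  "v \<in> verts k \<Longrightarrow> m < walk_len v \<Longrightarrow>
      (stack_pos (walk v m), stack_pos (walk v (Suc m))) \<in> SE \<union> SE\<inverse>"
  unfolding stack_edges_sym_iff walk_Suc stack_pos_step
  by (intro exI[of _ "fst (walk v m)"] exI[of _ "snd (walk v m)"]) (simp add: walk_verts)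

lemma walk_trace_edge_forward:
  assumes v: "v \<in> verts k" and m: "m \<le> walk_len v" and tz: "(t, z) = walk v m"
  shows "stack_pos (t, layer t z) \<in> walk_trace v"
proof (cases "m < walk_len v")
  case True
  then have "stack_pos (t, layer t z) = stack_pos (walk v (Suc m))"
    using walk_Suc[OF v True] stack_pos_step[of "walk v m"] tz by (metis fst_conv snd_conv)
  then show ?thesis using walk_trace_mem[of "Suc m" v] True by simp
next
  case False
  then have mN: "m = walk_len v" using m by auto
  obtain m' where m': "walk_len v = Suc m'" using walk_len_props(1)[OF v] gr0_implies_Suc by blast
  obtain s x where sx: "walk v m' = (s, x)" by (cases "walk v m'")
  have w: "walk v (walk_len v) = step (s, x)" using walk_Suc[OF v, of m'] m' sx by auto
  then have "at_boundary (step (s, x))" using walk_len_props(3)[OF v] by simp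
  then have "step (s, x) = (s, layer s x)" unfolding step_def Let_def at_boundary_def
    by (auto split: if_splits)
  then have "stack_pos (t, layer t z) = stack_pos (walk v m')"
    using tz mN w sx WB_involution[OF layer_WB] by auto
  then show ?thesis using walk_trace_mem[of m' v] m' by simp
qed

text \<open>An inner dart in the middle row is also seen from the other layer; the edge of that layer leads
back to the previous dart of the walk.\<close>

lemma walk_trace_edge_backward:
  assumes v: "v \<in> verts k" and m: "m \<le> walk_len v" and inner: "\<not> at_boundary (walk v m)"
    and tz: "(t, z) = (\<not> fst (walk v m), (\<not> fst (snd (walk v m)), snd (snd (walk v m))))"
  shows "stack_pos (t, layer t z) \<in> walk_trace v"
proof -
  have "m \<noteq> 0"
  proof
    assume "m = 0"
    then show False using inner walk_0_at_boundary[of v] by simp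
  qed
  then obtain m' where m': "m = Suc m'" using not0_implies_Suc by blast
  have mN: "m \<noteq> walk_len v" using inner walk_len_props(3)[OF v] by auto
  obtain s x where sx: "walk v m' = (s, x)" by (cases "walk v m'")
  obtain b i where y: "layer s x = (b, i)" by (cases "layer s x")
  have w: "walk v m = step (s, x)" using walk_Suc[OF v, of m'] m' m mN sx by auto
  then have "step (s, x) = (\<not> s, (\<not> b, i))" using inner y unfolding step_def Let_def at_boundary_def
    by (auto split: if_splits)
  then have "(t, z) = (s, (b, i))" using tz w by simp
  then have "stack_pos (t, layer t z) = stack_pos (walk v m')"
    using WB_involution[OF layer_WB, of s x] y sx by auto
  then show ?thesis using walk_trace_mem[of m' v] m m' by simp
qed

lemma walk_trace_closed:
  assumes v: "v \<in> verts k" and u: "u \<in> walk_trace v" and e: "(u, u') \<in> SE \<union> SE\<inverse>"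
  shows "u' \<in> walk_trace v"
proof -
  obtain m where m: "m \<le> walk_len v" "u = stack_pos (walk v m)" using u unfolding walk_trace_def by auto
  obtain t z where tz: "u = stack_pos (t, z)" "u' = stack_pos (t, layer t z)"
    using e stack_edges_sym_iff by blast
  show ?thesis
    using stack_pos_eqD[of t z "walk v m"] tz m walk_trace_edge_forward[OF v m(1)]
      walk_trace_edge_backward[OF v m(1)] by metis
qed

lemma conn_walk_trace:
  assumes v: "v \<in> verts k" and c: "(lift v, u) \<in> stack_conn k d1 d2"
  shows "u \<in> walk_trace v"
proof -
  have "(lift v, u) \<in> (SE \<union> SE\<inverse>)\<^sup>*" using c unfolding stack_conn_def .
  then show ?thesis
  proof (induction rule: rtrancl_induct)
    case base then show ?case using walk_trace_mem[of 0 v] by (simp add: lift_eq_stack_pos)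
  next
    case (step y z) then show ?case using walk_trace_closed[OF v] by blast
  qed
qed

lemma conn_walk: "v \<in> verts k \<Longrightarrow> m \<le> walk_len v \<Longrightarrow>
    (lift v, stack_pos (walk v m)) \<in> stack_conn k d1 d2"
proof (induction m)
  case 0 then show ?case unfolding stack_conn_def lift_eq_stack_pos by simp
next
  case (Suc m)
  then have "(lift v, stack_pos (walk v m)) \<in> stack_conn k d1 d2" by simp
  then show ?case unfolding stack_conn_def using walk_edge[of v m] Suc by (simp add: rtrancl_into_rtrancl)
qed

lemma conn_sym: "(x, y) \<in> stack_conn k d1 d2 \<Longrightarrow> (y, x) \<in> stack_conn k d1 d2"
  unfolding stack_conn_def using sym_rtrancl[OF sym_Un_converse[of SE]] by (meson symD)

lemma conn_endpoint: "v \<in> verts k \<Longrightarrow> (lift v, lift (endpoint v)) \<in> stack_conn k d1 d2"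
proof -
  assume v: "v \<in> verts k"
  have "walk v (walk_len v) = (fst (endpoint v), endpoint v)"
    using walk_len_props(3)[OF v] unfolding endpoint_def at_boundary_def by (simp add: prod_eq_iff)
  then show ?thesis using conn_walk[OF v, of "walk_len v"] by (simp add: lift_eq_stack_pos)
qed

lemma conn_boundary_unique:
  assumes v: "v \<in> verts k" and w: "w \<in> verts k" "w \<noteq> v"
      and c: "(lift v, lift w) \<in> stack_conn k d1 d2"
  shows "w = endpoint v"
proof -
  have "lift w \<in> walk_trace v" using conn_walk_trace[OF v c] .
  then obtain m where m: "m \<le> walk_len v" "stack_pos (fst w, w) = stack_pos (walk v m)"
    unfolding walk_trace_def lift_eq_stack_pos by auto
  have bw: "at_boundary (fst w, w)" by (simp add: at_boundary_def)
  have "(fst w, w) = walk v m"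
    using stack_pos_eqD[OF m(2)] bw by (auto simp: at_boundary_def)
  then have bm: "at_boundary (walk v m)" using bw by simp
  have "m = 0 \<or> m = walk_len v" using walk_len_props(4)[OF v, of m] bm m(1) by linarith
  then show ?thesis using \<open>(fst w, w) = walk v m\<close> w(2) unfolding endpoint_def
    by (metis snd_conv walk.simps(1))
qed

lemma compose_eq_endpoint: "v \<in> verts k \<Longrightarrow> compose k d1 d2 v = endpoint v"
proof -
  assume v: "v \<in> verts k"
  have "(THE w. w \<in> verts k \<and> w \<noteq> v \<and> (lift v, lift w) \<in> stack_conn k d1 d2) = endpoint v"
  proof (rule the_equality)
    show "endpoint v \<in> verts k \<and> endpoint v \<noteq> v \<and>
        (lift v, lift (endpoint v)) \<in> stack_conn k d1 d2"
      using endpoint_verts[OF v] endpoint_neq[OF v] conn_endpoint[OF v] by blast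
    fix w assume "w \<in> verts k \<and> w \<noteq> v \<and> (lift v, lift w) \<in> stack_conn k d1 d2"
    then show "w = endpoint v" using conn_boundary_unique[OF v, of w] by blast
  qed
  then show ?thesis by (simp add: compose_def v)
qed

lemma endpoint_endpoint: "v \<in> verts k \<Longrightarrow> endpoint (endpoint v) = v"
proof -
  assume v: "v \<in> verts k"
  let ?w = "endpoint v"
  show ?thesis
    using conn_boundary_unique[of ?w v] endpoint_verts[OF v] v endpoint_neq[OF v] conn_sym[OF conn_endpoint[OF v]]
    by auto
qed

lemma compose_WB: "compose k d1 d2 \<in> WB k"
proof (rule WB_I)
  fix v assume v: "v \<in> verts k"
  show "compose k d1 d2 v \<in> verts k" using compose_eq_endpoint[OF v] endpoint_verts[OF v] by simp
  show "compose k d1 d2 (compose k d1 d2 v) = v"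
    using compose_eq_endpoint[OF v] compose_eq_endpoint[OF endpoint_verts[OF v]] endpoint_endpoint[OF v] by simp
  show "polarity k (compose k d1 d2 v) = (\<not> polarity k v)"
    using compose_eq_endpoint[OF v] polarity_endpoint[OF v] by simp
next
  fix v assume "v \<notin> verts k" then show "compose k d1 d2 v = v" unfolding compose_def by simp
qed

section \<open>Compatible middle rows\<close>

abbreviation conn :: "((nat \<times> nat) \<times> (nat \<times> nat)) set" where "conn \<equiv> stack_conn k d1 d2"

definition level_label :: "(nat \<Rightarrow> nat) \<Rightarrow> (nat \<Rightarrow> nat) \<Rightarrow>
    (nat \<Rightarrow> nat) \<Rightarrow> nat \<times> nat \<Rightarrow> nat" where
  "level_label a b c u = (if fst u = 0 then b (snd u) else if fst u = 1 then c (snd u) else a (snd u))"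

lemma level_label_lift: "level_label a b c (lift w) = vlab a b w"
  unfolding level_label_def lift_def vlab_def by auto

lemma level_label_upper: "level_label a b c (stack_pos (True, x)) = vlab c b x"
  unfolding level_label_def stack_pos_def vlab_def by auto

lemma level_label_lower: "level_label a b c (stack_pos (False, x)) = vlab a c x"
  unfolding level_label_def stack_pos_def vlab_def by auto

definition compatible :: "(nat \<Rightarrow> nat) \<Rightarrow> (nat \<Rightarrow> nat) \<Rightarrow>
    (nat \<Rightarrow> nat) \<Rightarrow> bool" where
  "compatible a b c \<longleftrightarrow> delta k d1 c b \<and> delta k d2 a c"

lemma compatible_edge: "compatible a b c \<Longrightarrow>
    (u, u') \<in> SE \<union> SE\<inverse> \<Longrightarrow> level_label a b c u = level_label a b c u'"
proof -
  assume val: "compatible a b c" and e: "(u, u') \<in> SE \<union> SE\<inverse>"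
  obtain t z where tz: "z \<in> verts k" "u = stack_pos (t, z)" "u' = stack_pos (t, layer t z)"
    using e stack_edges_sym_iff by blast
  show ?thesis
  proof (cases t)
    case True
    then show ?thesis using val tz unfolding compatible_def delta_def by (simp add: level_label_upper layer_def)
  next
    case False
    then show ?thesis using val tz unfolding compatible_def delta_def by (simp add: level_label_lower layer_def)
  qed
qed

lemma compatible_conn: "compatible a b c \<Longrightarrow> (u, u') \<in> conn \<Longrightarrow>
    level_label a b c u = level_label a b c u'"
proof -
  assume val: "compatible a b c" and "(u, u') \<in> conn"
  then have "(u, u') \<in> (SE \<union> SE\<inverse>)\<^sup>*" unfolding stack_conn_def by simp
  then show ?thesis
  proof (induction rule: rtrancl_induct)
    case base then show ?case by simp
  next
    case (step y z) then show ?case using compatible_edge[OF val] by metis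
  qed
qed

lemma compatibleI:
  assumes "\<And>u u'. (u, u') \<in> SE \<Longrightarrow> level_label a b c u = level_label a b c u'"
  shows "compatible a b c"
proof -
  have "delta k d1 c b" unfolding delta_def
  proof
    fix x assume x: "x \<in> verts k"
    have "(stack_pos (True, x), stack_pos (True, layer True x)) \<in> SE" using stack_edges_iff x by blast
    then show "vlab c b (d1 x) = vlab c b x" using assms level_label_upper by (metis layer_def)
  qed
  moreover have "delta k d2 a c" unfolding delta_def
  proof
    fix x assume x: "x \<in> verts k"
    have "(stack_pos (False, x), stack_pos (False, layer False x)) \<in> SE" using stack_edges_iff x by blast
    then show "vlab a c (d2 x) = vlab a c x" using assms level_label_lower by (metis layer_def)
  qed
  ultimately show ?thesis unfolding compatible_def by simp
qed

lemma compatible_delta_compose: "compatible a b c \<Longrightarrow> delta k (compose k d1 d2) a b"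
  unfolding delta_def
proof
  fix v assume val: "compatible a b c" and v: "v \<in> verts k"
  have "level_label a b c (lift v) = level_label a b c (lift (endpoint v))"
    using compatible_conn[OF val conn_endpoint[OF v]] .
  then show "vlab a b (compose k d1 d2 v) = vlab a b v" using compose_eq_endpoint[OF v] level_label_lift by metis
qed

lemma conn_refl: "(x, x) \<in> conn" unfolding stack_conn_def by simp

lemma conn_trans: "(x, y) \<in> conn \<Longrightarrow> (y, z) \<in> conn \<Longrightarrow> (x, z) \<in> conn"
  unfolding stack_conn_def by simp

lemma conn_class_eq: "(x, y) \<in> conn \<Longrightarrow> conn `` {x} = conn `` {y}"
  using conn_trans conn_sym by blast

lemma conn_target_cases: "(x, u) \<in> conn \<Longrightarrow> u = x \<or>
    (\<exists>t z. z \<in> verts k \<and> u = stack_pos (t, z))"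
proof -
  assume "(x, u) \<in> conn"
  then have "(x, u) \<in> (SE \<union> SE\<inverse>)\<^sup>*" unfolding stack_conn_def by simp
  then show ?thesis
  proof (induction rule: rtrancl_induct)
    case base then show ?case by simp
  next
    case (step y z)
    then obtain t w where "w \<in> verts k" "z = stack_pos (t, layer t w)" using stack_edges_sym_iff by blast
    then show ?case using WB_D(1)[OF layer_WB] by blast
  qed
qed

definition loops :: "(nat \<times> nat) set set" where
  "loops = {C. \<exists>i<2*k. C = conn `` {(1, i)} \<and> C \<subseteq> {1} \<times> {..<2*k}}"

lemma cycles_eq_card_loops: "cycles k d1 d2 = card loops"
  unfolding cycles_def loops_def by simp

lemma finite_loops: "finite loops"
proof -
  have "loops \<subseteq> (\<lambda>i. conn `` {(1, i)}) ` {..<2*k}" unfolding loops_def by auto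
  then show ?thesis using finite_subset by blast
qed

lemma loops_iff: "j < 2*k \<Longrightarrow> conn `` {(1, j)} \<in> loops \<longleftrightarrow>
    conn `` {(1, j)} \<subseteq> {1} \<times> {..<2*k}"
  unfolding loops_def by auto

lemma non_loop_reaches_boundary:
  assumes j: "j < 2*k" and nc: "conn `` {(1, j)} \<notin> loops"
  shows "\<exists>w\<in>verts k. ((1, j), lift w) \<in> conn"
proof -
  obtain u where u: "u \<in> conn `` {(1, j)}" "u \<notin> {1} \<times> {..<2*k}" using nc loops_iff[OF j] by auto
  have "u \<noteq> (1, j)" using u j by auto
  then obtain t z where tz: "z \<in> verts k" "u = stack_pos (t, z)" using conn_target_cases u by blast
  have "snd (stack_pos (t, z)) < 2*k" using tz(1) verts_iff[of z k] by (simp add: stack_pos_def)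
  then have "fst (stack_pos (t, z)) \<noteq> 1" using u(2) tz(2) by (cases "stack_pos (t, z)") auto
  then have "at_boundary (t, z)" using at_boundary_iff_level by simp
  then have "u = lift z" using tz unfolding lift_eq_stack_pos at_boundary_def by auto
  then show ?thesis using tz u by auto
qed

definition loop_rep :: "(nat \<times> nat) set \<Rightarrow> nat" where
  "loop_rep C = (SOME i. i < 2*k \<and> (1, i) \<in> C)"

lemma loop_rep: "C \<in> loops \<Longrightarrow> loop_rep C < 2*k \<and> (1, loop_rep C) \<in> C \<and>
    conn `` {(1, loop_rep C)} = C"
proof -
  assume "C \<in> loops"
  then obtain i where i: "i < 2*k" "C = conn `` {(1, i)}" unfolding loops_def by auto
  have "i < 2*k \<and> (1, i) \<in> C" using i conn_refl by auto
  then have r: "loop_rep C < 2*k \<and> (1, loop_rep C) \<in> C" unfolding loop_rep_def by (rule someI)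
  then have "((1, i), (1, loop_rep C)) \<in> conn" using i by auto
  then have "conn `` {(1, loop_rep C)} = C" using conn_class_eq conn_sym i by metis
  then show ?thesis using r by simp
qed

lemma stack_pos_cases: "z \<in> verts k \<Longrightarrow> stack_pos (t, z) = lift z \<or>
    (stack_pos (t, z) = (1, snd z) \<and> snd z < 2*k)"
  unfolding stack_pos_def lift_def verts_iff by (cases t; cases z) auto

lemma lift_not_middle: "lift w \<notin> {1} \<times> X"
  unfolding lift_def by auto

text \<open>A compatible middle row is constant on the components of the stacked picture: components meeting
the boundary inherit the colour of \<open>a\<close> and \<open>b\<close>, and each closed loop can
be coloured freely.\<close>

context
  fixes n :: nat and a b :: "nat \<Rightarrow> nat"
  assumes a: "a \<in> Idx n k" and b: "b \<in> Idx n k" and dl: "delta k (compose k d1 d2) a b"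
begin

lemma vlab_conn_boundary: "w0 \<in> verts k \<Longrightarrow> w \<in> verts k \<Longrightarrow>
    (lift w0, lift w) \<in> conn \<Longrightarrow> vlab a b w = vlab a b w0"
proof -
  assume w0: "w0 \<in> verts k" and w: "w \<in> verts k" and c: "(lift w0, lift w) \<in> conn"
  show ?thesis
  proof (cases "w = w0")
    case False
    then have "w = endpoint w0" using conn_boundary_unique[OF w0 w False c] by simp
    moreover have "vlab a b (compose k d1 d2 w0) = vlab a b w0" using dl w0 unfolding delta_def by blast
    ultimately show ?thesis using compose_eq_endpoint[OF w0] by simp
  qed simp
qed

lemma vlab_less: "w \<in> verts k \<Longrightarrow> vlab a b w < n"
  using a b unfolding Idx_def vlab_def verts_iff by auto

lemma compatible_eqI:
  assumes c1: "c1 \<in> Idx n k" "compatible a b c1" and c2: "c2 \<in> Idx n k" "compatible a b c2"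
    and eq: "\<And>C. C \<in> loops \<Longrightarrow> c1 (loop_rep C) = c2 (loop_rep C)"
  shows "c1 = c2"
proof
  fix j show "c1 j = c2 j"
  proof (cases "j < 2*k")
    case False then show ?thesis using c1 c2 unfolding Idx_def by auto
  next
    case j: True
    show ?thesis
    proof (cases "\<exists>w\<in>verts k. ((1, j), lift w) \<in> conn")
      case True
      then obtain w where w: "w \<in> verts k" "((1, j), lift w) \<in> conn" by blast
      have "c1 j = level_label a b c1 (1, j)" by (simp add: level_label_def)
      also have "\<dots> = vlab a b w" using compatible_conn[OF c1(2) w(2)] level_label_lift by simp
      also have "\<dots> = level_label a b c2 (1, j)" using compatible_conn[OF c2(2) w(2)] level_label_lift by simp
      also have "\<dots> = c2 j" by (simp add: level_label_def)
      finally show ?thesis .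
    next
      case False
      then have C: "conn `` {(1, j)} \<in> loops" using non_loop_reaches_boundary[OF j] by blast
      from loop_rep[OF C] have r: "((1, j), (1, loop_rep (conn `` {(1, j)}))) \<in> conn" by auto
      have "c1 j = level_label a b c1 (1, loop_rep (conn `` {(1, j)}))" using compatible_conn[OF c1(2) r]
        by (simp add: level_label_def)
      also have "\<dots> = level_label a b c2 (1, loop_rep (conn `` {(1, j)}))" using eq[OF C]
        by (simp add: level_label_def)
      also have "\<dots> = c2 j" using compatible_conn[OF c2(2) r] by (simp add: level_label_def)
      finally show ?thesis .
    qed
  qed
qed

context
  fixes h assumes h: "h \<in> loops \<rightarrow>\<^sub>E {..<n}"
begin

definition extend_col :: "nat \<Rightarrow> nat" where
  "extend_col j = (if j < 2*k then (if conn `` {(1, j)} \<in> loops then h (conn `` {(1, j)})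
           else vlab a b (SOME w. w \<in> verts k \<and> ((1, j), lift w) \<in> conn)) else 0)"

lemma extend_col_Idx: "extend_col \<in> Idx n k"
  unfolding Idx_def
proof (intro CollectI conjI allI impI)
  fix i assume i: "i < 2*k"
  show "extend_col i < n"
  proof (cases "conn `` {(1, i)} \<in> loops")
    case True then show ?thesis using h i unfolding extend_col_def by auto
  next
    case False
    then obtain w where "w \<in> verts k \<and> ((1, i), lift w) \<in> conn"
      using non_loop_reaches_boundary[OF i] by blast
    then have "(SOME w. w \<in> verts k \<and> ((1, i), lift w) \<in> conn) \<in> verts k"
      by (metis (mono_tags, lifting) someI)
    then show ?thesis using False i vlab_less unfolding extend_col_def by auto
  qed
next
  fix i assume "2*k \<le> i" then show "extend_col i = 0" unfolding extend_col_def by auto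
qed

lemma level_label_extend_col_boundary: "z \<in> verts k \<Longrightarrow>
    w \<in> verts k \<Longrightarrow> (stack_pos (t, z), lift w) \<in> conn \<Longrightarrow>
    level_label a b extend_col (stack_pos (t, z)) = vlab a b w"
proof -
  assume z: "z \<in> verts k" and w: "w \<in> verts k" and c: "(stack_pos (t, z), lift w) \<in> conn"
  show ?thesis
  proof (cases "stack_pos (t, z) = lift z")
    case True
    then have "(lift w, lift z) \<in> conn" using c conn_sym by metis
    then show ?thesis using True level_label_lift vlab_conn_boundary[OF w z] by metis
  next
    case False
    then have g: "stack_pos (t, z) = (1, snd z)" and j: "snd z < 2*k" using stack_pos_cases[OF z, of t] by auto
    have nc: "conn `` {(1, snd z)} \<notin> loops"
    proof
      assume "conn `` {(1, snd z)} \<in> loops"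
      then have "conn `` {(1, snd z)} \<subseteq> {1} \<times> {..<2*k}" using loops_iff[OF j] by simp
      moreover have "lift w \<in> conn `` {(1, snd z)}" using c g by simp
      ultimately show False using lift_not_middle by blast
    qed
    have ex: "w \<in> verts k \<and> ((1, snd z), lift w) \<in> conn" using w c g by simp
    define w' where "w' = (SOME w. w \<in> verts k \<and> ((1, snd z), lift w) \<in> conn)"
    have w': "w' \<in> verts k \<and> ((1, snd z), lift w') \<in> conn" unfolding w'_def using ex by (rule someI)
    have "(lift w, lift w') \<in> conn" using w' ex conn_sym conn_trans by metis
    then have "vlab a b w' = vlab a b w" using vlab_conn_boundary[OF w] w' by simp
    moreover have "extend_col (snd z) = vlab a b w'" unfolding extend_col_def w'_def using j nc by simp
    ultimately show ?thesis using g unfolding level_label_def by simp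
  qed
qed

lemma level_label_extend_col_loop: "z \<in> verts k \<Longrightarrow>
    (\<forall>w\<in>verts k. (stack_pos (t, z), lift w) \<notin> conn) \<Longrightarrow>
    level_label a b extend_col (stack_pos (t, z)) = h (conn `` {stack_pos (t, z)})"
proof -
  assume z: "z \<in> verts k" and nw: "\<forall>w\<in>verts k. (stack_pos (t, z), lift w) \<notin> conn"
  have "stack_pos (t, z) \<noteq> lift z" using nw z conn_refl by metis
  then have g: "stack_pos (t, z) = (1, snd z)" and j: "snd z < 2*k" using stack_pos_cases[OF z, of t] by auto
  have "conn `` {(1, snd z)} \<in> loops" using non_loop_reaches_boundary[OF j] nw g by metis
  then show ?thesis using g j unfolding level_label_def extend_col_def by simp
qed

lemma compatible_extend_col: "compatible a b extend_col"
proof (rule compatibleI)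
  fix u u' assume e: "(u, u') \<in> SE"
  obtain t z where tz: "z \<in> verts k" "u = stack_pos (t, z)" "u' = stack_pos (t, layer t z)"
    using e stack_edges_iff by blast
  have z': "layer t z \<in> verts k" using WB_D(1)[OF layer_WB tz(1)] .
  have uu: "(u, u') \<in> conn" using e unfolding stack_conn_def by auto
  show "level_label a b extend_col u = level_label a b extend_col u'"
  proof (cases "\<exists>w\<in>verts k. (u, lift w) \<in> conn")
    case True
    then obtain w where w: "w \<in> verts k" "(u, lift w) \<in> conn" by blast
    have "(u', lift w) \<in> conn" using w uu conn_sym conn_trans by metis
    then show ?thesis using level_label_extend_col_boundary[OF tz(1) w(1)]
        level_label_extend_col_boundary[OF z' w(1)] w tz by simp
  next
    case False
    have F': "\<forall>w\<in>verts k. (u', lift w) \<notin> conn" using False uu conn_trans by metis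
    have "conn `` {u} = conn `` {u'}" using conn_class_eq[OF uu] .
    then show ?thesis using level_label_extend_col_loop[OF tz(1)] level_label_extend_col_loop[OF z']
        False F' tz by simp
  qed
qed

lemma extend_col_loop_rep: "C \<in> loops \<Longrightarrow> extend_col (loop_rep C) = h C"
  using loop_rep[of C] unfolding extend_col_def by auto

end

lemma card_compatible: "card {c \<in> Idx n k. compatible a b c} = n ^ card loops"
proof -
  let ?A = "{c \<in> Idx n k. compatible a b c}"
  let ?F = "\<lambda>c. restrict (\<lambda>C. c (loop_rep C)) loops"
  have "bij_betw ?F ?A (loops \<rightarrow>\<^sub>E {..<n})"
  proof (rule bij_betwI')
    fix x y assume "x \<in> ?A" "y \<in> ?A"
    then show "(?F x = ?F y) = (x = y)"
      using compatible_eqI[of x y] by (auto simp: fun_eq_iff)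
  next
    fix x assume x: "x \<in> ?A"
    show "?F x \<in> loops \<rightarrow>\<^sub>E {..<n}"
    proof
      fix C assume "C \<in> loops"
      then have "loop_rep C < 2*k" using loop_rep by blast
      then show "?F x C \<in> {..<n}" using x \<open>C \<in> loops\<close> unfolding Idx_def by auto
    qed auto
  next
    fix h assume h: "h \<in> loops \<rightarrow>\<^sub>E {..<n}"
    show "\<exists>x\<in>?A. h = ?F x"
    proof (intro bexI)
      show "extend_col h \<in> ?A" using extend_col_Idx[OF h] compatible_extend_col[OF h] by simp
      show "h = ?F (extend_col h)"
      proof
        fix C show "h C = ?F (extend_col h) C"
          using extend_col_loop_rep[OF h, of C] h by (cases "C \<in> loops") (auto simp: PiE_def extensional_def)
      qed
    qed
  qed
  then have "card ?A = card (loops \<rightarrow>\<^sub>E {..<n})" by (rule bij_betw_same_card)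
  also have "\<dots> = n ^ card loops" using finite_loops by (simp add: card_PiE)
  finally show ?thesis .
qed

end

lemma card_compatible_if:
  assumes a: "a \<in> Idx n k" and b: "b \<in> Idx n k"
  shows "card {c \<in> Idx n k. compatible a b c} = (if delta k (compose k d1 d2) a b then n ^ cycles k d1 d2 else 0)"
proof (cases "delta k (compose k d1 d2) a b")
  case True then show ?thesis using card_compatible[OF a b True] cycles_eq_card_loops by simp
next
  case False
  then have "{c \<in> Idx n k. compatible a b c} = {}" using compatible_delta_compose by blast
  then show ?thesis using False by simp
qed

end

lemma compose_in_WB: "d1 \<in> WB k \<Longrightarrow> d2 \<in> WB k \<Longrightarrow> compose k d1 d2 \<in> WB k"
proof -
  assume "d1 \<in> WB k" "d2 \<in> WB k"
  then interpret diagram_pair k d1 d2 by unfold_locales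
  show ?thesis by (rule compose_WB)
qed

lemma card_middle_labellings:
  assumes "d1 \<in> WB k" "d2 \<in> WB k" "a \<in> Idx n k" "b \<in> Idx n k"
  shows "card {c \<in> Idx n k. delta k d1 c b \<and> delta k d2 a c}
     = (if delta k (compose k d1 d2) a b then n ^ cycles k d1 d2 else 0)"
proof -
  interpret diagram_pair k d1 d2 by unfold_locales (use assms in auto)
  show ?thesis using card_compatible_if[OF assms(3,4)] unfolding compatible_def by simp
qed

section \<open>The representation \<open>\<phi>\<close>\<close>

definition delta_ind :: "nat \<Rightarrow> diagram \<Rightarrow> (nat \<Rightarrow> nat) \<Rightarrow>
    (nat \<Rightarrow> nat) \<Rightarrow> complex" where
  "delta_ind k d a b = (if delta k d a b then 1 else 0)"

lemma phi_eq: "phi k n x v b = (if b \<in> Idx n k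
    then (\<Sum>a\<in>Idx n k. (\<Sum>d\<in>WB k. x d * delta_ind k d a b) * v a) else 0)"
  unfolding phi_def delta_ind_def by simp

lemma dmul_outside: "d \<notin> WB k \<Longrightarrow> dmul k n x y d = 0"
  unfolding dmul_def using compose_in_WB by (auto intro!: sum.neutral)

lemma dmul_Alg: "dmul k n x y \<in> Alg k"
  unfolding Alg_def using dmul_outside by auto

lemma sum_delta_ind_middle:
  assumes "d1 \<in> WB k" "d2 \<in> WB k" "a \<in> Idx n k" "b \<in> Idx n k"
  shows "(\<Sum>c\<in>Idx n k. delta_ind k d1 c b * delta_ind k d2 a c)
     = of_nat (n ^ cycles k d1 d2) * delta_ind k (compose k d1 d2) a b"
proof -
  have "(\<Sum>c\<in>Idx n k. delta_ind k d1 c b * delta_ind k d2 a c)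
      = (\<Sum>c\<in>{c \<in> Idx n k. delta k d1 c b \<and> delta k d2 a c}. 1)"
    by (subst sum.inter_filter) (auto simp: delta_ind_def intro: sum.cong)
  then show ?thesis
    using card_middle_labellings[OF assms] by (simp add: delta_ind_def)
qed

lemma sum_dmul_delta_ind:
  "(\<Sum>d\<in>WB k. dmul k n x y d * delta_ind k d a b) =
   (\<Sum>d1\<in>WB k. \<Sum>d2\<in>WB k. x d1 * y d2 * of_nat (n ^ cycles k d1 d2) *
       delta_ind k (compose k d1 d2) a b)"
proof -
  let ?t = "\<lambda>d1 d2 d. if compose k d1 d2 = d
    then x d1 * y d2 * of_nat n ^ cycles k d1 d2 * delta_ind k d a b else 0"
  have "(\<Sum>d\<in>WB k. dmul k n x y d * delta_ind k d a b) =
      (\<Sum>d\<in>WB k. \<Sum>d1\<in>WB k. \<Sum>d2\<in>WB k. ?t d1 d2 d)"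
    unfolding dmul_def sum_distrib_right by (intro sum.cong refl) simp
  also have "\<dots> = (\<Sum>d1\<in>WB k. \<Sum>d2\<in>WB k. \<Sum>d\<in>WB k. ?t d1 d2 d)"
    by (subst sum.swap) (rule sum.cong[OF refl], rule sum.swap)
  also have "\<dots> = (\<Sum>d1\<in>WB k. \<Sum>d2\<in>WB k.
      x d1 * y d2 * of_nat (n ^ cycles k d1 d2) * delta_ind k (compose k d1 d2) a b)"
    by (intro sum.cong refl) (simp add: sum.delta compose_in_WB)
  finally show ?thesis .
qed

lemma phi_phi:
  assumes b: "b \<in> Idx n k"
  shows "phi k n x (phi k n y v) b = (\<Sum>a\<in>Idx n k. \<Sum>d1\<in>WB k. \<Sum>d2\<in>WB k.
    x d1 * y d2 * v a * (\<Sum>c\<in>Idx n k. delta_ind k d1 c b * delta_ind k d2 a c))"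
proof -
  have "phi k n x (phi k n y v) b = (\<Sum>c\<in>Idx n k.
      (\<Sum>d1\<in>WB k. x d1 * delta_ind k d1 c b) * (\<Sum>a\<in>Idx n k. (\<Sum>d2\<in>WB k. y d2 *
          delta_ind k d2 a c) * v a))"
    using b by (simp add: phi_eq)
  also have "\<dots> = (\<Sum>c\<in>Idx n k. \<Sum>a\<in>Idx n k. \<Sum>d2\<in>WB k. \<Sum>d1\<in>WB k.
      x d1 * y d2 * v a * (delta_ind k d1 c b * delta_ind k d2 a c))"
    by (simp add: sum_distrib_left sum_distrib_right mult_ac)
  also have "\<dots> = (\<Sum>a\<in>Idx n k. \<Sum>d1\<in>WB k. \<Sum>d2\<in>WB k. \<Sum>c\<in>Idx n k.
      x d1 * y d2 * v a * (delta_ind k d1 c b * delta_ind k d2 a c))"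
    apply (rule trans[OF sum.swap])
    apply (rule sum.cong[OF refl])
    apply (rule trans[OF sum.swap])
    apply (rule trans)
     apply (rule sum.cong[OF refl])
     apply (rule sum.swap)
    apply (rule sum.swap)
    done
  finally show ?thesis by (simp add: sum_distrib_left)
qed

text \<open>The middle row of the stack is summed over in \<open>\<phi>(x) \<phi>(y)\<close>; the closed loops
contribute the factor \<open>n\<^bsup>cycles\<^esup>\<close> of the product in the walled Brauer
algebra.\<close>

lemma phi_dmul: "phi k n (dmul k n x y) v = phi k n x (phi k n y v)"
proof
  fix b
  show "phi k n (dmul k n x y) v b = phi k n x (phi k n y v) b"
  proof (cases "b \<in> Idx n k")
    case True
    have "phi k n (dmul k n x y) v b = (\<Sum>a\<in>Idx n k. \<Sum>d1\<in>WB k. \<Sum>d2\<in>WB k.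
        x d1 * y d2 * v a * (of_nat (n ^ cycles k d1 d2) * delta_ind k (compose k d1 d2) a b))"
      using True unfolding phi_eq sum_dmul_delta_ind by (simp add: sum_distrib_left sum_distrib_right mult_ac)
    also have "\<dots> = phi k n x (phi k n y v) b"
      unfolding phi_phi[OF True] by (intro sum.cong refl) (simp add: sum_delta_ind_middle True)
    finally show ?thesis .
  qed (simp add: phi_eq)
qed

lemma phi_add_alg: "phi k n (\<lambda>d. x d + y d) v = (\<lambda>b. phi k n x v b + phi k n y v b)"
  unfolding phi_eq by (auto simp: algebra_simps sum.distrib)

lemma phi_diff_alg: "phi k n (\<lambda>d. x d - y d) v = (\<lambda>b. phi k n x v b - phi k n y v b)"
  unfolding phi_eq by (auto simp: algebra_simps sum_subtractf)

lemma phi_smult_alg: "phi k n (\<lambda>d. c * x d) v = (\<lambda>b. c * phi k n x v b)"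
  unfolding phi_eq by (auto simp: algebra_simps sum_distrib_left)

lemma phi_add_vec: "phi k n x (\<lambda>a. u a + w a) = (\<lambda>b. phi k n x u b + phi k n x w b)"
  unfolding phi_eq by (auto simp: algebra_simps sum.distrib)

lemma phi_smult_vec: "phi k n x (\<lambda>a. c * u a) = (\<lambda>b. c * phi k n x u b)"
  unfolding phi_eq by (auto simp: algebra_simps sum_distrib_left)

lemma phi_zero_vec: "phi k n x (\<lambda>a. 0) = (\<lambda>b. 0)"
  unfolding phi_eq by auto

lemma phi_Mvec: "phi k n x v \<in> Mvec n k"
  unfolding Mvec_def phi_eq by auto

lemma phi_dbas: "d \<in> WB k \<Longrightarrow> phi k n (dbas d) v b = (if b \<in> Idx n k
    then (\<Sum>a\<in>Idx n k. delta_ind k d a b * v a) else 0)"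
  unfolding phi_eq dbas_def by (simp add: if_distrib[of "\<lambda>x. x * _"] sum.delta cong: if_cong)

lemma phi_sum: "phi k n (\<lambda>d'. \<Sum>i\<in>S. c i * f i d') v = (\<lambda>b. \<Sum>i\<in>S. c i *
    phi k n (f i) v b)"
proof
  fix b show "phi k n (\<lambda>d'. \<Sum>i\<in>S. c i * f i d') v b = (\<Sum>i\<in>S. c i * phi k n (f i) v b)"
  proof (cases "b \<in> Idx n k")
    case True
    have "phi k n (\<lambda>d'. \<Sum>i\<in>S. c i * f i d') v b =
        (\<Sum>a\<in>Idx n k. \<Sum>d\<in>WB k. \<Sum>i\<in>S. c i * (f i d * delta_ind k d a b * v a))"
      using True by (simp add: phi_eq sum_distrib_left sum_distrib_right mult_ac)
    also have "\<dots> = (\<Sum>i\<in>S. \<Sum>a\<in>Idx n k. \<Sum>d\<in>WB k. c i * (f i d *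
        delta_ind k d a b * v a))"
      by (simp only: sum.swap[of _ _ S])
    also have "\<dots> = (\<Sum>i\<in>S. c i * phi k n (f i) v b)"
      using True by (simp add: phi_eq sum_distrib_left sum_distrib_right mult_ac)
    finally show ?thesis .
  next
    case False then show ?thesis by (simp add: phi_eq)
  qed
qed

lemma phi_zero_alg: "phi k n (\<lambda>d. 0) v = (\<lambda>b. 0)"
  by (rule ext) (simp add: phi_eq)

lemma dmul_sum_right: "dmul k n x (\<lambda>d'. \<Sum>i\<in>S. c i * f i d') =
    (\<lambda>d. \<Sum>i\<in>S. c i * dmul k n x (f i) d)"
proof
  fix d
  have "dmul k n x (\<lambda>d'. \<Sum>i\<in>S. c i * f i d') d =
      (\<Sum>d1\<in>WB k. \<Sum>d2\<in>WB k. \<Sum>i\<in>S.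
      c i * (if compose k d1 d2 = d then x d1 * f i d2 * of_nat n ^ cycles k d1 d2 else 0))"
    unfolding dmul_def by (intro sum.cong refl) (simp add: sum_distrib_left sum_distrib_right mult_ac)
  also have "\<dots> = (\<Sum>i\<in>S. \<Sum>d1\<in>WB k. \<Sum>d2\<in>WB k.
      c i * (if compose k d1 d2 = d then x d1 * f i d2 * of_nat n ^ cycles k d1 d2 else 0))"
    by (simp only: sum.swap[of _ _ S])
  also have "\<dots> = (\<Sum>i\<in>S. c i * dmul k n x (f i) d)"
    unfolding dmul_def by (simp add: sum_distrib_left)
  finally show "dmul k n x (\<lambda>d'. \<Sum>i\<in>S. c i * f i d') d = (\<Sum>i\<in>S. c i * dmul k n x (f i) d)" .
qed

lemma dmul_sum_left: "dmul k n (\<lambda>d'. \<Sum>i\<in>S. c i * f i d') y =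
    (\<lambda>d. \<Sum>i\<in>S. c i * dmul k n (f i) y d)"
proof
  fix d
  have "dmul k n (\<lambda>d'. \<Sum>i\<in>S. c i * f i d') y d =
      (\<Sum>d1\<in>WB k. \<Sum>d2\<in>WB k. \<Sum>i\<in>S.
      c i * (if compose k d1 d2 = d then f i d1 * y d2 * of_nat n ^ cycles k d1 d2 else 0))"
    unfolding dmul_def by (intro sum.cong refl) (simp add: sum_distrib_left sum_distrib_right mult_ac)
  also have "\<dots> = (\<Sum>i\<in>S. \<Sum>d1\<in>WB k. \<Sum>d2\<in>WB k.
      c i * (if compose k d1 d2 = d then f i d1 * y d2 * of_nat n ^ cycles k d1 d2 else 0))"
    by (simp only: sum.swap[of _ _ S])
  also have "\<dots> = (\<Sum>i\<in>S. c i * dmul k n (f i) y d)"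
    unfolding dmul_def by (simp add: sum_distrib_left)
  finally show "dmul k n (\<lambda>d'. \<Sum>i\<in>S. c i * f i d') y d = (\<Sum>i\<in>S. c i * dmul k n (f i) y d)" .
qed

lemma Alg_expand: "x \<in> Alg k \<Longrightarrow> x = (\<lambda>d'. \<Sum>d\<in>WB k. x d * dbas d d')"
proof
  fix d' assume x: "x \<in> Alg k"
  have "(\<Sum>d\<in>WB k. x d * dbas d d') = (\<Sum>d\<in>WB k. if d' = d then x d else 0)"
    unfolding dbas_def by (intro sum.cong refl) auto
  also have "\<dots> = (if d' \<in> WB k then x d' else 0)" by (rule sum.delta') simp
  also have "\<dots> = x d'" using x unfolding Alg_def by auto
  finally show "x d' = (\<Sum>d\<in>WB k. x d * dbas d d')" by simp
qed

lemma idd_WB: "idd k \<in> WB k"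
  by (rule WB_I) (auto simp: idd_def polarity_def verts_iff)

lemma delta_idd: "a \<in> Idx n k \<Longrightarrow> b \<in> Idx n k \<Longrightarrow>
    delta k (idd k) a b \<longleftrightarrow> a = b"
proof
  assume a: "a \<in> Idx n k" and b: "b \<in> Idx n k" and d: "delta k (idd k) a b"
  show "a = b"
  proof
    fix i show "a i = b i"
    proof (cases "i < 2*k")
      case True
      then have "(True, i) \<in> verts k" by (simp add: verts_iff)
      then have "vlab a b (idd k (True, i)) = vlab a b (True, i)" using d unfolding delta_def by blast
      then show ?thesis using True by (simp add: idd_def vlab_def verts_iff)
    next
      case False then show ?thesis using a b unfolding Idx_def by auto
    qed
  qed
next
  assume "a = b" then show "delta k (idd k) a b"
    unfolding delta_def idd_def vlab_def by auto
qed

lemma phi_idd: "v \<in> Mvec n k \<Longrightarrow> phi k n (dbas (idd k)) v = v"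
proof
  fix b assume v: "v \<in> Mvec n k"
  show "phi k n (dbas (idd k)) v b = v b"
  proof (cases "b \<in> Idx n k")
    case True
    have "(\<Sum>a\<in>Idx n k. delta_ind k (idd k) a b * v a) = (\<Sum>a\<in>Idx n k. if a = b then v a else 0)"
      using delta_idd[OF _ True] unfolding delta_ind_def by (intro sum.cong) auto
    then show ?thesis using True phi_dbas[OF idd_WB] by (simp add: sum.delta')
  next
    case False then show ?thesis using v phi_dbas[OF idd_WB] unfolding Mvec_def by simp
  qed
qed

section \<open>The idempotent \<open>e\<close>\<close>

definition pair_upd :: "nat \<Rightarrow> nat \<Rightarrow> nat \<Rightarrow> (nat \<Rightarrow>
    nat) \<Rightarrow> nat \<Rightarrow> nat" where
  "pair_upd k j l a = a(j := l, k + j := l)"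

definition pair_zero_Idx :: "nat \<Rightarrow> nat \<Rightarrow> nat \<Rightarrow> (nat \<Rightarrow> nat) set" where
  "pair_zero_Idx n k j = {a \<in> Idx n k. a j = 0 \<and> a (k + j) = 0}"
definition pair_eq_Idx :: "nat \<Rightarrow> nat \<Rightarrow> nat \<Rightarrow> (nat \<Rightarrow> nat) set" where
  "pair_eq_Idx n k j = {a \<in> Idx n k. a j = a (k + j)}"

lemma pair_upd_Idx: "j < k \<Longrightarrow> l < n \<Longrightarrow> a \<in> Idx n k \<Longrightarrow>
    pair_upd k j l a \<in> Idx n k"
  unfolding Idx_def pair_upd_def by auto

lemma bij_betw_pair_upd:
  assumes j: "j < k" and n: "0 < n"
  shows "bij_betw (\<lambda>(r, l). pair_upd k j l r) (pair_zero_Idx n k j \<times> {..<n}) (pair_eq_Idx n k j)"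
proof (rule bij_betw_byWitness[where f' = "\<lambda>a. (pair_upd k j 0 a, a j)"])
  show "\<forall>x\<in>pair_zero_Idx n k j \<times> {..<n}. (pair_upd k j 0 ((\<lambda>(r, l). pair_upd k j l r) x),
      (\<lambda>(r, l). pair_upd k j l r) x j) = x"
    by (auto simp: pair_zero_Idx_def pair_upd_def fun_eq_iff)
  show "\<forall>a\<in>pair_eq_Idx n k j. (\<lambda>(r, l). pair_upd k j l r) (pair_upd k j 0 a, a j) = a"
    by (auto simp: pair_eq_Idx_def pair_upd_def fun_eq_iff)
  show "(\<lambda>(r, l). pair_upd k j l r) ` (pair_zero_Idx n k j \<times> {..<n}) \<subseteq> pair_eq_Idx n k j"
    using j by (auto simp: pair_eq_Idx_def pair_zero_Idx_def pair_upd_Idx) (simp add: pair_upd_def)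
  show "(\<lambda>a. (pair_upd k j 0 a, a j)) ` pair_eq_Idx n k j \<subseteq> pair_zero_Idx n k j \<times> {..<n}"
    using j n by (auto simp: pair_eq_Idx_def pair_zero_Idx_def pair_upd_Idx Idx_def) (simp_all add: pair_upd_def)
qed

lemma sum_pair_eq_Idx:
  assumes j: "j < k" and n: "0 < n"
  shows "(\<Sum>a\<in>pair_eq_Idx n k j. F a) = (\<Sum>r\<in>pair_zero_Idx n k j. \<Sum>l<n. F (pair_upd k j l r))"
  unfolding sum.cartesian_product using sum.reindex_bij_betw[OF bij_betw_pair_upd[OF j n], of F]
  by (simp add: case_prod_unfold)

lemma pair_zero_Idx_subset: "pair_zero_Idx n k j \<subseteq> Idx n k" unfolding pair_zero_Idx_def by auto
lemma pair_eq_Idx_subset: "pair_eq_Idx n k j \<subseteq> Idx n k" unfolding pair_eq_Idx_def by auto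

lemma finite_pair_zero_Idx[simp]: "finite (pair_zero_Idx n k j)"
  using finite_subset[OF pair_zero_Idx_subset finite_Idx] .
lemma finite_pair_eq_Idx[simp]: "finite (pair_eq_Idx n k j)" using finite_subset[OF pair_eq_Idx_subset finite_Idx] .

lemma sum_Idx_pair_eq: "(\<And>a. a \<in> Idx n k \<Longrightarrow> a j \<noteq> a (k +
    j) \<Longrightarrow> F a = 0) \<Longrightarrow>
   (\<Sum>a\<in>Idx n k. F a) = (\<Sum>a\<in>pair_eq_Idx n k j. F a)"
  by (rule sum.mono_neutral_right) (auto simp: pair_eq_Idx_def)

lemma cdiag_WB: "j < k \<Longrightarrow> cdiag k j \<in> WB k"
  by (rule WB_I) (auto simp: cdiag_def polarity_def verts_iff)

lemma vlab_pair_upd_top: "vlab a (pair_upd k j l b) = (vlab a b)((True, j) := l, (True, k + j) := l)"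
  unfolding vlab_def pair_upd_def by (auto simp: fun_eq_iff)

lemma vlab_pair_upd_bottom: "vlab (pair_upd k j l a) b = (vlab a b)((False, j) := l, (False, k + j) := l)"
  unfolding vlab_def pair_upd_def by (auto simp: fun_eq_iff)

lemma delta_upd_pair:
  assumes d: "d \<in> WB k" and x1: "x1 \<in> verts k" and x2: "d x1 = x2" and eq: "f x1 = f x2"
  shows "(\<forall>x\<in>verts k. (f(x1 := l, x2 := l)) (d x) = (f(x1 := l, x2 :=
      l)) x) \<longleftrightarrow> (\<forall>x\<in>verts k. f (d x) = f x)"
proof -
  have ne: "x1 \<noteq> x2" using WB_D(2)[OF d x1] x2 by simp
  have dx2: "d x2 = x1" using WB_involution[OF d] x2 by metis
  have other: "x \<noteq> x1 \<Longrightarrow> x \<noteq> x2 \<Longrightarrow> d x \<noteq> x1 \<and>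
      d x \<noteq> x2" for x
    using WB_involution[OF d, of x] x2 dx2 by metis
  show ?thesis
  proof (intro iffI ballI)
    fix x assume A: "\<forall>x\<in>verts k. (f(x1 := l, x2 := l)) (d x) = (f(x1 := l, x2 := l)) x"
        and x: "x \<in> verts k"
    show "f (d x) = f x"
    proof (cases "x = x1 \<or> x = x2")
      case True then show ?thesis using eq x2 dx2 by auto
    next
      case False then show ?thesis using A x other[of x] by auto
    qed
  next
    fix x assume A: "\<forall>x\<in>verts k. f (d x) = f x" and x: "x \<in> verts k"
    show "(f(x1 := l, x2 := l)) (d x) = (f(x1 := l, x2 := l)) x"
    proof (cases "x = x1 \<or> x = x2")
      case True then show ?thesis using ne x2 dx2 by auto
    next
      case False then show ?thesis using A x other[of x] by auto
    qed
  qed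
qed

lemma delta_top:
  assumes d: "d \<in> WB k" and j: "j < k" and dj: "d (True, j) = (True, k + j)"
  shows "delta k d a b \<Longrightarrow> b j = b (k + j)"
    and "b j = b (k + j) \<Longrightarrow> delta k d a (pair_upd k j l b) = delta k d a b"
proof -
  have x1: "(True, j) \<in> verts k" using j by (simp add: verts_iff)
  show "delta k d a b \<Longrightarrow> b j = b (k + j)"
    unfolding delta_def using x1 dj by (metis snd_conv vlab_def fst_conv)
  assume "b j = b (k + j)"
  then have eq: "vlab a b (True, j) = vlab a b (True, k + j)" by (simp add: vlab_def)
  show "delta k d a (pair_upd k j l b) = delta k d a b"
    unfolding delta_def vlab_pair_upd_top using delta_upd_pair[OF d x1 dj eq] by simp
qed

lemma delta_bot:
  assumes d: "d \<in> WB k" and j: "j < k" and dj: "d (False, j) = (False, k + j)"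
  shows "delta k d a b \<Longrightarrow> a j = a (k + j)"
    and "a j = a (k + j) \<Longrightarrow> delta k d (pair_upd k j l a) b = delta k d a b"
proof -
  have x1: "(False, j) \<in> verts k" using j by (simp add: verts_iff)
  show "delta k d a b \<Longrightarrow> a j = a (k + j)"
    unfolding delta_def using x1 dj by (metis snd_conv vlab_def fst_conv)
  assume "a j = a (k + j)"
  then have eq: "vlab a b (False, j) = vlab a b (False, k + j)" by (simp add: vlab_def)
  show "delta k d (pair_upd k j l a) b = delta k d a b"
    unfolding delta_def vlab_pair_upd_bottom using delta_upd_pair[OF d x1 dj eq] by simp
qed

lemma pmap_eq: "pmap k n j v b = (if b \<in> Idx n k then (1 / of_nat n) *
   (if b j = b (k + j) then (\<Sum>l<n. v (pair_upd k j l b)) else 0) else 0)"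
  unfolding pmap_def pair_upd_def by simp

lemma pmap_Mvec: "pmap k n j v \<in> Mvec n k"
  unfolding Mvec_def pmap_eq by auto

lemma pmap_diff: "pmap k n j (\<lambda>b. u b - w b) = (\<lambda>b. pmap k n j u b - pmap k n j w b)"
  by (rule ext) (simp add: pmap_eq sum_subtractf right_diff_distrib diff_divide_distrib)

lemma pmap_zero: "pmap k n j (\<lambda>b. 0) = (\<lambda>b. 0)"
  unfolding pmap_eq by auto

lemma pmap_idem:
  assumes j: "j < k" and n: "0 < n"
  shows "pmap k n j (pmap k n j v) = pmap k n j v"
proof
  fix b show "pmap k n j (pmap k n j v) b = pmap k n j v b"
  proof (cases "b \<in> Idx n k \<and> b j = b (k + j)")
    case True
    have "pmap k n j v (pair_upd k j l b) = (1 / of_nat n) * (\<Sum>m<n. v (pair_upd k j m b))" if "l < n" for l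
      using pair_upd_Idx[OF j that] True j unfolding pmap_eq by (simp add: pair_upd_def)
    then have "(\<Sum>l<n. pmap k n j v (pair_upd k j l b)) = of_nat n * ((1 / of_nat n) *
        (\<Sum>m<n. v (pair_upd k j m b)))"
      by simp
    then show ?thesis using True n by (simp add: pmap_eq)
  next
    case False then show ?thesis by (auto simp: pmap_eq)
  qed
qed

lemma pair_upd_commute: "j < k \<Longrightarrow> j' < k \<Longrightarrow> j \<noteq> j' \<Longrightarrow>
    pair_upd k j l (pair_upd k j' m b) = pair_upd k j' m (pair_upd k j l b)"
  unfolding pair_upd_def by (auto simp: fun_eq_iff)

lemma pmap_commute:
  assumes j: "j < k" and j': "j' < k" and ne: "j \<noteq> j'"
  shows "pmap k n j (pmap k n j' v) = pmap k n j' (pmap k n j v)"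
proof
  fix b
  have L: "pmap k n j (pmap k n j' v) b = (if b \<in> Idx n k \<and> b j = b (k + j) \<and> b j' = b (k + j') then
     (1 / of_nat n) * (1 / of_nat n) * (\<Sum>l<n. \<Sum>m<n. v (pair_upd k j' m (pair_upd k j l b))) else 0)"
  proof (cases "b \<in> Idx n k \<and> b j = b (k + j)")
    case True
    have "pmap k n j' v (pair_upd k j l b) = (if b j' = b (k + j')
        then (1 / of_nat n) * (\<Sum>m<n. v (pair_upd k j' m (pair_upd k j l b))) else 0)"
      if "l < n" for l
      using pair_upd_Idx[OF j that] True j j' ne unfolding pmap_eq by (simp add: pair_upd_def)
    then show ?thesis using True by (simp add: pmap_eq sum_divide_distrib divide_divide_eq_left)
  next
    case False then show ?thesis by (auto simp: pmap_eq)
  qed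
  have R: "pmap k n j' (pmap k n j v) b = (if b \<in> Idx n k \<and> b j' = b (k + j') \<and> b j = b (k + j) then
     (1 / of_nat n) * (1 / of_nat n) * (\<Sum>m<n. \<Sum>l<n. v (pair_upd k j l (pair_upd k j' m b))) else 0)"
  proof (cases "b \<in> Idx n k \<and> b j' = b (k + j')")
    case True
    have "pmap k n j v (pair_upd k j' m b) = (if b j = b (k + j)
        then (1 / of_nat n) * (\<Sum>l<n. v (pair_upd k j l (pair_upd k j' m b))) else 0)"
      if "m < n" for m
      using pair_upd_Idx[OF j' that] True j j' ne unfolding pmap_eq by (simp add: pair_upd_def)
    then show ?thesis using True by (simp add: pmap_eq sum_divide_distrib divide_divide_eq_left)
  next
    case False then show ?thesis by (auto simp: pmap_eq)
  qed
  show "pmap k n j (pmap k n j' v) b = pmap k n j' (pmap k n j v) b"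
  proof -
    have "(\<Sum>l<n. \<Sum>m<n. v (pair_upd k j' m (pair_upd k j l b))) =
        (\<Sum>m<n. \<Sum>l<n. v (pair_upd k j l (pair_upd k j' m b)))"
      by (subst sum.swap) (simp add: pair_upd_commute[OF j j' ne])
    then show ?thesis unfolding L R by auto
  qed
qed

lemma c_elem_eq: "c_elem k n j = (\<lambda>d. (1 / of_nat n) * dbas (cdiag k j) d)"
  unfolding c_elem_def dbas_def by auto

lemma delta_cdiag:
  assumes j: "j < k" and a: "a \<in> Idx n k" and b: "b \<in> Idx n k"
  shows "delta k (cdiag k j) a b \<longleftrightarrow> b j = b (k + j) \<and> a j = a (k + j) \<and>
     (\<forall>i<2*k. i \<noteq> j \<longrightarrow> i \<noteq> k + j \<longrightarrow> a i = b i)"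
proof
  assume d: "delta k (cdiag k j) a b"
  have v: "\<And>x. x \<in> verts k \<Longrightarrow> vlab a b (cdiag k j x) = vlab a b x" using d
    unfolding delta_def by blast
  have "b j = b (k + j)" using v[of "(True, j)"] j by (simp add: cdiag_def vlab_def verts_iff)
  moreover have "a j = a (k + j)" using v[of "(False, j)"] j by (simp add: cdiag_def vlab_def verts_iff)
  moreover have "\<forall>i<2*k. i \<noteq> j \<longrightarrow> i \<noteq> k + j \<longrightarrow> a i = b i"
  proof (intro allI impI)
    fix i assume "i < 2*k" "i \<noteq> j" "i \<noteq> k + j"
    then show "a i = b i" using v[of "(True, i)"] by (simp add: cdiag_def vlab_def verts_iff)
  qed
  ultimately show "b j = b (k + j) \<and> a j = a (k + j) \<and>
      (\<forall>i<2*k. i \<noteq> j \<longrightarrow> i \<noteq> k + j \<longrightarrow> a i = b i)"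
    by blast
next
  assume H: "b j = b (k + j) \<and> a j = a (k + j) \<and>
      (\<forall>i<2*k. i \<noteq> j \<longrightarrow> i \<noteq> k + j \<longrightarrow> a i = b i)"
  show "delta k (cdiag k j) a b" unfolding delta_def
  proof
    fix x assume x: "x \<in> verts k"
    obtain t i where ti: "x = (t, i)" by (cases x)
    show "vlab a b (cdiag k j x) = vlab a b x"
      using H x j unfolding ti by (auto simp: cdiag_def vlab_def verts_iff)
  qed
qed

lemma delta_cdiag_iff:
  assumes j: "j < k" and a: "a \<in> Idx n k" and b: "b \<in> Idx n k"
  shows "delta k (cdiag k j) a b \<longleftrightarrow> b j = b (k + j) \<and> a = pair_upd k j (a j) b"
proof -
  have "a = pair_upd k j (a j) b \<longleftrightarrow> a j = a (k + j) \<and>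
      (\<forall>i<2*k. i \<noteq> j \<longrightarrow> i \<noteq> k + j \<longrightarrow> a i = b i)"
  proof (intro iffI conjI allI impI)
    assume eq: "a = pair_upd k j (a j) b"
    show "a j = a (k + j)" using fun_cong[OF eq, of "k + j"] by (simp add: pair_upd_def)
    fix i assume "i < 2*k" "i \<noteq> j" "i \<noteq> k + j"
    then show "a i = b i" using fun_cong[OF eq, of i] by (simp add: pair_upd_def)
  next
    assume H: "a j = a (k + j) \<and> (\<forall>i<2*k. i \<noteq> j \<longrightarrow> i \<noteq> k +
        j \<longrightarrow> a i = b i)"
    show "a = pair_upd k j (a j) b"
    proof
      fix i show "a i = pair_upd k j (a j) b i"
        using H a b unfolding pair_upd_def Idx_def by (cases "i < 2*k") auto
    qed
  qed
  then show ?thesis using delta_cdiag[OF j a b] by blast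
qed

lemma sum_delta_ind_cdiag:
  assumes j: "j < k" and b: "b \<in> Idx n k"
  shows "(\<Sum>a\<in>Idx n k. delta_ind k (cdiag k j) a b * v a) =
     (if b j = b (k + j) then (\<Sum>l<n. v (pair_upd k j l b)) else 0)"
proof (cases "b j = b (k + j)")
  case True
  have "{a \<in> Idx n k. delta k (cdiag k j) a b} = (\<lambda>l. pair_upd k j l b) ` {..<n}"
  proof (intro set_eqI iffI)
    fix a assume "a \<in> {a \<in> Idx n k. delta k (cdiag k j) a b}"
    then show "a \<in> (\<lambda>l. pair_upd k j l b) ` {..<n}"
      using delta_cdiag_iff[OF j _ b] j unfolding Idx_def by (auto intro!: image_eqI[of _ _ "a j"])
  next
    fix a assume "a \<in> (\<lambda>l. pair_upd k j l b) ` {..<n}"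
    then show "a \<in> {a \<in> Idx n k. delta k (cdiag k j) a b}"
      using delta_cdiag_iff[OF j _ b] True pair_upd_Idx[OF j _ b] by (auto simp: pair_upd_def)
  qed
  moreover have "inj_on (\<lambda>l. pair_upd k j l b) {..<n}"
    by (rule inj_onI) (metis fun_upd_same pair_upd_def fun_upd_twist)
  ultimately show ?thesis
    using True sum.inter_filter[of "Idx n k" v "\<lambda>a. delta k (cdiag k j) a b"]
    by (simp add: delta_ind_def sum.reindex if_distrib[of "\<lambda>x. x * _"] cong: if_cong)
qed (auto simp: delta_ind_def delta_cdiag_iff[OF j _ b] intro!: sum.neutral)

lemma phi_c_elem:
  assumes j: "j < k" and n: "0 < n"
  shows "phi k n (c_elem k n j) v = pmap k n j v"
proof
  fix b
  show "phi k n (c_elem k n j) v b = pmap k n j v b"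
    unfolding c_elem_eq phi_smult_alg using sum_delta_ind_cdiag[OF j, of b n v] phi_dbas[OF cdiag_WB[OF j], of n v b]
    by (simp add: pmap_eq)
qed

lemma eprod_diff: "eprod k n m (\<lambda>b. u b - w b) = (\<lambda>b. eprod k n m u b - eprod k n m w b)"
proof (induction m arbitrary: u w)
  case 0 then show ?case by simp
next
  case (Suc m)
  have "eprod k n (Suc m) (\<lambda>b. u b - w b) = eprod k n m (\<lambda>b. (u b - pmap k n m u b) -
      (w b - pmap k n m w b))"
    by (simp add: pmap_diff algebra_simps)
  also have "\<dots> = (\<lambda>b. eprod k n m (\<lambda>b. u b - pmap k n m u b) b -
      eprod k n m (\<lambda>b. w b - pmap k n m w b) b)"
    by (rule Suc.IH)
  finally show ?case by simp
qed

lemma eprod_zero: "eprod k n m (\<lambda>b. 0) = (\<lambda>b. 0)"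
  by (induction m) (simp_all add: pmap_zero)

lemma eprod_Mvec: "v \<in> Mvec n k \<Longrightarrow> eprod k n m v \<in> Mvec n k"
proof (induction m arbitrary: v)
  case 0 then show ?case by simp
next
  case (Suc m)
  have "(\<lambda>b. v b - pmap k n m v b) \<in> Mvec n k"
    using Suc.prems pmap_Mvec[of k n m v] unfolding Mvec_def by auto
  then show ?case using Suc.IH by simp
qed

lemma eprod_pmap_comm:
  "m \<le> j \<Longrightarrow> j < k \<Longrightarrow> pmap k n j (eprod k n m v) = eprod k n m (pmap k n j v)"
proof (induction m arbitrary: v)
  case 0 then show ?case by simp
next
  case (Suc m)
  have "pmap k n j (eprod k n (Suc m) v) = eprod k n m (pmap k n j (\<lambda>b. v b - pmap k n m v b))"
    using Suc by simp
  also have "\<dots> = eprod k n m (\<lambda>b. pmap k n j v b - pmap k n m (pmap k n j v) b)"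
    using pmap_commute[of j k m n v] Suc.prems by (simp add: pmap_diff)
  also have "\<dots> = eprod k n (Suc m) (pmap k n j v)" by simp
  finally show ?case .
qed

lemma eprod_kill_left:
  assumes n: "0 < n"
  shows "m \<le> k \<Longrightarrow> j < m \<Longrightarrow> pmap k n j (eprod k n m v) = (\<lambda>b. 0)"
proof (induction m arbitrary: v)
  case 0 then show ?case by simp
next
  case (Suc m)
  show ?case
  proof (cases "j < m")
    case True then show ?thesis using Suc by simp
  next
    case False
    then have jm: "j = m" using Suc by simp
    have "pmap k n j (eprod k n (Suc m) v) = eprod k n m (pmap k n m (\<lambda>b. v b - pmap k n m v b))"
      using eprod_pmap_comm[of m m k n] Suc.prems jm by simp
    also have "\<dots> = eprod k n m (\<lambda>b. 0)"
      using pmap_idem[of m k n v] Suc.prems n by (simp add: pmap_diff)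
    finally show ?thesis by (simp add: eprod_zero)
  qed
qed

lemma eprod_kill_right:
  assumes n: "0 < n"
  shows "m \<le> k \<Longrightarrow> j < m \<Longrightarrow> eprod k n m (pmap k n j v) = (\<lambda>b. 0)"
proof (induction m arbitrary: v)
  case 0 then show ?case by simp
next
  case (Suc m)
  show ?case
  proof (cases "j < m")
    case True
    have "eprod k n (Suc m) (pmap k n j v) = eprod k n m (\<lambda>b. pmap k n j v b - pmap k n j (pmap k n m v) b)"
      using pmap_commute[of j k m n v] Suc.prems True by simp
    also have "\<dots> = (\<lambda>b. 0)" using Suc.IH Suc.prems True by (simp add: eprod_diff)
    finally show ?thesis .
  next
    case False
    then have jm: "j = m" using Suc by simp
    have "eprod k n (Suc m) (pmap k n j v) = eprod k n m (\<lambda>b. 0)"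
      using pmap_idem[of m k n v] Suc.prems n jm by simp
    then show ?thesis by (simp add: eprod_zero)
  qed
qed

lemma eprod_fix: "(\<And>j. j < m \<Longrightarrow> pmap k n j w = (\<lambda>b. 0)) \<Longrightarrow>
    eprod k n m w = w"
  by (induction m) auto

lemma emap_idem: "0 < n \<Longrightarrow> emap k n (emap k n v) = emap k n v"
  unfolding emap_def by (rule eprod_fix) (rule eprod_kill_left, auto)

lemma emap_kill_left: "0 < n \<Longrightarrow> j < k \<Longrightarrow> pmap k n j (emap k n v) = (\<lambda>b. 0)"
  unfolding emap_def by (rule eprod_kill_left) auto

lemma emap_kill_right: "0 < n \<Longrightarrow> j < k \<Longrightarrow> emap k n (pmap k n j v) = (\<lambda>b. 0)"
  unfolding emap_def by (rule eprod_kill_right) auto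

lemma emap_zero: "emap k n (\<lambda>b. 0) = (\<lambda>b. 0)"
  unfolding emap_def by (rule eprod_zero)

lemma emap_Mvec: "v \<in> Mvec n k \<Longrightarrow> emap k n v \<in> Mvec n k"
  unfolding emap_def by (rule eprod_Mvec)

lemma eM_Mvec: "v \<in> eM k n \<Longrightarrow> v \<in> Mvec n k"
  unfolding eM_def using emap_Mvec by auto

lemma phi_one_minus_c:
  assumes j: "j < k" and n: "0 < n" and v: "v \<in> Mvec n k"
  shows "phi k n (\<lambda>d. dbas (idd k) d - c_elem k n j d) v = (\<lambda>b. v b - pmap k n j v b)"
  using phi_idd[OF v] phi_c_elem[OF j n] by (simp add: phi_diff_alg)

lemma phi_bprod: "0 < n \<Longrightarrow> m \<le> k \<Longrightarrow> v \<in> Mvec n k \<Longrightarrow>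
    phi k n (bprod k n m) v = eprod k n m v"
proof (induction m arbitrary: v)
  case 0 then show ?case by (simp add: phi_idd)
next
  case (Suc m)
  have vm: "(\<lambda>b. v b - pmap k n m v b) \<in> Mvec n k"
    using Suc.prems pmap_Mvec[of k n m v] unfolding Mvec_def by auto
  have "phi k n (bprod k n (Suc m)) v = phi k n (bprod k n m) (phi k n (\<lambda>d. dbas (idd k) d -
      c_elem k n m d) v)"
    by (simp add: phi_dmul)
  also have "\<dots> = phi k n (bprod k n m) (\<lambda>b. v b - pmap k n m v b)"
    using phi_one_minus_c[of m k n v] Suc.prems by simp
  also have "\<dots> = eprod k n m (\<lambda>b. v b - pmap k n m v b)" using Suc.IH[OF _ _ vm] Suc.prems by simp
  finally show ?case by simp
qed

lemma phi_b_elem: "0 < n \<Longrightarrow> v \<in> Mvec n k \<Longrightarrow> phi k n (b_elem k n) v = emap k n v"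
  unfolding b_elem_def emap_def using phi_bprod by simp

lemma pmap_phi_top_pair:
  assumes d: "d \<in> WB k" and j: "j < k" and dj: "d (True, j) = (True, k + j)" and n: "0 < n"
  shows "pmap k n j (phi k n (dbas d) w) = phi k n (dbas d) w"
proof
  fix b
  show "pmap k n j (phi k n (dbas d) w) b = phi k n (dbas d) w b"
  proof (cases "b \<in> Idx n k")
    case False then show ?thesis by (simp add: pmap_eq phi_dbas[OF d])
  next
    case b: True
    show ?thesis
    proof (cases "b j = b (k + j)")
      case False
      then have "delta_ind k d a b = 0" for a using delta_top(1)[OF d j dj, of a b] unfolding delta_ind_def by auto
      then show ?thesis using False b by (simp add: pmap_eq phi_dbas[OF d])
    next
      case True
      have "phi k n (dbas d) w (pair_upd k j l b) = phi k n (dbas d) w b" if l: "l < n" for l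
        using pair_upd_Idx[OF j l b] b delta_top(2)[OF d j dj True] unfolding phi_dbas[OF d] delta_ind_def by simp
      then show ?thesis using True b n by (simp add: pmap_eq)
    qed
  qed
qed

lemma phi_pmap_bottom_pair:
  assumes d: "d \<in> WB k" and j: "j < k" and dj: "d (False, j) = (False, k + j)" and n: "0 < n"
  shows "phi k n (dbas d) (pmap k n j u) = phi k n (dbas d) u"
proof
  fix b
  show "phi k n (dbas d) (pmap k n j u) b = phi k n (dbas d) u b"
  proof (cases "b \<in> Idx n k")
    case False then show ?thesis by (simp add: phi_dbas[OF d])
  next
    case b: True
    have z: "delta_ind k d a b = 0" if "a j \<noteq> a (k + j)" for a
      using delta_bot(1)[OF d j dj, of a b] that unfolding delta_ind_def by auto
    have inv: "delta_ind k d (pair_upd k j m r) b = delta_ind k d r b" if r: "r \<in> pair_zero_Idx n k j" for r m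
    proof -
      have "r j = r (k + j)" using r unfolding pair_zero_Idx_def by simp
      then show ?thesis using delta_bot(2)[OF d j dj, of r m b] unfolding delta_ind_def by simp
    qed
    have "(\<Sum>a\<in>Idx n k. delta_ind k d a b * pmap k n j u a) =
        (\<Sum>a\<in>pair_eq_Idx n k j. delta_ind k d a b * pmap k n j u a)"
      by (rule sum_Idx_pair_eq) (use z in auto)
    also have "\<dots> = (\<Sum>r\<in>pair_zero_Idx n k j. \<Sum>m<n. delta_ind k d (pair_upd k j m r) b
        * pmap k n j u (pair_upd k j m r))"
      by (rule sum_pair_eq_Idx[OF j n])
    also have "\<dots> = (\<Sum>r\<in>pair_zero_Idx n k j. \<Sum>m<n. delta_ind k d r b *
        ((1 / of_nat n) * (\<Sum>l<n. u (pair_upd k j l r))))"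
    proof (intro sum.cong refl)
      fix r m assume r: "r \<in> pair_zero_Idx n k j" and m: "m \<in> {..<n}"
      have "pair_upd k j m r \<in> Idx n k"
        using pair_upd_Idx[OF j _ pair_zero_Idx_subset[THEN subsetD, OF r]] m by simp
      then show "delta_ind k d (pair_upd k j m r) b * pmap k n j u (pair_upd k j m r) =
          delta_ind k d r b * ((1 / of_nat n) * (\<Sum>l<n. u (pair_upd k j l r)))"
        using inv[OF r] by (simp add: pmap_eq pair_upd_def)
    qed
    also have "\<dots> = (\<Sum>r\<in>pair_zero_Idx n k j. \<Sum>l<n. delta_ind k d (pair_upd k j l r) b
        * u (pair_upd k j l r))"
      using n inv by (simp add: sum_distrib_left)
    also have "\<dots> = (\<Sum>a\<in>pair_eq_Idx n k j. delta_ind k d a b * u a)"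
      by (rule sum_pair_eq_Idx[OF j n, symmetric])
    also have "\<dots> = (\<Sum>a\<in>Idx n k. delta_ind k d a b * u a)"
      by (rule sum_Idx_pair_eq[symmetric]) (use z in auto)
    finally show ?thesis using b by (simp add: phi_dbas[OF d])
  qed
qed

lemma has_forbidden_D:
  "has_forbidden k d \<Longrightarrow> \<exists>j<k. d (True, j) = (True, k + j) \<or> d (False, j) = (False, k + j)"
  unfolding has_forbidden_def by auto

lemma emap_phi_forbidden:
  assumes d: "d \<in> WB k" and f: "has_forbidden k d" and n: "0 < n" and v: "v \<in> Mvec n k"
  shows "emap k n (phi k n (dbas d) (emap k n v)) = (\<lambda>b. 0)"
proof -
  obtain j where j: "j < k" and dj: "d (True, j) = (True, k + j) \<or> d (False, j) = (False, k + j)"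
    using has_forbidden_D[OF f] by blast
  show ?thesis
  proof (cases "d (True, j) = (True, k + j)")
    case True
    then show ?thesis using pmap_phi_top_pair[OF d j True n, of "emap k n v"] emap_kill_right[OF n j] by metis
  next
    case False
    then have dj': "d (False, j) = (False, k + j)" using dj by simp
    have "phi k n (dbas d) (emap k n v) = phi k n (dbas d) (pmap k n j (emap k n v))"
      using phi_pmap_bottom_pair[OF d j dj' n] by simp
    also have "\<dots> = (\<lambda>b. 0)" using emap_kill_left[OF n j] phi_zero_vec by metis
    finally show ?thesis by (simp add: emap_zero)
  qed
qed

lemma pmap_add: "pmap k n j (\<lambda>b. u b + w b) = (\<lambda>b. pmap k n j u b + pmap k n j w b)"
  by (rule ext) (simp add: pmap_eq sum.distrib distrib_left add_divide_distrib)

lemma pmap_smult: "pmap k n j (\<lambda>b. c * u b) = (\<lambda>b. c * pmap k n j u b)"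
  by (rule ext) (simp add: pmap_eq sum_distrib_left mult_ac)

lemma eprod_add: "eprod k n m (\<lambda>b. u b + w b) = (\<lambda>b. eprod k n m u b + eprod k n m w b)"
proof (induction m arbitrary: u w)
  case 0 then show ?case by simp
next
  case (Suc m)
  have "eprod k n (Suc m) (\<lambda>b. u b + w b) = eprod k n m (\<lambda>b. (u b - pmap k n m u b) +
      (w b - pmap k n m w b))"
    by (simp add: pmap_add algebra_simps)
  also have "\<dots> = (\<lambda>b. eprod k n m (\<lambda>b. u b - pmap k n m u b) b +
      eprod k n m (\<lambda>b. w b - pmap k n m w b) b)"
    by (rule Suc.IH)
  finally show ?case by simp
qed

lemma eprod_smult: "eprod k n m (\<lambda>b. c * u b) = (\<lambda>b. c * eprod k n m u b)"
proof (induction m arbitrary: u)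
  case 0 then show ?case by simp
next
  case (Suc m)
  have "eprod k n (Suc m) (\<lambda>b. c * u b) = eprod k n m (\<lambda>b. c * (u b - pmap k n m u b))"
    by (simp add: pmap_smult algebra_simps)
  also have "\<dots> = (\<lambda>b. c * eprod k n m (\<lambda>b. u b - pmap k n m u b) b)" by (rule Suc.IH)
  finally show ?case by simp
qed

lemma emap_add: "emap k n (\<lambda>b. u b + w b) = (\<lambda>b. emap k n u b + emap k n w b)"
  unfolding emap_def by (rule eprod_add)

lemma emap_smult: "emap k n (\<lambda>b. c * u b) = (\<lambda>b. c * emap k n u b)"
  unfolding emap_def by (rule eprod_smult)

lemma eprod_at: "(\<And>j. j < m \<Longrightarrow> b j \<noteq> b (k + j)) \<Longrightarrow> eprod k n m w b = w b"
proof (induction m arbitrary: w)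
  case 0 then show ?case by simp
next
  case (Suc m)
  have "eprod k n (Suc m) w b = (\<lambda>b. w b - pmap k n m w b) b" using Suc by simp
  also have "\<dots> = w b" using Suc.prems[of m] by (simp add: pmap_eq)
  finally show ?case .
qed

section \<open>Exchange-invariant functions on labellings\<close>

definition neg_verts :: "nat \<Rightarrow> vtx set" where "neg_verts k = {x \<in> verts k. \<not> polarity k x}"
definition pos_verts :: "nat \<Rightarrow> vtx set" where "pos_verts k = {x \<in> verts k. polarity k x}"

definition labellings :: "nat \<Rightarrow> nat \<Rightarrow> (vtx \<Rightarrow> nat) set" where
  "labellings n k = {l. (\<forall>x\<in>verts k. l x < n) \<and>
      (\<forall>x. x \<notin> verts k \<longrightarrow> l x = 0)}"

text \<open>For a matrix \<open>T\<close> on \<open>M\<close> written as the function \<open>t\<close> of the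
labelling with bottom row \<open>a\<close> and top row \<open>b\<close>
(\<open>t (vlab a b) = T\<^sub>b\<^sub>a\<close>), this is the entry-wise form of
\<open>T E\<^sub>\<tau>\<^sub>\<sigma> = E\<^sub>\<tau>\<^sub>\<sigma> T\<close>.\<close>

definition exchange_inv :: "nat \<Rightarrow> nat \<Rightarrow> ((vtx \<Rightarrow> nat) \<Rightarrow>
    complex) \<Rightarrow> bool" where
  "exchange_inv n k t \<longleftrightarrow> (\<forall>l\<in>labellings n k. \<forall>\<sigma><n. \<forall>\<tau><n.
     (\<Sum>x\<in>neg_verts k. if l x = \<sigma>
         then t (l(x := \<tau>)) else 0) = (\<Sum>y\<in>pos_verts k. if l y = \<tau>
         then t (l(y := \<sigma>)) else 0))"

definition edge_const :: "nat \<Rightarrow> diagram \<Rightarrow> (vtx \<Rightarrow> nat) \<Rightarrow> bool" where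
  "edge_const k d l \<longleftrightarrow> (\<forall>x\<in>verts k. l (d x) = l x)"

definition edge_const_ind :: "nat \<Rightarrow> diagram \<Rightarrow> (vtx \<Rightarrow>
    nat) \<Rightarrow> complex" where
  "edge_const_ind k d l = (if edge_const k d l then 1 else 0)"

text \<open>Each edge of \<open>d\<close> is coloured by the position of its negative end, so the colouring
needs the \<open>2k\<close> colours \<open>0, \<dots>, 2k - 1\<close>.\<close>

definition canonical_lab :: "nat \<Rightarrow> diagram \<Rightarrow> vtx \<Rightarrow> nat" where
  "canonical_lab k d x = (if x \<in> neg_verts k then snd x else if x \<in> pos_verts k then snd (d x) else 0)"

lemma delta_ind_eq_edge_const_ind: "delta_ind k d a b = edge_const_ind k d (vlab a b)"
  unfolding delta_ind_def edge_const_ind_def delta_def edge_const_def by simp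

lemma finite_neg_verts[simp]: "finite (neg_verts k)" and finite_pos_verts[simp]: "finite (pos_verts k)"
  unfolding neg_verts_def pos_verts_def by auto

lemma neg_verts_not_pos: "x \<in> neg_verts k \<Longrightarrow> x \<notin> pos_verts k"
  unfolding neg_verts_def pos_verts_def by auto

lemma verts_neg_or_pos: "x \<in> verts k \<Longrightarrow> x \<in> neg_verts k \<or> x \<in> pos_verts k"
  unfolding neg_verts_def pos_verts_def by auto

lemma neg_verts_verts: "x \<in> neg_verts k \<Longrightarrow> x \<in> verts k"
    and pos_verts_verts: "x \<in> pos_verts k \<Longrightarrow> x \<in> verts k"
  unfolding neg_verts_def pos_verts_def by auto

lemma WB_neg_to_pos: "d \<in> WB k \<Longrightarrow> x \<in> neg_verts k \<Longrightarrow> d x \<in> pos_verts k"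
  and WB_pos_to_neg: "d \<in> WB k \<Longrightarrow> x \<in> pos_verts k \<Longrightarrow> d x \<in> neg_verts k"
  unfolding neg_verts_def pos_verts_def using WB_D by auto

lemma inj_on_snd_neg_verts: "inj_on snd (neg_verts k)"
  unfolding neg_verts_def polarity_def inj_on_def by auto

lemma snd_neg_verts: "snd ` neg_verts k = {..<2*k}"
proof
  show "snd ` neg_verts k \<subseteq> {..<2*k}" unfolding neg_verts_def verts_iff by auto
  show "{..<2*k} \<subseteq> snd ` neg_verts k"
  proof
    fix i assume i: "i \<in> {..<2*k}"
    have "(i \<ge> k, i) \<in> neg_verts k" using i unfolding neg_verts_def polarity_def verts_iff by auto
    then show "i \<in> snd ` neg_verts k" by force
  qed
qed

lemma card_neg_verts: "card (neg_verts k) = 2*k"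
  using card_image[OF inj_on_snd_neg_verts[of k]] snd_neg_verts[of k] by simp

lemma labellings_upd: "l \<in> labellings n k \<Longrightarrow> x \<in> verts k \<Longrightarrow>
    v < n \<Longrightarrow> l(x := v) \<in> labellings n k"
  unfolding labellings_def by auto

lemma vlab_labellings: "a \<in> Idx n k \<Longrightarrow> b \<in> Idx n k \<Longrightarrow>
    vlab a b \<in> labellings n k"
  unfolding labellings_def Idx_def vlab_def by (auto simp: verts_iff)

lemma edge_const_upd_iff:
  assumes d: "d \<in> WB k" and x: "x \<in> verts k"
  shows "edge_const k d (l(x := v)) \<longleftrightarrow> l (d x) = v \<and>
      (\<forall>z\<in>verts k. z \<noteq> x \<longrightarrow> z \<noteq> d x \<longrightarrow> l (d z) =
      l z)"
proof -
  have ne: "d x \<noteq> x" using WB_D(2)[OF d x] .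
  have other: "z \<noteq> x \<Longrightarrow> z \<noteq> d x \<Longrightarrow> d z \<noteq> x \<and>
      d z \<noteq> d x" for z
    using WB_involution[OF d, of z] WB_involution[OF d, of x] by metis
  have dx: "d x \<in> verts k" using WB_D(1)[OF d x] .
  have ddx: "d (d x) = x" using WB_involution[OF d] .
  show ?thesis unfolding edge_const_def
  proof (intro iffI conjI ballI impI)
    assume A: "\<forall>z\<in>verts k. (l(x := v)) (d z) = (l(x := v)) z"
    show "l (d x) = v" using A x ne by (metis fun_upd_same fun_upd_other)
    fix z assume "z \<in> verts k" "z \<noteq> x" "z \<noteq> d x"
    then show "l (d z) = l z" using A other[of z] by (metis fun_upd_other)
  next
    assume A: "l (d x) = v \<and> (\<forall>z\<in>verts k. z \<noteq> x \<longrightarrow>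
        z \<noteq> d x \<longrightarrow> l (d z) = l z)"
    fix z assume z: "z \<in> verts k"
    show "(l(x := v)) (d z) = (l(x := v)) z"
    proof (cases "z = x")
      case True then show ?thesis using A ne by simp
    next
      case False
      show ?thesis
      proof (cases "z = d x")
        case True then show ?thesis using A ne ddx by simp
      next
        case F2: False then show ?thesis using A z False other[of z] by simp
      qed
    qed
  qed
qed

lemma exchange_inv_edge_const_ind:
  assumes d: "d \<in> WB k"
  shows "exchange_inv n k (edge_const_ind k d)"
  unfolding exchange_inv_def
proof (intro ballI allI impI)
  fix l \<sigma> \<tau> assume l: "l \<in> labellings n k"
  have bij: "bij_betw d (pos_verts k) (neg_verts k)"
  proof (rule bij_betw_byWitness[of _ d])
    show "\<forall>a\<in>neg_verts k. d (d a) = a" "\<forall>a\<in>pos_verts k. d (d a) = a"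
      using WB_involution[OF d] by auto
    show "d ` neg_verts k \<subseteq> pos_verts k" "d ` pos_verts k \<subseteq> neg_verts k"
      using WB_neg_to_pos[OF d] WB_pos_to_neg[OF d] by auto
  qed
  have "(\<Sum>x\<in>neg_verts k. if l x = \<sigma> then edge_const_ind k d (l(x := \<tau>)) else 0)
      = (\<Sum>y\<in>pos_verts k. if l (d y) = \<sigma> then edge_const_ind k d (l(d y := \<tau>)) else 0)"
    using sum.reindex_bij_betw[OF bij, of "\<lambda>x. if l x = \<sigma>
        then edge_const_ind k d (l(x := \<tau>)) else 0"]
    by simp
  also have "\<dots> = (\<Sum>y\<in>pos_verts k. if l y = \<tau> then edge_const_ind k d (l(y := \<sigma>)) else 0)"
  proof (intro sum.cong refl)
    fix y assume y: "y \<in> pos_verts k"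
    have yv: "y \<in> verts k" and dyv: "d y \<in> verts k" using y pos_verts_verts WB_D(1)[OF d] by auto
    have ddy: "d (d y) = y" using WB_involution[OF d] .
    have e1: "edge_const k d (l(d y := \<tau>)) \<longleftrightarrow> l y = \<tau> \<and>
        (\<forall>z\<in>verts k. z \<noteq> d y \<longrightarrow> z \<noteq> y \<longrightarrow>
        l (d z) = l z)"
      using edge_const_upd_iff[OF d dyv] ddy by auto
    have e2: "edge_const k d (l(y := \<sigma>)) \<longleftrightarrow> l (d y) = \<sigma> \<and>
        (\<forall>z\<in>verts k. z \<noteq> y \<longrightarrow> z \<noteq> d y \<longrightarrow>
        l (d z) = l z)"
      using edge_const_upd_iff[OF d yv] by auto
    show "(if l (d y) = \<sigma> then edge_const_ind k d (l(d y := \<tau>)) else 0) = (if l y = \<tau>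
        then edge_const_ind k d (l(y := \<sigma>)) else 0)"
      unfolding edge_const_ind_def using e1 e2 by auto
  qed
  finally show "(\<Sum>x\<in>neg_verts k. if l x = \<sigma> then edge_const_ind k d (l(x := \<tau>)) else 0) =
       (\<Sum>y\<in>pos_verts k. if l y = \<tau> then edge_const_ind k d (l(y := \<sigma>)) else 0)" .
qed

lemma sum_if_swap:
  fixes c :: "'d \<Rightarrow> complex"
  assumes "finite S"
  shows "(\<Sum>x\<in>A. if Q x then \<Sum>d\<in>S. c d * f d x else 0) = (\<Sum>d\<in>S. c d *
      (\<Sum>x\<in>A. if Q x then f d x else 0))"
proof -
  have "(\<Sum>x\<in>A. if Q x then \<Sum>d\<in>S. c d * f d x else 0) =
      (\<Sum>x\<in>A. \<Sum>d\<in>S. c d * (if Q x then f d x else 0))"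
    by (intro sum.cong refl) simp
  also have "\<dots> = (\<Sum>d\<in>S. \<Sum>x\<in>A. c d * (if Q x then f d x else 0))" by (rule sum.swap)
  also have "\<dots> = (\<Sum>d\<in>S. c d * (\<Sum>x\<in>A. if Q x then f d x else 0))"
    by (simp add: sum_distrib_left)
  finally show ?thesis .
qed

lemma exchange_inv_sum:
  assumes S: "finite S" and st: "\<And>d. d \<in> S \<Longrightarrow> exchange_inv n k (T d)"
  shows "exchange_inv n k (\<lambda>l. \<Sum>d\<in>S. c d * T d l)"
  unfolding exchange_inv_def
proof (intro ballI allI impI)
  fix l \<sigma> \<tau> assume l: "l \<in> labellings n k" and s: "\<sigma> < n" and t: "\<tau> < n"
  have "(\<Sum>x\<in>neg_verts k. if l x = \<sigma> then \<Sum>d\<in>S. c d * T d (l(x := \<tau>)) else 0)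
     = (\<Sum>d\<in>S. c d * (\<Sum>x\<in>neg_verts k. if l x = \<sigma> then T d (l(x := \<tau>)) else 0))"
    by (rule sum_if_swap[OF S])
  also have "\<dots> = (\<Sum>d\<in>S. c d * (\<Sum>y\<in>pos_verts k. if l y = \<tau>
      then T d (l(y := \<sigma>)) else 0))"
    using st l s t unfolding exchange_inv_def by auto
  also have "\<dots> = (\<Sum>y\<in>pos_verts k. if l y = \<tau>
      then \<Sum>d\<in>S. c d * T d (l(y := \<sigma>)) else 0)"
    by (rule sum_if_swap[OF S, symmetric])
  finally show "(\<Sum>x\<in>neg_verts k. if l x = \<sigma> then \<Sum>d\<in>S. c d * T d (l(x := \<tau>)) else 0) =
         (\<Sum>y\<in>pos_verts k. if l y = \<tau> then \<Sum>d\<in>S. c d * T d (l(y := \<sigma>)) else 0)" .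
qed

lemma sum_if_diff: "(\<Sum>x\<in>A. if Q x then (f x - g x :: complex) else 0) =
   (\<Sum>x\<in>A. if Q x then f x else 0) - (\<Sum>x\<in>A. if Q x then g x else 0)"
proof -
  have "(\<Sum>x\<in>A. if Q x then f x - g x else 0) = (\<Sum>x\<in>A. (if Q x
      then f x else 0) - (if Q x then g x else 0))"
    by (intro sum.cong refl) simp
  then show ?thesis by (simp add: sum_subtractf)
qed

lemma exchange_inv_diff:
  assumes s1: "exchange_inv n k t1" and s2: "exchange_inv n k t2"
  shows "exchange_inv n k (\<lambda>l. t1 l - t2 l)"
  unfolding exchange_inv_def
proof (intro ballI allI impI)
  fix l \<sigma> \<tau> assume l: "l \<in> labellings n k" and s: "\<sigma> < n" and t: "\<tau> < n"
  show "(\<Sum>x\<in>neg_verts k. if l x = \<sigma> then t1 (l(x := \<tau>)) - t2 (l(x := \<tau>)) else 0) =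
        (\<Sum>y\<in>pos_verts k. if l y = \<tau> then t1 (l(y := \<sigma>)) - t2 (l(y := \<sigma>)) else 0)"
    unfolding sum_if_diff using s1 s2 l s t unfolding exchange_inv_def by simp
qed

lemma edge_const_upd_edge:
  assumes d: "d \<in> WB k" and al: "edge_const k d l" and x: "x \<in> verts k"
  shows "edge_const k d (l(x := v, d x := v))"
  unfolding edge_const_def
proof
  fix z assume z: "z \<in> verts k"
  have ne: "d x \<noteq> x" using WB_D(2)[OF d x] .
  have ddx: "d (d x) = x" using WB_involution[OF d] .
  show "(l(x := v, d x := v)) (d z) = (l(x := v, d x := v)) z"
  proof (cases "z = x \<or> z = d x")
    case True then show ?thesis using ne ddx by auto
  next
    case False
    then have "d z \<noteq> x" "d z \<noteq> d x" using WB_involution[OF d, of z] WB_involution[OF d, of x] by metis+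
    then show ?thesis using False al z unfolding edge_const_def by simp
  qed
qed

lemma sum_if_set: "finite A \<Longrightarrow> {x \<in> A. Q x} = B \<Longrightarrow> (\<Sum>x\<in>A.
    if Q x then f x else 0) = (\<Sum>x\<in>B. f x)"
  using sum.inter_filter[of A f Q] by simp

lemma canonical_lab_labellings: "d \<in> WB k \<Longrightarrow> 2*k \<le> n \<Longrightarrow>
    canonical_lab k d \<in> labellings n k"
  unfolding labellings_def canonical_lab_def using WB_pos_to_neg neg_verts_verts verts_neg_or_pos
  by (auto simp: neg_verts_def pos_verts_def verts_iff) (metis WB_D(1) verts_iff less_le_trans)

lemma edge_const_canonical_lab:
  assumes d: "d \<in> WB k"
  shows "edge_const k d (canonical_lab k d)"
  unfolding edge_const_def
proof
  fix x assume x: "x \<in> verts k"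
  consider "x \<in> neg_verts k" | "x \<in> pos_verts k" using verts_neg_or_pos[OF x] by blast
  then show "canonical_lab k d (d x) = canonical_lab k d x"
  proof cases
    case 1
    have "d x \<in> pos_verts k" using WB_neg_to_pos[OF d 1] .
    moreover have "d x \<notin> neg_verts k" using calculation neg_verts_not_pos[of "d x" k] by blast
    ultimately show ?thesis using 1 WB_involution[OF d] unfolding canonical_lab_def by auto
  next
    case 2
    have "d x \<in> neg_verts k" using WB_pos_to_neg[OF d 2] .
    moreover have "x \<notin> neg_verts k" using 2 neg_verts_not_pos[of x k] by blast
    ultimately show ?thesis using 2 unfolding canonical_lab_def by auto
  qed
qed

lemma edge_const_canonical_lab_imp_eq:
  assumes d: "d \<in> WB k" and d0: "d0 \<in> WB k" and al: "edge_const k d (canonical_lab k d0)"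
  shows "d = d0"
proof
  have neg: "d x = d0 x" if x: "x \<in> neg_verts k" for x
  proof -
    have dx: "d x \<in> pos_verts k" using WB_neg_to_pos[OF d x] .
    have "canonical_lab k d0 (d x) = canonical_lab k d0 x"
      using al neg_verts_verts[OF x] unfolding edge_const_def by auto
    moreover have "d x \<notin> neg_verts k" using dx neg_verts_not_pos[of "d x" k] by blast
    ultimately have "snd (d0 (d x)) = snd x" using dx x unfolding canonical_lab_def by simp
    then have "d0 (d x) = x" using inj_on_snd_neg_verts[of k] x WB_pos_to_neg[OF d0 dx] by (auto dest: inj_onD)
    then show ?thesis using WB_involution[OF d0] by metis
  qed
  fix x show "d x = d0 x"
  proof (cases "x \<in> verts k")
    case False then show ?thesis using WB_outside d d0 by metis
  next
    case True
    then consider "x \<in> neg_verts k" | "x \<in> pos_verts k" using verts_neg_or_pos by blast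
    then show ?thesis
    proof cases
      case 2
      have "d (d x) = d0 (d x)" using neg[OF WB_pos_to_neg[OF d 2]] .
      then show ?thesis using WB_involution[OF d] WB_involution[OF d0] by metis
    qed (use neg in blast)
  qed
qed

lemma edge_const_ind_canonical:
  assumes d: "d \<in> WB k" and d0: "d0 \<in> WB k"
  shows "edge_const_ind k d (canonical_lab k d0) = (if d = d0 then 1 else 0)"
  using edge_const_canonical_lab[OF d] edge_const_canonical_lab_imp_eq[OF d d0]
  unfolding edge_const_ind_def by auto

definition misplaced :: "nat \<Rightarrow> (vtx \<Rightarrow> nat) \<Rightarrow> vtx set" where
  "misplaced k l = {x \<in> neg_verts k. l x \<noteq> snd x}"

lemma finite_misplaced: "finite (misplaced k l)"
  unfolding misplaced_def by simp

lemma eq_canonical_if_not_misplaced: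
  assumes d: "d \<in> WB k" and l: "l \<in> labellings n k" and al: "edge_const k d l"
    and m: "misplaced k l = {}"
  shows "l = canonical_lab k d"
proof
  fix x
  have neg: "l y = snd y" if "y \<in> neg_verts k" for y using m that unfolding misplaced_def by blast
  consider "x \<in> neg_verts k" | "x \<in> pos_verts k" | "x \<notin> verts k" using verts_neg_or_pos by blast
  then show "l x = canonical_lab k d x"
  proof cases
    case 1 then show ?thesis using neg unfolding canonical_lab_def by simp
  next
    case 2
    have "x \<notin> neg_verts k" using 2 neg_verts_not_pos by blast
    then show ?thesis using 2 neg[OF WB_pos_to_neg[OF d 2]] al pos_verts_verts[OF 2]
      unfolding canonical_lab_def edge_const_def by simp
  next
    case 3
    have "x \<notin> neg_verts k" "x \<notin> pos_verts k" using 3 neg_verts_verts pos_verts_verts by blast+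
    moreover have "l x = 0" using l 3 unfolding labellings_def by blast
    ultimately show ?thesis unfolding canonical_lab_def by simp
  qed
qed

lemma card_image_fun_upd_fresh:
  assumes "finite A" "x \<in> A" "x' \<in> A" "x' \<noteq> x" "f x' = f x" "s \<notin> f ` A"
  shows "card (f(x := s) ` A) = Suc (card (f ` A))"
proof -
  have "f(x := s) ` A = insert s (f ` A)"
  proof
    show "f(x := s) ` A \<subseteq> insert s (f ` A)" by auto
    show "insert s (f ` A) \<subseteq> f(x := s) ` A"
    proof
      fix c assume "c \<in> insert s (f ` A)"
      then consider "c = s" | z where "z \<in> A" "c = f z" by blast
      then show "c \<in> f(x := s) ` A"
      proof cases
        case 1 then show ?thesis using assms(2) by (auto intro!: image_eqI[of _ _ x])
      next
        case 2
        show ?thesis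
        proof (cases "z = x")
          case True
          then have "c = (f(x := s)) x'" using 2 assms(4,5) by simp
          then show ?thesis using assms(3) by blast
        next
          case False
          then have "c = (f(x := s)) z" using 2 by simp
          then show ?thesis using 2 by blast
        qed
      qed
    qed
  qed
  then show ?thesis using assms(1,6) by simp
qed

lemma inj_on_swap_values:
  assumes "inj_on f A" "a \<in> A" "b \<in> A"
  shows "inj_on (f(a := f b, b := f a)) A"
proof (rule inj_onI)
  fix x y assume "x \<in> A" "y \<in> A" "(f(a := f b, b := f a)) x = (f(a := f b, b := f a)) y"
  then show "x = y" using assms
    by (cases "x = a"; cases "x = b"; cases "y = a"; cases "y = b") (auto dest: inj_onD)
qed

lemma exists_fresh_colour:
  assumes nk: "2*k \<le> n" and ninj: "\<not> inj_on l (neg_verts k)"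
  shows "\<exists>s<n. s \<notin> l ` neg_verts k"
proof (rule ccontr)
  assume "\<not> ?thesis"
  then have "card {..<n} \<le> card (l ` neg_verts k)" by (intro card_mono) auto
  also have "\<dots> < card (neg_verts k)"
    using ninj card_image_le[OF finite_neg_verts] eq_card_imp_inj_on[OF finite_neg_verts]
    by (metis le_neq_implies_less)
  finally show False using nk card_neg_verts[of k] by simp
qed

lemma colour_unique_on_edge:
  assumes d: "d \<in> WB k" and al: "edge_const k d l" and inj: "inj_on l (neg_verts k)"
    and p: "p \<in> neg_verts k" and z: "z \<in> verts k" "z \<noteq> p" "z \<noteq> d p"
  shows "l z \<noteq> l p"
proof (cases "z \<in> neg_verts k")
  case True
  then show ?thesis using inj p z(2) by (auto dest: inj_onD)
next
  case False
  then have zQ: "z \<in> pos_verts k" using verts_neg_or_pos[OF z(1)] by blast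
  have "d z \<noteq> p" using z(3) WB_involution[OF d, of z] by auto
  then have "l (d z) \<noteq> l p" using inj p WB_pos_to_neg[OF d zQ] by (auto dest: inj_onD)
  then show ?thesis using al z(1) unfolding edge_const_def by auto
qed

locale exchange_invariant =
  fixes n k :: nat and t :: "(vtx \<Rightarrow> nat) \<Rightarrow> complex"
  assumes exchange_inv: "exchange_inv n k t"
begin

lemma exchange_eq: "l \<in> labellings n k \<Longrightarrow> \<sigma> < n \<Longrightarrow>
    \<tau> < n \<Longrightarrow>
  (\<Sum>x\<in>neg_verts k. if l x = \<sigma> then t (l(x := \<tau>)) else 0) =
  (\<Sum>y\<in>pos_verts k. if l y = \<tau> then t (l(y := \<sigma>)) else 0)"
  using exchange_inv unfolding exchange_inv_def by blast

lemma card_colour_balance: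
  assumes l: "l \<in> labellings n k" and tl: "t l \<noteq> 0" and r: "r < n"
  shows "card {x \<in> neg_verts k. l x = r} = card {y \<in> pos_verts k. l y = r}"
proof -
  have "(\<Sum>x\<in>neg_verts k. if l x = r
      then t (l(x := r)) else 0) = (\<Sum>x\<in>{x \<in> neg_verts k. l x = r}. t l)"
    by (rule trans[OF _ sum_if_set[OF finite_neg_verts refl]]) (intro sum.cong refl, auto)
  moreover have "(\<Sum>y\<in>pos_verts k. if l y = r
      then t (l(y := r)) else 0) = (\<Sum>y\<in>{y \<in> pos_verts k. l y = r}. t l)"
    by (rule trans[OF _ sum_if_set[OF finite_pos_verts refl]]) (intro sum.cong refl, auto)
  ultimately have "(\<Sum>x\<in>{x \<in> neg_verts k. l x = r}. t l) =
      (\<Sum>y\<in>{y \<in> pos_verts k. l y = r}. t l)"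
    using exchange_eq[OF l r r] by metis
  then have "of_nat (card {x \<in> neg_verts k. l x = r}) * t l = of_nat (card {y \<in> pos_verts k. l y = r}) * t l"
    by simp
  then show ?thesis using tl by simp
qed

lemma colours_neg_eq_pos:
  assumes l: "l \<in> labellings n k" and tl: "t l \<noteq> 0"
  shows "l ` neg_verts k = l ` pos_verts k"
proof (intro set_eqI)
  fix r
  show "r \<in> l ` neg_verts k \<longleftrightarrow> r \<in> l ` pos_verts k"
  proof (cases "r < n")
    case True
    have fin: "finite {x \<in> neg_verts k. l x = r}" "finite {y \<in> pos_verts k. l y = r}" by simp_all
    have "card {x \<in> neg_verts k. l x = r} = card {y \<in> pos_verts k. l y = r}"
      by (rule card_colour_balance[OF l tl True])
    then have empty: "{x \<in> neg_verts k. l x = r} = {} \<longleftrightarrow> {y \<in> pos_verts k. l y = r} = {}"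
      by (simp only: card_0_eq[OF fin(1), symmetric] card_0_eq[OF fin(2), symmetric])
    have "r \<in> l ` A \<longleftrightarrow> {x \<in> A. l x = r} \<noteq> {}" for A by auto
    then show ?thesis by (simp only: empty)
  next
    case False
    then have "r \<notin> l ` verts k" using l unfolding labellings_def by auto
    then show ?thesis using neg_verts_verts pos_verts_verts by blast
  qed
qed

lemma exchange_recolour_edge:
  assumes d: "d \<in> WB k" and l: "l \<in> labellings n k" and al: "edge_const k d l"
      and inj: "inj_on l (neg_verts k)"
    and p: "p \<in> neg_verts k" and s: "s < n" and sP: "s \<notin> l ` neg_verts k"
  shows "t (l(p := s, d p := s)) = t l"
proof -
  let ?r = "l p"
  let ?\<mu> = "l(p := s)"
  have pv: "p \<in> verts k" using neg_verts_verts[OF p] .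
  have dp: "d p \<in> pos_verts k" using WB_neg_to_pos[OF d p] .
  have r: "?r < n" using l pv unfolding labellings_def by auto
  have mu: "?\<mu> \<in> labellings n k" using labellings_upd[OF l pv s] .
  have S1: "{x \<in> neg_verts k. ?\<mu> x = s} = {p}" using p sP by auto
  have S2: "{y \<in> pos_verts k. ?\<mu> y = ?r} = {d p}"
  proof (intro set_eqI iffI)
    fix y assume y: "y \<in> {y \<in> pos_verts k. ?\<mu> y = ?r}"
    then have yQ: "y \<in> pos_verts k" and ly: "l y = ?r" using neg_verts_not_pos[OF p] by (auto split: if_splits)
    have "l (d y) = l p" using al ly pos_verts_verts[OF yQ] unfolding edge_const_def by auto
    then have "d y = p" using inj WB_pos_to_neg[OF d yQ] p by (auto dest: inj_onD)
    then show "y \<in> {d p}" using WB_involution[OF d, of y] by auto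
  next
    fix y assume "y \<in> {d p}"
    then show "y \<in> {y \<in> pos_verts k. ?\<mu> y = ?r}" using dp al pv neg_verts_not_pos[OF p]
      unfolding edge_const_def by auto
  qed
  have L: "(\<Sum>x\<in>neg_verts k. if ?\<mu> x = s then t (?\<mu>(x := ?r)) else 0) = t (?\<mu>(p := ?r))"
    using sum_if_set[OF finite_neg_verts S1, of "\<lambda>x. t (?\<mu>(x := ?r))"] by simp
  have R: "(\<Sum>y\<in>pos_verts k. if ?\<mu> y = ?r then t (?\<mu>(y := s)) else 0) = t (?\<mu>(d p := s))"
    using sum_if_set[OF finite_pos_verts S2, of "\<lambda>y. t (?\<mu>(y := s))"] by simp
  have "t (?\<mu>(p := ?r)) = t (?\<mu>(d p := s))" using exchange_eq[OF mu s r] L R by simp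
  moreover have "?\<mu>(p := ?r) = l" by simp
  ultimately show ?thesis by simp
qed

lemma exchange_swap_edges:
  assumes d: "d \<in> WB k" and l: "l \<in> labellings n k" and al: "edge_const k d l"
      and inj: "inj_on l (neg_verts k)"
    and p1: "p1 \<in> neg_verts k" and p2: "p2 \<in> neg_verts k" and ne: "p1 \<noteq> p2"
  shows "t (l(p2 := l p1, d p2 := l p1, d p1 := l p2, p1 := l p2)) = t l"
proof -
  define r where "r = l p1"
  define s where "s = l p2"
  define q1 where "q1 = d p1"
  define q2 where "q2 = d p2"
  have p1v: "p1 \<in> verts k" and p2v: "p2 \<in> verts k" using p1 p2 neg_verts_verts by auto
  have q1: "q1 \<in> pos_verts k" and q2: "q2 \<in> pos_verts k" using WB_neg_to_pos[OF d] p1 p2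
    unfolding q1_def q2_def by auto
  have q1v: "q1 \<in> verts k" and q2v: "q2 \<in> verts k" using q1 q2 pos_verts_verts by auto
  have dq1: "d q1 = p1" and dq2: "d q2 = p2" unfolding q1_def q2_def using WB_involution[OF d] by auto
  have qne: "q1 \<noteq> q2" using ne dq1 dq2 by metis
  have pq: "p1 \<noteq> q1" "p1 \<noteq> q2" "p2 \<noteq> q1" "p2 \<noteq> q2"
    using neg_verts_not_pos p1 p2 q1 q2 by metis+
  have qP: "q1 \<notin> neg_verts k" "q2 \<notin> neg_verts k" using q1 q2 neg_verts_not_pos by blast+
  have pQ: "p1 \<notin> pos_verts k" "p2 \<notin> pos_verts k" using p1 p2 neg_verts_not_pos by blast+
  have rs: "r \<noteq> s" using inj p1 p2 ne unfolding r_def s_def by (auto dest: inj_onD)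
  have lq1: "l q1 = r" and lq2: "l q2 = s" using al p1v p2v unfolding edge_const_def r_def s_def q1_def q2_def by auto
  have rn: "r < n" and sn: "s < n" using l p1v p2v unfolding labellings_def r_def s_def by auto
  have othP: "l z \<noteq> r \<and> l z \<noteq> s" if "z \<in> neg_verts k" "z \<noteq> p1" "z \<noteq> p2" for z
    using that neg_verts_verts neg_verts_not_pos WB_neg_to_pos[OF d] p1 p2
      colour_unique_on_edge[OF d al inj] unfolding r_def s_def by metis
  have othQ: "l z \<noteq> r \<and> l z \<noteq> s" if "z \<in> pos_verts k" "z \<noteq> q1" "z \<noteq> q2" for z
    using that pos_verts_verts neg_verts_not_pos p1 p2
      colour_unique_on_edge[OF d al inj] unfolding r_def s_def q1_def q2_def by metis
  define \<rho> where "\<rho> = l(p2 := r, q2 := r)"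
  define \<mu>1 where "\<mu>1 = \<rho>(q1 := s)"
  define \<mu>2 where "\<mu>2 = \<rho>(p2 := s)"
  have rho: "\<rho> \<in> labellings n k" unfolding \<rho>_def using l p2v q2v rn by (intro labellings_upd) auto
  have mu1: "\<mu>1 \<in> labellings n k" unfolding \<mu>1_def using rho q1v sn by (intro labellings_upd) auto
  have mu2: "\<mu>2 \<in> labellings n k" unfolding \<mu>2_def using rho p2v sn by (intro labellings_upd) auto
  have A1: "{x \<in> neg_verts k. \<mu>1 x = r} = {p1, p2}"
    using othP pq p1 p2 qP unfolding \<mu>1_def \<rho>_def r_def by auto
  have B1: "{y \<in> pos_verts k. \<mu>1 y = s} = {q1}"
    using othQ pq q1 rs pQ unfolding \<mu>1_def \<rho>_def by auto
  have A2: "{x \<in> neg_verts k. \<mu>2 x = s} = {p2}"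
    using othP pq p2 rs qP r_def unfolding \<mu>2_def \<rho>_def s_def by auto
  have B2: "{y \<in> pos_verts k. \<mu>2 y = r} = {q1, q2}"
    using othQ pq q1 q2 rs qne lq1 pQ unfolding \<mu>2_def \<rho>_def by auto
  have L1: "(\<Sum>x\<in>neg_verts k. if \<mu>1 x = r
      then t (\<mu>1(x := s)) else 0) = t (\<mu>1(p1 := s)) + t (\<mu>1(p2 := s))"
    using sum_if_set[OF finite_neg_verts A1, of "\<lambda>x. t (\<mu>1(x := s))"] ne by simp
  have R1: "(\<Sum>y\<in>pos_verts k. if \<mu>1 y = s then t (\<mu>1(y := r)) else 0) = t (\<mu>1(q1 := r))"
    using sum_if_set[OF finite_pos_verts B1, of "\<lambda>y. t (\<mu>1(y := r))"] by simp
  have L2: "(\<Sum>x\<in>neg_verts k. if \<mu>2 x = s then t (\<mu>2(x := r)) else 0) = t (\<mu>2(p2 := r))"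
    using sum_if_set[OF finite_neg_verts A2, of "\<lambda>x. t (\<mu>2(x := r))"] by simp
  have R2: "(\<Sum>y\<in>pos_verts k. if \<mu>2 y = r
      then t (\<mu>2(y := s)) else 0) = t (\<mu>2(q1 := s)) + t (\<mu>2(q2 := s))"
    using sum_if_set[OF finite_pos_verts B2, of "\<lambda>y. t (\<mu>2(y := s))"] qne by simp
  have E1: "t (\<mu>1(p1 := s)) + t (\<mu>1(p2 := s)) = t (\<mu>1(q1 := r))"
    using exchange_eq[OF mu1 rn sn] L1 R1 by simp
  have E2: "t (\<mu>2(p2 := r)) = t (\<mu>2(q1 := s)) + t (\<mu>2(q2 := s))"
    using exchange_eq[OF mu2 sn rn] L2 R2 by simp
  have i1: "\<mu>1(q1 := r) = \<rho>" unfolding \<mu>1_def \<rho>_def using lq1 pq qne by (auto simp: fun_eq_iff)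
  have i2: "\<mu>2(p2 := r) = \<rho>" unfolding \<mu>2_def \<rho>_def by (auto simp: fun_eq_iff)
  have i3: "\<mu>1(p2 := s) = \<mu>2(q1 := s)" unfolding \<mu>1_def \<mu>2_def \<rho>_def using pq
    by (auto simp: fun_eq_iff)
  have i4: "\<mu>2(q2 := s) = l" unfolding \<mu>2_def \<rho>_def using lq2 s_def pq by (auto simp: fun_eq_iff)
  have i5: "\<mu>1(p1 := s) = l(p2 := l p1, d p2 := l p1, d p1 := l p2, p1 := l p2)"
    unfolding \<mu>1_def \<rho>_def r_def s_def q1_def q2_def by simp
  show ?thesis using E1 E2 i1 i2 i3 i4 i5 by (metis add_right_cancel add.commute)
qed

lemma closer_by_swap:
  assumes d: "d \<in> WB k" and l: "l \<in> labellings n k" and al: "edge_const k d l"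
    and inj: "inj_on l (neg_verts k)" and p: "p \<in> misplaced k l"
    and p': "p' \<in> neg_verts k" "l p' = snd p"
  shows "\<exists>l'\<in>labellings n k. edge_const k d l' \<and> inj_on l' (neg_verts k) \<and> t l' = t l \<and>
    misplaced k l' \<subset> misplaced k l"
proof -
  have pP: "p \<in> neg_verts k" and lp: "l p \<noteq> snd p" using p unfolding misplaced_def by auto
  have ne: "p \<noteq> p'" using lp p' by auto
  have pv: "p \<in> verts k" and p'v: "p' \<in> verts k" using pP p' neg_verts_verts by auto
  define l' where "l' = l(p := l p', d p := l p', d p' := l p, p' := l p)"
  have "t l' = t l" unfolding l'_def using exchange_swap_edges[OF d l al inj p'(1) pP ne[symmetric]] by simp
  moreover have "l' \<in> labellings n k"
    unfolding l'_def using l pv p'v WB_D(1)[OF d] by (intro labellings_upd) (auto simp: labellings_def)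
  moreover have "edge_const k d l'"
  proof -
    have "edge_const k d (l(p := l p', d p := l p'))" using edge_const_upd_edge[OF d al pv] .
    then have "edge_const k d ((l(p := l p', d p := l p'))(d p' := l p, d (d p') := l p))"
      using edge_const_upd_edge[OF d _ WB_D(1)[OF d p'v]] by blast
    then show ?thesis unfolding l'_def using WB_involution[OF d, of p'] by simp
  qed
  moreover have l'P: "l' z = (if z = p then l p' else if z = p' then l p else l z)" if "z \<in> neg_verts k" for z
  proof -
    have "d p \<noteq> z" "d p' \<noteq> z" using WB_neg_to_pos[OF d] neg_verts_not_pos pP p'(1) that by metis+
    then show ?thesis unfolding l'_def using ne by auto
  qed
  have "inj_on l' (neg_verts k) = inj_on (l(p := l p', p' := l p)) (neg_verts k)"
    by (rule inj_on_cong) (simp add: l'P ne)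
  then have "inj_on l' (neg_verts k)" using inj_on_swap_values[OF inj pP p'(1)] by simp
  moreover have "misplaced k l' \<subset> misplaced k l"
  proof -
    have sne: "snd p' \<noteq> snd p" using inj_on_snd_neg_verts[of k] pP p' ne by (auto dest: inj_onD)
    have "misplaced k l' \<subseteq> misplaced k l - {p}"
    proof
      fix z assume "z \<in> misplaced k l'"
      then have zP: "z \<in> neg_verts k" and lz: "l' z \<noteq> snd z" unfolding misplaced_def by auto
      show "z \<in> misplaced k l - {p}"
        using l'P[OF zP] lz zP p'(2) sne ne unfolding misplaced_def
        by (cases "z = p"; cases "z = p'") simp_all
    qed
    then show ?thesis using p by blast
  qed
  ultimately show ?thesis by blast
qed

lemma closer_by_recolour:
  assumes d: "d \<in> WB k" and l: "l \<in> labellings n k" and al: "edge_const k d l"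
    and inj: "inj_on l (neg_verts k)" and p: "p \<in> misplaced k l"
    and fresh: "snd p \<notin> l ` neg_verts k" and n: "snd p < n"
  shows "\<exists>l'\<in>labellings n k. edge_const k d l' \<and> inj_on l' (neg_verts k) \<and> t l' = t l \<and>
    misplaced k l' \<subset> misplaced k l"
proof -
  have pP: "p \<in> neg_verts k" using p unfolding misplaced_def by auto
  have pv: "p \<in> verts k" using neg_verts_verts[OF pP] .
  define l' where "l' = l(p := snd p, d p := snd p)"
  have "t l' = t l" unfolding l'_def using exchange_recolour_edge[OF d l al inj pP n fresh] .
  moreover have "l' \<in> labellings n k"
    unfolding l'_def using l pv n WB_D(1)[OF d] by (intro labellings_upd) auto
  moreover have "edge_const k d l'" unfolding l'_def using edge_const_upd_edge[OF d al pv] .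
  moreover have l'P: "l' z = (if z = p then snd p else l z)" if "z \<in> neg_verts k" for z
  proof -
    have "d p \<noteq> z" using WB_neg_to_pos[OF d pP] neg_verts_not_pos that by metis
    then show ?thesis unfolding l'_def by auto
  qed
  have "inj_on l' (neg_verts k)"
  proof (rule inj_onI)
    fix x y assume x: "x \<in> neg_verts k" and y: "y \<in> neg_verts k" and e: "l' x = l' y"
    have "l x \<noteq> snd p" "l y \<noteq> snd p" using fresh x y by (metis imageI)+
    then show "x = y" using e l'P[OF x] l'P[OF y] inj_onD[OF inj _ x y]
      by (cases "x = p"; cases "y = p") simp_all
  qed
  moreover have "misplaced k l' \<subset> misplaced k l"
  proof -
    have "misplaced k l' \<subseteq> misplaced k l - {p}"
    proof
      fix z assume "z \<in> misplaced k l'"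
      then have zP: "z \<in> neg_verts k" and lz: "l' z \<noteq> snd z" unfolding misplaced_def by auto
      show "z \<in> misplaced k l - {p}"
        using l'P[OF zP] lz zP unfolding misplaced_def by (cases "z = p") simp_all
    qed
    then show ?thesis using p by blast
  qed
  ultimately show ?thesis by blast
qed

text \<open>Moving colours into their canonical place one negative vertex at a time does not change
\<open>t\<close>; the free colour needed for the moves exists because \<open>2k \<le> n\<close>.\<close>

lemma value_eq_canonical:
  assumes nk: "2*k \<le> n" and d: "d \<in> WB k"
  shows "l \<in> labellings n k \<Longrightarrow> edge_const k d l \<Longrightarrow>
      inj_on l (neg_verts k) \<Longrightarrow> t l = t (canonical_lab k d)"
proof (induction "card (misplaced k l)" arbitrary: l rule: less_induct)
  case less
  show ?case
  proof (cases "misplaced k l = {}")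
    case True
    then show ?thesis using eq_canonical_if_not_misplaced[OF d less.prems(1,2)] by simp
  next
    case False
    then obtain p where p: "p \<in> misplaced k l" by blast
    have n: "snd p < n" using p nk unfolding misplaced_def neg_verts_def verts_iff by auto
    obtain l' where l': "l' \<in> labellings n k" "edge_const k d l'" "inj_on l' (neg_verts k)"
      "t l' = t l" "misplaced k l' \<subset> misplaced k l"
    proof (cases "snd p \<in> l ` neg_verts k")
      case True
      then obtain p' where "p' \<in> neg_verts k" "l p' = snd p" by (metis imageE)
      then show ?thesis using closer_by_swap[OF d less.prems p] that by blast
    next
      case False
      then show ?thesis using closer_by_recolour[OF d less.prems p False n] that by blast
    qed
    have "card (misplaced k l') < card (misplaced k l)"
      using psubset_card_mono[OF finite_misplaced l'(5)] .
    then show ?thesis using less.hyps l' by metis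
  qed
qed

lemma unique_partner_colour:
  assumes l: "l \<in> labellings n k" and tl: "t l \<noteq> 0" and inj: "inj_on l (neg_verts k)"
    and x: "x \<in> verts k"
  shows "\<exists>!y. y \<in> verts k \<and> polarity k y \<noteq> polarity k x \<and> l y = l x"
proof -
  let ?r = "l x"
  have r: "?r < n" using l x unfolding labellings_def by auto
  have "?r \<in> l ` neg_verts k \<union> l ` pos_verts k" using verts_neg_or_pos[OF x] by blast
  then have "?r \<in> l ` neg_verts k" using colours_neg_eq_pos[OF l tl] by simp
  then obtain z where z: "z \<in> neg_verts k" "l z = ?r" by (metis imageE)
  have neg: "{y \<in> neg_verts k. l y = ?r} = {z}"
  proof (intro set_eqI iffI)
    fix y assume "y \<in> {y \<in> neg_verts k. l y = ?r}"
    then show "y \<in> {z}" using z inj_onD[OF inj, of y z] by simp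
  qed (use z in simp)
  then have "card {y \<in> pos_verts k. l y = ?r} = 1"
    using card_colour_balance[OF l tl r] by simp
  then obtain z' where pos: "{y \<in> pos_verts k. l y = ?r} = {z'}" using card_1_singletonE by blast
  have "{y. y \<in> verts k \<and> polarity k y \<noteq> polarity k x \<and> l y = ?r} =
    (if polarity k x then {y \<in> neg_verts k. l y = ?r} else {y \<in> pos_verts k. l y = ?r})"
    unfolding neg_verts_def pos_verts_def by auto
  then obtain w where w: "{y. y \<in> verts k \<and> polarity k y \<noteq> polarity k x \<and> l y = ?r} = {w}"
    using neg pos by (cases "polarity k x") simp_all
  show ?thesis
  proof (rule ex1I[of _ w])
    show "w \<in> verts k \<and> polarity k w \<noteq> polarity k x \<and> l w = ?r" using w by blast
  next
    fix y assume "y \<in> verts k \<and> polarity k y \<noteq> polarity k x \<and> l y = ?r"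
    then show "y = w" using w by blast
  qed
qed

lemma injective_support_diagram:
  assumes l: "l \<in> labellings n k" and tl: "t l \<noteq> 0" and inj: "inj_on l (neg_verts k)"
  shows "\<exists>d\<in>WB k. edge_const k d l"
proof -
  let ?P = "\<lambda>x y. y \<in> verts k \<and> polarity k y \<noteq> polarity k x \<and> l y = l x"
  define d where "d x = (if x \<in> verts k then (THE y. ?P x y) else x)" for x
  have dprop: "?P x (d x)" if x: "x \<in> verts k" for x
    using theI'[OF unique_partner_colour[OF l tl inj x]] x unfolding d_def by simp
  have "d (d x) = x" if x: "x \<in> verts k" for x
  proof -
    have dx: "d x \<in> verts k" using dprop[OF x] by simp
    have "(THE y. ?P (d x) y) = x"
      by (rule the1_equality[OF unique_partner_colour[OF l tl inj dx]]) (use dprop[OF x] x in auto)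
    then show ?thesis using dx unfolding d_def[of "d x"] by simp
  qed
  then have "d \<in> WB k" using dprop by (intro WB_I) (auto simp: d_def)
  moreover have "edge_const k d l" unfolding edge_const_def using dprop by auto
  ultimately show ?thesis by blast
qed

text \<open>If some colour is repeated on the negative vertices, recolour one of its occurrences on the
positive side to a free colour \<open>s\<close>: the exchange equation between \<open>s\<close>
and the repeated colour expresses \<open>t l\<close> through labellings with one colour more.\<close>

lemma value_zero_if_not_injective:
  assumes nk: "2*k \<le> n" and l: "l \<in> labellings n k" and ninj: "\<not> inj_on l (neg_verts k)"
    and more_colours: "\<And>l'. l' \<in> labellings n k \<Longrightarrow>
        card (l ` neg_verts k) < card (l' ` neg_verts k) \<Longrightarrow> t l' = 0"
  shows "t l = 0"
proof (rule ccontr)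
  assume tl: "t l \<noteq> 0"
  obtain x1 x2 where x: "x1 \<in> neg_verts k" "x2 \<in> neg_verts k" "x1 \<noteq> x2" "l x1 = l x2"
    using ninj unfolding inj_on_def by blast
  define r where "r = l x1"
  have rn: "r < n" unfolding r_def using l neg_verts_verts[OF x(1)] unfolding labellings_def by auto
  obtain s where s: "s < n" "s \<notin> l ` neg_verts k" using exists_fresh_colour[OF nk ninj] by blast
  have sQ: "s \<notin> l ` pos_verts k" using s(2) colours_neg_eq_pos[OF l tl] by simp
  have "r \<in> l ` pos_verts k" using colours_neg_eq_pos[OF l tl] x(1) unfolding r_def by blast
  then obtain q0 where q0: "q0 \<in> pos_verts k" "l q0 = r" by (metis imageE)
  define \<mu> where "\<mu> = l(q0 := s)"
  have mu: "\<mu> \<in> labellings n k" unfolding \<mu>_def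
    using labellings_upd[OF l pos_verts_verts[OF q0(1)] s(1)] .
  have only_q0: "{y \<in> pos_verts k. \<mu> y = s} = {q0}"
  proof (intro set_eqI iffI)
    fix y assume y: "y \<in> {y \<in> pos_verts k. \<mu> y = s}"
    show "y \<in> {q0}"
    proof (rule ccontr)
      assume "y \<notin> {q0}"
      then have "l y = s" using y unfolding \<mu>_def by simp
      then show False using sQ y by blast
    qed
  qed (use q0 in \<open>simp add: \<mu>_def\<close>)
  have "(\<Sum>y\<in>pos_verts k. if \<mu> y = s then t (\<mu>(y := r)) else 0) = t (\<mu>(q0 := r))"
    using sum_if_set[OF finite_pos_verts only_q0] by simp
  also have "\<mu>(q0 := r) = l" unfolding \<mu>_def using q0(2) by auto
  finally have pos_side: "(\<Sum>y\<in>pos_verts k. if \<mu> y = s then t (\<mu>(y := r)) else 0) = t l" .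
  have "t (\<mu>(x := s)) = 0" if xP: "x \<in> neg_verts k" and lx: "\<mu> x = r" for x
  proof -
    have q0x: "q0 \<noteq> z" if "z \<in> neg_verts k" for z using neg_verts_not_pos[OF that] q0(1) by blast
    have lx': "l x = r" using lx q0x[OF xP] unfolding \<mu>_def by simp
    obtain x' where x': "x' \<in> neg_verts k" "x' \<noteq> x" "l x' = l x"
    proof (cases "x = x1")
      case True then show ?thesis using that[of x2] x lx' r_def by simp
    next
      case False then show ?thesis using that[of x1] x lx' r_def by simp
    qed
    have "\<mu>(x := s) ` neg_verts k = l(x := s) ` neg_verts k"
    proof (rule image_cong[OF refl])
      fix z assume "z \<in> neg_verts k"
      then show "(\<mu>(x := s)) z = (l(x := s)) z" using q0x[of z] unfolding \<mu>_def by simp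
    qed
    then have "card (\<mu>(x := s) ` neg_verts k) = Suc (card (l ` neg_verts k))"
      using card_image_fun_upd_fresh[OF finite_neg_verts xP x' s(2)] by simp
    then show ?thesis
      using more_colours labellings_upd[OF mu neg_verts_verts[OF xP] s(1)] by simp
  qed
  then have "(\<Sum>x\<in>neg_verts k. if \<mu> x = r then t (\<mu>(x := s)) else 0) = 0"
    by (intro sum.neutral) simp
  then show False using exchange_eq[OF mu rn s(1)] pos_side tl by simp
qed

text \<open>Induction on the number of colours missing on the negative vertices; a labelling that is injective
there and has \<open>t \<noteq> 0\<close> is constant along the edges of some diagram.\<close>

theorem vanishes_if_zero_on_canonical:
  assumes nk: "2*k \<le> n" and z: "\<And>d. d \<in> WB k \<Longrightarrow> t (canonical_lab k d) = 0"
  shows "l \<in> labellings n k \<Longrightarrow> t l = 0"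
proof (induction "2*k - card (l ` neg_verts k)" arbitrary: l rule: less_induct)
  case less
  show ?case
  proof (cases "inj_on l (neg_verts k)")
    case True
    show ?thesis
    proof (rule ccontr)
      assume "t l \<noteq> 0"
      then obtain d where "d \<in> WB k" "edge_const k d l"
        using injective_support_diagram[OF less.prems _ True] by blast
      then show False using value_eq_canonical[OF nk _ less.prems _ True] z \<open>t l \<noteq> 0\<close> by metis
    qed
  next
    case False
    show ?thesis
    proof (rule value_zero_if_not_injective[OF nk less.prems False])
      fix l' assume l': "l' \<in> labellings n k" "card (l ` neg_verts k) < card (l' ` neg_verts k)"
      have "card (l' ` neg_verts k) \<le> 2*k"
        using card_image_le[OF finite_neg_verts[of k], of l'] card_neg_verts[of k] by simp
      then show "t l' = 0" using less.hyps[OF _ l'(1)] l'(2) by simp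
    qed
  qed
qed

end

section \<open>The action of \<open>gl\<^sub>n\<close>\<close>

definition unit_mat :: "nat \<Rightarrow> nat \<Rightarrow> nat \<Rightarrow> nat \<Rightarrow> complex" where
  "unit_mat r s = (\<lambda>i j. if i = r \<and> j = s then 1 else 0)"

definition indic :: "bool \<Rightarrow> complex" where "indic P = (if P then 1 else 0)"

lemma upd_Idx: "a \<in> Idx n k \<Longrightarrow> i < 2*k \<Longrightarrow> r < n \<Longrightarrow>
    a(i := r) \<in> Idx n k"
  unfolding Idx_def by auto

lemma glact_basis_unit_mat:
  assumes r: "r < n" and s: "s < n"
  shows "glact_basis k n (unit_mat r s) a a' =
    (\<Sum>i<k. indic (a' = a(i := r) \<and> a i = s)) - (\<Sum>i\<in>{k..<2*k}. indic (a' = a(i :=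
        s) \<and> a i = r))"
proof -
  have 1: "(\<Sum>r'<n. if a' = a(i := r')
      then unit_mat r s r' (a i) else 0) = indic (a' = a(i := r) \<and> a i = s)" for i
  proof -
    have "(\<Sum>r'<n. if a' = a(i := r') then unit_mat r s r' (a i) else 0) = (\<Sum>r'<n. if r' = r
        then indic (a' = a(i := r) \<and> a i = s) else 0)"
      by (intro sum.cong refl) (auto simp: unit_mat_def indic_def)
    also have "\<dots> = indic (a' = a(i := r) \<and> a i = s)" using r by (simp add: sum.delta)
    finally show ?thesis .
  qed
  have 2: "(\<Sum>r'<n. if a' = a(i := r')
      then unit_mat r s (a i) r' else 0) = indic (a' = a(i := s) \<and> a i = r)" for i
  proof -
    have "(\<Sum>r'<n. if a' = a(i := r') then unit_mat r s (a i) r' else 0) = (\<Sum>r'<n. if r' = s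
        then indic (a' = a(i := s) \<and> a i = r) else 0)"
      by (intro sum.cong refl) (auto simp: unit_mat_def indic_def)
    also have "\<dots> = indic (a' = a(i := s) \<and> a i = r)" using s by (simp add: sum.delta)
    finally show ?thesis .
  qed
  show ?thesis unfolding glact_basis_def using 1 2 by simp
qed

lemma sum_Idx_indic_point: "c \<in> Idx n k \<Longrightarrow> (\<Sum>a'\<in>Idx n k. T a' * indic (a' =
    c \<and> P)) = (if P then T c else 0)"
  unfolding indic_def by (simp add: if_distrib[of "\<lambda>x. _ * x"] sum.delta' cong: if_cong)

lemma sum_glact_basis_out:
  assumes r: "r < n" and s: "s < n" and a: "a \<in> Idx n k"
  shows "(\<Sum>a'\<in>Idx n k. T a' * glact_basis k n (unit_mat r s) a a') =
     (\<Sum>i<k. if a i = s then T (a(i := r)) else 0) - (\<Sum>i\<in>{k..<2*k}. if a i = r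
         then T (a(i := s)) else 0)"
proof -
  have "(\<Sum>a'\<in>Idx n k. T a' * glact_basis k n (unit_mat r s) a a') =
     (\<Sum>i<k. \<Sum>a'\<in>Idx n k. T a' * indic (a' = a(i := r) \<and> a i = s)) -
     (\<Sum>i\<in>{k..<2*k}. \<Sum>a'\<in>Idx n k. T a' * indic (a' = a(i := s) \<and> a i = r))"
    unfolding glact_basis_unit_mat[OF r s]
      by (simp add: right_diff_distrib sum_subtractf sum_distrib_left sum.swap[of _ "Idx n k"])
  also have "\<dots> = (\<Sum>i<k. if a i = s then T (a(i := r)) else 0) - (\<Sum>i\<in>{k..<2*k}.
      if a i = r then T (a(i := s)) else 0)"
  proof -
    have "(\<Sum>a'\<in>Idx n k. T a' * indic (a' = a(i := r) \<and> a i = s)) = (if a i = s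
        then T (a(i := r)) else 0)" if "i < k" for i
      using sum_Idx_indic_point[OF upd_Idx[OF a _ r], of i T "a i = s"] that by simp
    moreover have "(\<Sum>a'\<in>Idx n k. T a' * indic (a' = a(i := s) \<and> a i = r)) = (if a i = r
        then T (a(i := s)) else 0)" if "i \<in> {k..<2*k}" for i
      using sum_Idx_indic_point[OF upd_Idx[OF a _ s], of i T "a i = r"] that by simp
    ultimately show ?thesis by simp
  qed
  finally show ?thesis .
qed

lemma sum_Idx_upd_pre:
  assumes b: "b \<in> Idx n k" and i: "i < 2*k" and s: "s < n"
  shows "(\<Sum>a'\<in>Idx n k. T a' * indic (b = a'(i := r) \<and> a' i = s)) = (if b i = r
      then T (b(i := s)) else 0)"
proof -
  have "(\<Sum>a'\<in>Idx n k. T a' * indic (b = a'(i := r) \<and> a' i = s)) =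
      (\<Sum>a'\<in>Idx n k. T a' * indic (a' = b(i := s) \<and> b i = r))"
  proof (intro sum.cong refl)
    fix a' assume "a' \<in> Idx n k"
    have "(b = a'(i := r) \<and> a' i = s) \<longleftrightarrow> (a' = b(i := s) \<and> b i = r)"
      by (auto simp: fun_eq_iff)
    then show "T a' * indic (b = a'(i := r) \<and> a' i = s) = T a' * indic (a' = b(i := s) \<and> b i = r)" by simp
  qed
  also have "\<dots> = (if b i = r then T (b(i := s)) else 0)" using sum_Idx_indic_point[OF upd_Idx[OF b i s]] .
  finally show ?thesis .
qed

lemma sum_glact_basis_in:
  assumes r: "r < n" and s: "s < n" and b: "b \<in> Idx n k"
  shows "(\<Sum>a'\<in>Idx n k. T a' * glact_basis k n (unit_mat r s) a' b) =
     (\<Sum>i<k. if b i = r then T (b(i := s)) else 0) - (\<Sum>i\<in>{k..<2*k}. if b i = s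
         then T (b(i := r)) else 0)"
proof -
  have "(\<Sum>a'\<in>Idx n k. T a' * glact_basis k n (unit_mat r s) a' b) =
     (\<Sum>i<k. \<Sum>a'\<in>Idx n k. T a' * indic (b = a'(i := r) \<and> a' i = s)) -
     (\<Sum>i\<in>{k..<2*k}. \<Sum>a'\<in>Idx n k. T a' * indic (b = a'(i := s) \<and> a' i = r))"
    unfolding glact_basis_unit_mat[OF r s]
      by (simp add: right_diff_distrib sum_subtractf sum_distrib_left sum.swap[of _ "Idx n k"])
  also have "\<dots> = (\<Sum>i<k. if b i = r then T (b(i := s)) else 0) - (\<Sum>i\<in>{k..<2*k}.
      if b i = s then T (b(i := r)) else 0)"
  proof -
    have "(\<Sum>a'\<in>Idx n k. T a' * indic (b = a'(i := r) \<and> a' i = s)) = (if b i = r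
        then T (b(i := s)) else 0)" if "i < k" for i
      using sum_Idx_upd_pre[OF b _ s, of i T r] that by simp
    moreover have "(\<Sum>a'\<in>Idx n k. T a' * indic (b = a'(i := s) \<and> a' i = r)) = (if b i = s
        then T (b(i := r)) else 0)" if "i \<in> {k..<2*k}" for i
      using sum_Idx_upd_pre[OF b _ r, of i T s] that by simp
    ultimately show ?thesis by simp
  qed
  finally show ?thesis .
qed

definition mat_op :: "nat \<Rightarrow> nat \<Rightarrow> ((nat \<Rightarrow> nat) \<Rightarrow>
    (nat \<Rightarrow> nat) \<Rightarrow> complex) \<Rightarrow> ((nat \<Rightarrow> nat) \<Rightarrow>
    complex) \<Rightarrow> (nat \<Rightarrow> nat) \<Rightarrow> complex" where
  "mat_op n k T v = (\<lambda>b. if b \<in> Idx n k then (\<Sum>a\<in>Idx n k. T b a * v a) else 0)"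

text \<open>The matrix form of \<open>T E\<^sub>r\<^sub>s = E\<^sub>r\<^sub>s T\<close> for the action
\<open>glact\<close> of the matrix unit \<open>E\<^sub>r\<^sub>s\<close>.\<close>

definition commutes_unit :: "nat \<Rightarrow> nat \<Rightarrow> ((nat \<Rightarrow> nat) \<Rightarrow>
    (nat \<Rightarrow> nat) \<Rightarrow> complex) \<Rightarrow> nat \<Rightarrow> nat \<Rightarrow>
    bool" where
  "commutes_unit n k T r s \<longleftrightarrow> (\<forall>a\<in>Idx n k. \<forall>b\<in>Idx n k.
     (\<Sum>i<k. if a i = s then T b (a(i := r)) else 0) - (\<Sum>i\<in>{k..<2*k}. if a i = r
         then T b (a(i := s)) else 0)
   = (\<Sum>i<k. if b i = r then T (b(i := s)) a else 0) - (\<Sum>i\<in>{k..<2*k}. if b i = s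
       then T (b(i := r)) a else 0))"

lemma glact_basis_outside:
  assumes a: "a \<in> Idx n k" and b: "b \<notin> Idx n k"
  shows "glact_basis k n x a b = 0"
proof -
  have "b \<noteq> a(i := r)" if "i < 2*k" "r < n" for i r using upd_Idx[OF a that] b by auto
  then show ?thesis unfolding glact_basis_def by (auto intro!: sum.neutral)
qed

lemma glact_Mvec: "glact k n x v \<in> Mvec n k"
  unfolding Mvec_def glact_def using glact_basis_outside by (auto intro!: sum.neutral)

lemma mat_op_glact_unit:
  assumes r: "r < n" and s: "s < n" and mc: "commutes_unit n k T r s"
  shows "mat_op n k T (glact k n (unit_mat r s) v) = glact k n (unit_mat r s) (mat_op n k T v)"
proof
  fix b
  show "mat_op n k T (glact k n (unit_mat r s) v) b = glact k n (unit_mat r s) (mat_op n k T v) b"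
  proof (cases "b \<in> Idx n k")
    case False
    then show ?thesis unfolding mat_op_def glact_def
      by (auto intro!: sum.neutral simp: glact_basis_outside)
  next
    case b: True
    have "mat_op n k T (glact k n (unit_mat r s) v) b = (\<Sum>a'\<in>Idx n k. T b a' *
        (\<Sum>a\<in>Idx n k. v a * glact_basis k n (unit_mat r s) a a'))"
      using b unfolding mat_op_def glact_def by simp
    also have "\<dots> = (\<Sum>a'\<in>Idx n k. \<Sum>a\<in>Idx n k. v a * (T b a' *
        glact_basis k n (unit_mat r s) a a'))"
      by (simp add: sum_distrib_left mult_ac)
    also have "\<dots> = (\<Sum>a\<in>Idx n k. \<Sum>a'\<in>Idx n k. v a * (T b a' *
        glact_basis k n (unit_mat r s) a a'))"
      by (rule sum.swap)
    also have "\<dots> = (\<Sum>a\<in>Idx n k. v a * (\<Sum>a'\<in>Idx n k. T b a' *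
        glact_basis k n (unit_mat r s) a a'))"
      by (simp add: sum_distrib_left)
    also have "\<dots> = (\<Sum>a\<in>Idx n k. v a * (\<Sum>a'\<in>Idx n k. T a' a *
        glact_basis k n (unit_mat r s) a' b))"
    proof (intro sum.cong refl)
      fix a assume a: "a \<in> Idx n k"
      show "v a * (\<Sum>a'\<in>Idx n k. T b a' * glact_basis k n (unit_mat r s) a a') = v a *
          (\<Sum>a'\<in>Idx n k. T a' a * glact_basis k n (unit_mat r s) a' b)"
        using sum_glact_basis_out[OF r s a, of "T b"] sum_glact_basis_in[OF r s b, of "\<lambda>a'. T a'
            a"] mc a b unfolding commutes_unit_def by simp
    qed
    also have "\<dots> = (\<Sum>a\<in>Idx n k. \<Sum>a'\<in>Idx n k. v a * (T a' a *
        glact_basis k n (unit_mat r s) a' b))"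
      by (simp add: sum_distrib_left)
    also have "\<dots> = (\<Sum>a'\<in>Idx n k. \<Sum>a\<in>Idx n k. v a * (T a' a *
        glact_basis k n (unit_mat r s) a' b))"
      by (rule sum.swap)
    also have "\<dots> = (\<Sum>a'\<in>Idx n k. (\<Sum>a\<in>Idx n k. T a' a * v a) *
        glact_basis k n (unit_mat r s) a' b)"
      by (intro sum.cong refl) (simp add: sum_distrib_left sum_distrib_right mult_ac)
    also have "\<dots> = glact k n (unit_mat r s) (mat_op n k T v) b"
      unfolding mat_op_def glact_def by (intro sum.cong refl) simp
    finally show ?thesis .
  qed
qed

definition unit_vec :: "(nat \<Rightarrow> nat) \<Rightarrow> (nat \<Rightarrow> nat) \<Rightarrow> complex" where
  "unit_vec a = (\<lambda>a'. if a' = a then 1 else 0)"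

lemma unit_vec_Mvec: "a \<in> Idx n k \<Longrightarrow> unit_vec a \<in> Mvec n k"
  unfolding Mvec_def unit_vec_def by auto

lemma mat_op_unit_vec: "a \<in> Idx n k \<Longrightarrow> b \<in> Idx n k \<Longrightarrow>
    mat_op n k T (unit_vec a) b = T b a"
  unfolding mat_op_def unit_vec_def by (simp add: if_distrib[of "\<lambda>x. _ * x"] sum.delta cong: if_cong)

lemma glact_unit_vec: "a \<in> Idx n k \<Longrightarrow> glact k n x (unit_vec a) = glact_basis k n x a"
  unfolding glact_def unit_vec_def by (auto simp: if_distrib[of "\<lambda>x. x * _"] sum.delta cong: if_cong)

lemma commutes_unitI:
  assumes r: "r < n" and s: "s < n"
    and eq: "\<And>a. a \<in> Idx n k \<Longrightarrow>
        mat_op n k T (glact k n (unit_mat r s) (unit_vec a)) =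
        glact k n (unit_mat r s) (mat_op n k T (unit_vec a))"
  shows "commutes_unit n k T r s"
  unfolding commutes_unit_def
proof (intro ballI)
  fix a b assume a: "a \<in> Idx n k" and b: "b \<in> Idx n k"
  have "mat_op n k T (glact k n (unit_mat r s) (unit_vec a)) b = (\<Sum>a'\<in>Idx n k. T b a' *
      glact_basis k n (unit_mat r s) a a')"
    using b glact_unit_vec[OF a] unfolding mat_op_def by simp
  moreover have "glact k n (unit_mat r s) (mat_op n k T (unit_vec a)) b = (\<Sum>a'\<in>Idx n k. T a' a *
      glact_basis k n (unit_mat r s) a' b)"
    unfolding glact_def using mat_op_unit_vec[OF a] by (intro sum.cong refl) simp
  ultimately show "(\<Sum>i<k. if a i = s then T b (a(i := r)) else 0) - (\<Sum>i\<in>{k..<2*k}.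
      if a i = r then T b (a(i := s)) else 0)
   = (\<Sum>i<k. if b i = r then T (b(i := s)) a else 0) - (\<Sum>i\<in>{k..<2*k}. if b i = s
       then T (b(i := r)) a else 0)"
    using eq[OF a] sum_glact_basis_out[OF r s a, of "T b"] sum_glact_basis_in[OF r s b, of "\<lambda>a'.
        T a' a"] by metis
qed

definition bottom_of :: "(vtx \<Rightarrow> nat) \<Rightarrow> nat \<Rightarrow>
    nat" where "bottom_of l = (\<lambda>i. l (False, i))"
definition top_of :: "(vtx \<Rightarrow> nat) \<Rightarrow> nat \<Rightarrow> nat" where "top_of l =
    (\<lambda>i. l (True, i))"

lemma vlab_bottom_top[simp]: "vlab (bottom_of l) (top_of l) = l"
  unfolding vlab_def bottom_of_def top_of_def by (auto simp: fun_eq_iff)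

lemma bottom_of_vlab[simp]: "bottom_of (vlab a b) = a" and top_of_vlab[simp]: "top_of (vlab a b) = b"
  unfolding vlab_def bottom_of_def top_of_def by auto

lemma bottom_of_Idx: "l \<in> labellings n k \<Longrightarrow> bottom_of l \<in> Idx n k"
    and top_of_Idx: "l \<in> labellings n k \<Longrightarrow> top_of l \<in> Idx n k"
  unfolding labellings_def Idx_def bottom_of_def top_of_def by (auto simp: verts_iff)

lemma neg_verts_eq: "neg_verts k = (\<lambda>i. (False, i)) ` {..<k} \<union> (\<lambda>i. (True, i)) ` {k..<2*k}"
  unfolding neg_verts_def polarity_def verts_iff by (auto simp: image_iff)

lemma pos_verts_eq: "pos_verts k = (\<lambda>i. (True, i)) ` {..<k} \<union> (\<lambda>i. (False, i)) ` {k..<2*k}"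
  unfolding pos_verts_def polarity_def verts_iff by (auto simp: image_iff)

lemma sum_image_Pair_Un:
  fixes f :: "vtx \<Rightarrow> complex"
  assumes "finite A" "finite B" "b1 \<noteq> b2"
  shows "(\<Sum>x\<in>(\<lambda>i. (b1, i)) ` A \<union> (\<lambda>i. (b2, i)) ` B. f x) =
      (\<Sum>i\<in>A. f (b1, i)) + (\<Sum>i\<in>B. f (b2, i))"
proof -
  have "(\<Sum>x\<in>(\<lambda>i. (b1, i)) ` A \<union> (\<lambda>i. (b2, i)) ` B. f x) =
      (\<Sum>x\<in>(\<lambda>i. (b1, i)) ` A. f x) + (\<Sum>x\<in>(\<lambda>i. (b2, i)) ` B. f x)"
    by (rule sum.union_disjoint) (use assms in auto)
  also have "\<dots> = (\<Sum>i\<in>A. f (b1, i)) + (\<Sum>i\<in>B. f (b2, i))"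
    by (simp add: sum.reindex inj_on_def)
  finally show ?thesis .
qed

lemma vlab_bottom: "vlab a b (False, i) = a i" and vlab_top: "vlab a b (True, i) = b i"
  unfolding vlab_def by auto

lemma vlab_upd_bottom: "(vlab a b)((False, i) := v) = vlab (a(i := v)) b"
  and vlab_upd_top: "(vlab a b)((True, i) := v) = vlab a (b(i := v))"
  unfolding vlab_def by (auto simp: fun_eq_iff)

lemma sum_neg_verts_vlab:
  fixes t :: "(vtx \<Rightarrow> nat) \<Rightarrow> complex"
  shows "(\<Sum>x\<in>neg_verts k. if vlab a b x = \<sigma> then t ((vlab a b)(x := \<tau>)) else 0) =
   (\<Sum>i<k. if a i = \<sigma> then t (vlab (a(i := \<tau>)) b) else 0) + (\<Sum>i\<in>{k..<2*k}.
       if b i = \<sigma> then t (vlab a (b(i := \<tau>))) else 0)"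
  unfolding neg_verts_eq
  using sum_image_Pair_Un[of "{..<k}" "{k..<2*k}" False True "\<lambda>x. if vlab a b x = \<sigma>
      then t ((vlab a b)(x := \<tau>)) else 0"]
  by (simp only: vlab_upd_bottom vlab_upd_top vlab_bottom vlab_top finite_lessThan finite_atLeastLessThan simp_thms)

lemma sum_pos_verts_vlab:
  fixes t :: "(vtx \<Rightarrow> nat) \<Rightarrow> complex"
  shows "(\<Sum>y\<in>pos_verts k. if vlab a b y = \<tau> then t ((vlab a b)(y := \<sigma>)) else 0) =
   (\<Sum>i<k. if b i = \<tau> then t (vlab a (b(i := \<sigma>))) else 0) + (\<Sum>i\<in>{k..<2*k}.
       if a i = \<tau> then t (vlab (a(i := \<sigma>)) b) else 0)"
  unfolding pos_verts_eq
  using sum_image_Pair_Un[of "{..<k}" "{k..<2*k}" True False "\<lambda>x. if vlab a b x = \<tau>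
      then t ((vlab a b)(x := \<sigma>)) else 0"]
  by (simp only: vlab_upd_bottom vlab_upd_top vlab_bottom vlab_top finite_lessThan finite_atLeastLessThan simp_thms)

lemma commutes_unit_if_exchange_inv:
  assumes st: "exchange_inv n k t" and r: "r < n" and s: "s < n"
  shows "commutes_unit n k (\<lambda>b a. t (vlab a b)) r s"
  unfolding commutes_unit_def
proof (intro ballI)
  fix a b assume a: "a \<in> Idx n k" and b: "b \<in> Idx n k"
  have "(\<Sum>x\<in>neg_verts k. if vlab a b x = s then t ((vlab a b)(x := r)) else 0) =
        (\<Sum>y\<in>pos_verts k. if vlab a b y = r then t ((vlab a b)(y := s)) else 0)"
    using st vlab_labellings[OF a b] r s unfolding exchange_inv_def by blast
  then show "(\<Sum>i<k. if a i = s then t (vlab (a(i := r)) b) else 0) - (\<Sum>i\<in>{k..<2*k}.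
      if a i = r then t (vlab (a(i := s)) b) else 0) =
    (\<Sum>i<k. if b i = r then t (vlab a (b(i := s))) else 0) - (\<Sum>i\<in>{k..<2*k}. if b i = s
        then t (vlab a (b(i := r))) else 0)"
    unfolding sum_neg_verts_vlab sum_pos_verts_vlab by (simp add: algebra_simps)
qed

lemma exchange_inv_if_commutes_unit:
  fixes T :: "(nat \<Rightarrow> nat) \<Rightarrow> (nat \<Rightarrow> nat) \<Rightarrow> complex"
  assumes mc: "\<And>r s. r < n \<Longrightarrow> s < n \<Longrightarrow> commutes_unit n k T r s"
  shows "exchange_inv n k (\<lambda>l. T (top_of l) (bottom_of l))"
  unfolding exchange_inv_def
proof (intro ballI allI impI)
  fix l \<sigma> \<tau> assume l: "l \<in> labellings n k" and s: "\<sigma> < n" and t: "\<tau> < n"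
  define a where "a = bottom_of l"
  define b where "b = top_of l"
  have a: "a \<in> Idx n k" and b: "b \<in> Idx n k" using bottom_of_Idx[OF l] top_of_Idx[OF l] a_def b_def by auto
  have lab: "l = vlab a b" unfolding a_def b_def by simp
  have "(\<Sum>i<k. if a i = \<sigma> then T b (a(i := \<tau>)) else 0) - (\<Sum>i\<in>{k..<2*k}.
      if a i = \<tau> then T b (a(i := \<sigma>)) else 0) =
    (\<Sum>i<k. if b i = \<tau> then T (b(i := \<sigma>)) a else 0) - (\<Sum>i\<in>{k..<2*k}.
        if b i = \<sigma> then T (b(i := \<tau>)) a else 0)"
    using mc[OF t s] a b unfolding commutes_unit_def by blast
  then show "(\<Sum>x\<in>neg_verts k. if l x = \<sigma>
      then T (top_of (l(x := \<tau>))) (bottom_of (l(x := \<tau>))) else 0) =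
       (\<Sum>y\<in>pos_verts k. if l y = \<tau>
           then T (top_of (l(y := \<sigma>))) (bottom_of (l(y := \<sigma>))) else 0)"
    unfolding lab sum_neg_verts_vlab[where t =
        "\<lambda>l. T (top_of l) (bottom_of l)"] sum_pos_verts_vlab[where t =
        "\<lambda>l. T (top_of l) (bottom_of l)"] bottom_of_vlab top_of_vlab
    by (simp add: algebra_simps)
qed

lemma sum_indic_eq: "(c::nat) < n \<Longrightarrow> (\<Sum>s<n. f s * indic (P \<and> c = s)) = (if P
    then f c else (0::complex))"
proof -
  assume c: "c < n"
  have "(\<Sum>s<n. f s * indic (P \<and> c = s)) = (\<Sum>s<n. if c = s then (if P then f s else 0) else 0)"
    unfolding indic_def by (intro sum.cong refl) auto
  also have "\<dots> = (if P then f c else 0)" using c by (subst sum.delta') auto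
  finally show ?thesis .
qed

lemma glact_basis_decomp:
  assumes a: "a \<in> Idx n k"
  shows "glact_basis k n x a b = (\<Sum>r<n. \<Sum>s<n. x r s * glact_basis k n (unit_mat r s) a b)"
proof -
  have ai: "i < 2*k \<Longrightarrow> a i < n" for i using a unfolding Idx_def by auto
  have "(\<Sum>r<n. \<Sum>s<n. x r s * glact_basis k n (unit_mat r s) a b) =
     (\<Sum>r<n. \<Sum>s<n. (\<Sum>i<k. x r s * indic (b = a(i := r) \<and> a i = s)) -
         (\<Sum>i\<in>{k..<2*k}. x r s * indic (b = a(i := s) \<and> a i = r)))"
    by (intro sum.cong refl) (simp add: glact_basis_unit_mat right_diff_distrib sum_distrib_left)
  also have "\<dots> = (\<Sum>r<n. \<Sum>s<n. \<Sum>i<k. x r s * indic (b = a(i := r) \<and> a i = s)) -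
                  (\<Sum>r<n. \<Sum>s<n. \<Sum>i\<in>{k..<2*k}. x r s * indic (b = a(i := s) \<and> a i = r))"
    by (simp add: sum_subtractf)
  also have "\<dots> = (\<Sum>i<k. \<Sum>r<n. \<Sum>s<n. x r s * indic (b = a(i := r) \<and> a i = s)) -
                  (\<Sum>i\<in>{k..<2*k}. \<Sum>r<n. \<Sum>s<n. x r s * indic (b = a(i := s) \<and> a i = r))"
    by (simp only: sum.swap[of _ _ "{..<k}"] sum.swap[of _ _ "{k..<2*k}"])
  also have "\<dots> = (\<Sum>i<k. \<Sum>r<n. if b = a(i := r) then x r (a i) else 0) -
                  (\<Sum>i\<in>{k..<2*k}. \<Sum>r<n. if b = a(i := r) then x (a i) r else 0)"
  proof -
    have "(\<Sum>r<n. \<Sum>s<n. x r s * indic (b = a(i := r) \<and> a i = s)) = (\<Sum>r<n.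
        if b = a(i := r) then x r (a i) else 0)"
      if "i < k" for i
      using sum_indic_eq[OF ai, of i "x _" "b = a(i := _)"] that by (intro sum.cong refl) simp
    moreover have "(\<Sum>r<n. \<Sum>s<n. x r s * indic (b = a(i := s) \<and> a i = r)) = (\<Sum>r<n.
        if b = a(i := r) then x (a i) r else 0)"
      if "i \<in> {k..<2*k}" for i
    proof -
      have "(\<Sum>r<n. \<Sum>s<n. x r s * indic (b = a(i := s) \<and> a i = r)) =
          (\<Sum>s<n. \<Sum>r<n. x r s * indic (b = a(i := s) \<and> a i = r))"
        by (rule sum.swap)
      also have "\<dots> = (\<Sum>s<n. if b = a(i := s) then x (a i) s else 0)"
        using sum_indic_eq[OF ai, of i "\<lambda>r. x r _" "b = a(i := _)"] that by (intro sum.cong refl) simp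
      finally show ?thesis .
    qed
    ultimately show ?thesis by simp
  qed
  also have "\<dots> = glact_basis k n x a b" unfolding glact_basis_def by simp
  finally show ?thesis by simp
qed

lemma glact_decomp: "glact k n x v = (\<lambda>b. \<Sum>r<n. \<Sum>s<n. x r s * glact k n (unit_mat r s) v b)"
proof
  fix b
  have "glact k n x v b = (\<Sum>a\<in>Idx n k. \<Sum>r<n. \<Sum>s<n. x r s * (v a *
      glact_basis k n (unit_mat r s) a b))"
    unfolding glact_def by (intro sum.cong refl) (simp add: glact_basis_decomp sum_distrib_left mult_ac)
  also have "\<dots> = (\<Sum>r<n. \<Sum>s<n. \<Sum>a\<in>Idx n k. x r s * (v a *
      glact_basis k n (unit_mat r s) a b))"
    by (simp only: sum.swap[of _ "Idx n k"])
  also have "\<dots> = (\<Sum>r<n. \<Sum>s<n. x r s * glact k n (unit_mat r s) v b)"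
    unfolding glact_def by (simp add: sum_distrib_left)
  finally show "glact k n x v b = (\<Sum>r<n. \<Sum>s<n. x r s * glact k n (unit_mat r s) v b)" .
qed

lemma mat_op_double_sum: "mat_op n k T (\<lambda>b. \<Sum>r<m. \<Sum>s<m. c r s * w r s b) =
    (\<lambda>b. \<Sum>r<m. \<Sum>s<m. c r s * mat_op n k T (w r s) b)"
proof
  fix b
  show "mat_op n k T (\<lambda>b. \<Sum>r<m. \<Sum>s<m. c r s * w r s b) b =
      (\<Sum>r<m. \<Sum>s<m. c r s * mat_op n k T (w r s) b)"
  proof (cases "b \<in> Idx n k")
    case True
    have "mat_op n k T (\<lambda>b. \<Sum>r<m. \<Sum>s<m. c r s * w r s b) b =
        (\<Sum>a\<in>Idx n k. \<Sum>r<m. \<Sum>s<m. c r s * (T b a * w r s a))"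
      using True unfolding mat_op_def by (simp add: sum_distrib_left mult_ac)
    also have "\<dots> = (\<Sum>r<m. \<Sum>s<m. \<Sum>a\<in>Idx n k. c r s * (T b a * w r s a))"
      by (simp only: sum.swap[of _ "Idx n k"])
    also have "\<dots> = (\<Sum>r<m. \<Sum>s<m. c r s * mat_op n k T (w r s) b)"
      using True unfolding mat_op_def by (simp add: sum_distrib_left)
    finally show ?thesis .
  next
    case False then show ?thesis unfolding mat_op_def by simp
  qed
qed

lemma phi_dbas_eq_mat_op: "d \<in> WB k \<Longrightarrow> phi k n (dbas d) =
    mat_op n k (\<lambda>b a. delta_ind k d a b)"
  by (rule ext)+ (simp add: phi_dbas mat_op_def mult_ac)

lemma phi_dbas_equivariant:
  assumes d: "d \<in> WB k"
  shows "phi k n (dbas d) (glact k n x v) = glact k n x (phi k n (dbas d) v)"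
proof -
  let ?T = "\<lambda>b a. delta_ind k d a b"
  have mc: "commutes_unit n k ?T r s" if "r < n" "s < n" for r s
    using commutes_unit_if_exchange_inv[OF exchange_inv_edge_const_ind[OF d] that]
      unfolding delta_ind_eq_edge_const_ind by simp
  have "phi k n (dbas d) (glact k n x v) = mat_op n k ?T (\<lambda>b. \<Sum>r<n. \<Sum>s<n. x r s *
      glact k n (unit_mat r s) v b)"
    unfolding phi_dbas_eq_mat_op[OF d] glact_decomp[of k n x v] ..
  also have "\<dots> = (\<lambda>b. \<Sum>r<n. \<Sum>s<n. x r s *
      mat_op n k ?T (glact k n (unit_mat r s) v) b)" by (rule mat_op_double_sum)
  also have "\<dots> = (\<lambda>b. \<Sum>r<n. \<Sum>s<n. x r s * glact k n (unit_mat r s) (mat_op n k ?T v) b)"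
    using mat_op_glact_unit[OF _ _ mc] by (intro ext sum.cong refl) simp
  also have "\<dots> = glact k n x (mat_op n k ?T v)" by (rule glact_decomp[symmetric])
  finally show ?thesis unfolding phi_dbas_eq_mat_op[OF d] .
qed

lemma phi_eq_sum_dbas: "phi k n x v = (\<lambda>b. \<Sum>d\<in>WB k. x d * phi k n (dbas d) v b)"
proof
  fix b show "phi k n x v b = (\<Sum>d\<in>WB k. x d * phi k n (dbas d) v b)"
  proof (cases "b \<in> Idx n k")
    case True
    have "phi k n x v b = (\<Sum>a\<in>Idx n k. \<Sum>d\<in>WB k. x d * (delta_ind k d a b * v a))"
      using True by (simp add: phi_eq sum_distrib_left sum_distrib_right mult_ac)
    also have "\<dots> = (\<Sum>d\<in>WB k. \<Sum>a\<in>Idx n k. x d * (delta_ind k d a b * v a))" by (rule sum.swap)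
    also have "\<dots> = (\<Sum>d\<in>WB k. x d * phi k n (dbas d) v b)"
      using True by (intro sum.cong refl) (simp add: phi_dbas sum_distrib_left)
    finally show ?thesis .
  next
    case False then show ?thesis by (simp add: phi_eq phi_dbas)
  qed
qed

lemma glact_sum: "glact k n x (\<lambda>a. \<Sum>d\<in>S. c d * w d a) =
    (\<lambda>b. \<Sum>d\<in>S. c d * glact k n x (w d) b)"
proof
  fix b
  have "glact k n x (\<lambda>a. \<Sum>d\<in>S. c d * w d a) b =
      (\<Sum>a\<in>Idx n k. \<Sum>d\<in>S. c d * (w d a * glact_basis k n x a b))"
    unfolding glact_def by (simp add: sum_distrib_left sum_distrib_right mult_ac)
  also have "\<dots> = (\<Sum>d\<in>S. \<Sum>a\<in>Idx n k. c d * (w d a * glact_basis k n x a b))" by (rule sum.swap)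
  also have "\<dots> = (\<Sum>d\<in>S. c d * glact k n x (w d) b)" unfolding glact_def by (simp add: sum_distrib_left)
  finally show "glact k n x (\<lambda>a. \<Sum>d\<in>S. c d * w d a) b = (\<Sum>d\<in>S. c d * glact k n x (w d) b)" .
qed

lemma phi_equivariant: "phi k n y (glact k n x v) = glact k n x (phi k n y v)"
proof -
  have "phi k n y (glact k n x v) = (\<lambda>b. \<Sum>d\<in>WB k. y d * glact k n x (phi k n (dbas d) v) b)"
    unfolding phi_eq_sum_dbas[of k n y] using phi_dbas_equivariant by (simp cong: sum.cong)
  also have "\<dots> = glact k n x (\<lambda>a. \<Sum>d\<in>WB k. y d * phi k n (dbas d) v a)"
    by (rule glact_sum[symmetric])
  also have "\<dots> = glact k n x (phi k n y v)" by (simp add: phi_eq_sum_dbas[symmetric])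
  finally show ?thesis .
qed

section \<open>The first fundamental theorem\<close>

lemma phi_unit_vec: "a \<in> Idx n k \<Longrightarrow> b \<in> Idx n k \<Longrightarrow>
    phi k n x (unit_vec a) b = (\<Sum>d\<in>WB k. x d * delta_ind k d a b)"
  unfolding phi_eq unit_vec_def by (simp add: if_distrib[of "\<lambda>x. _ * x"] sum.delta cong: if_cong)

lemma phi_zero_imp_zero:
  assumes nk: "2*k \<le> n" and x: "x \<in> Alg k"
      and z: "\<And>v. v \<in> Mvec n k \<Longrightarrow> phi k n x v = (\<lambda>b. 0)"
  shows "x = (\<lambda>d. 0)"
proof
  fix d0 show "x d0 = 0"
  proof (cases "d0 \<in> WB k")
    case False then show ?thesis using x unfolding Alg_def by auto
  next
    case True
    define l0 where "l0 = canonical_lab k d0"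
    have l0: "l0 \<in> labellings n k" unfolding l0_def using canonical_lab_labellings[OF True nk] .
    have a0: "bottom_of l0 \<in> Idx n k" and b0: "top_of l0 \<in> Idx n k"
      using bottom_of_Idx[OF l0] top_of_Idx[OF l0] by auto
    have "phi k n x (unit_vec (bottom_of l0)) (top_of l0) = (\<Sum>d\<in>WB k. x d * edge_const_ind k d l0)"
      using phi_unit_vec[OF a0 b0] delta_ind_eq_edge_const_ind by simp
    also have "\<dots> = (\<Sum>d\<in>WB k. if d = d0 then x d else 0)"
      unfolding l0_def using edge_const_ind_canonical[OF _ True] by (intro sum.cong refl) simp
    also have "\<dots> = x d0" using True by (simp add: sum.delta)
    finally show ?thesis using z[OF unit_vec_Mvec[OF a0]] by simp
  qed
qed

lemma linear_eq_mat_op: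
  assumes FM: "\<And>v. v \<in> Mvec n k \<Longrightarrow> F v \<in> Mvec n k"
    and Fadd: "\<And>u w. u \<in> Mvec n k \<Longrightarrow> w \<in> Mvec n k \<Longrightarrow>
        F (\<lambda>a. u a + w a) = (\<lambda>b. F u b + F w b)"
    and Fsm: "\<And>c v. v \<in> Mvec n k \<Longrightarrow> F (\<lambda>a. c * v a) = (\<lambda>b. c * F v b)"
    and v: "v \<in> Mvec n k"
  shows "F v = mat_op n k (\<lambda>b a. F (unit_vec a) b) v"
proof -
  have sumM: "(\<lambda>a'. \<Sum>a\<in>S. c a * unit_vec a a') \<in> Mvec n k" if "S \<subseteq> Idx n k" for S c
    using that unfolding Mvec_def unit_vec_def by (auto intro!: sum.neutral)
  have F0: "F (\<lambda>a. 0) = (\<lambda>b. 0)" using Fsm[of "\<lambda>a. 0" 0] by (simp add: Mvec_def)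
  have Fsum: "F (\<lambda>a'. \<Sum>a\<in>S. c a * unit_vec a a') = (\<lambda>b. \<Sum>a\<in>S. c a *
      F (unit_vec a) b)"
    if "finite S" "S \<subseteq> Idx n k" for S c
    using that
  proof (induction S rule: finite_induct)
    case (insert y S)
    have yM: "(\<lambda>a'. c y * unit_vec y a') \<in> Mvec n k"
      using unit_vec_Mvec[of y n k] insert.prems unfolding Mvec_def by auto
    have "F (\<lambda>a'. \<Sum>a\<in>insert y S. c a * unit_vec a a') = F (\<lambda>a'. c y *
        unit_vec y a' + (\<Sum>a\<in>S. c a * unit_vec a a'))"
      using insert by simp
    also have "\<dots> = (\<lambda>b. F (\<lambda>a'. c y * unit_vec y a') b +
        F (\<lambda>a'. \<Sum>a\<in>S. c a * unit_vec a a') b)"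
      using Fadd[OF yM sumM[of S c]] insert.prems by simp
    finally show ?case using Fsm[OF unit_vec_Mvec[of y n k]] insert by simp
  qed (simp add: F0)
  have "v = (\<lambda>a'. \<Sum>a\<in>Idx n k. v a * unit_vec a a')"
  proof
    fix a' show "v a' = (\<Sum>a\<in>Idx n k. v a * unit_vec a a')"
      using v unfolding Mvec_def unit_vec_def
      by (cases "a' \<in> Idx n k") (auto simp: if_distrib[of "\<lambda>x. _ * x"] sum.delta' cong: if_cong)
  qed
  then have "F v = (\<lambda>b. \<Sum>a\<in>Idx n k. v a * F (unit_vec a) b)" using Fsum[of "Idx n k" v] by simp
  moreover have "F v b = 0" if "b \<notin> Idx n k" for b using FM[OF v] that unfolding Mvec_def by auto
  ultimately show ?thesis unfolding mat_op_def by (auto simp: fun_eq_iff mult_ac)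
qed

lemma exchange_inv_eq_sum_canonical:
  assumes nk: "2*k \<le> n" and st: "exchange_inv n k t" and l: "l \<in> labellings n k"
  shows "t l = (\<Sum>d\<in>WB k. t (canonical_lab k d) * edge_const_ind k d l)"
proof -
  define t' where "t' l = t l - (\<Sum>d\<in>WB k. t (canonical_lab k d) * edge_const_ind k d l)" for l
  have "exchange_inv n k t'" unfolding t'_def
    by (rule exchange_inv_diff[OF st exchange_inv_sum[OF finite_WB exchange_inv_edge_const_ind]])
  then interpret exchange_invariant n k t' by unfold_locales
  have "t' (canonical_lab k d0) = 0" if d0: "d0 \<in> WB k" for d0
  proof -
    have "(\<Sum>d\<in>WB k. t (canonical_lab k d) * edge_const_ind k d (canonical_lab k d0))
        = (\<Sum>d\<in>WB k. if d = d0 then t (canonical_lab k d) else 0)"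
      by (intro sum.cong refl) (simp add: edge_const_ind_canonical d0)
    also have "\<dots> = t (canonical_lab k d0)" using d0 by (simp add: sum.delta)
    finally show ?thesis unfolding t'_def by simp
  qed
  then have "t' l = 0" using vanishes_if_zero_on_canonical[OF nk] l by blast
  then show ?thesis unfolding t'_def by simp
qed

lemma equivariant_eq_phi:
  assumes nk: "2*k \<le> n"
    and FM: "\<And>v. v \<in> Mvec n k \<Longrightarrow> F v \<in> Mvec n k"
    and Fadd: "\<And>u w. u \<in> Mvec n k \<Longrightarrow> w \<in> Mvec n k \<Longrightarrow>
        F (\<lambda>a. u a + w a) = (\<lambda>b. F u b + F w b)"
    and Fsm: "\<And>c v. v \<in> Mvec n k \<Longrightarrow> F (\<lambda>a. c * v a) = (\<lambda>b. c * F v b)"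
    and Feq: "\<And>r s v. r < n \<Longrightarrow> s < n \<Longrightarrow>
        v \<in> Mvec n k \<Longrightarrow> F (glact k n (unit_mat r s) v) =
        glact k n (unit_mat r s) (F v)"
  shows "\<exists>x\<in>Alg k. \<forall>v\<in>Mvec n k. F v = phi k n x v"
proof -
  define T where "T b a = F (unit_vec a) b" for b a
  have FT: "F v = mat_op n k T v" if "v \<in> Mvec n k" for v
    unfolding T_def using linear_eq_mat_op[OF FM Fadd Fsm that] .
  have "commutes_unit n k T r s" if r: "r < n" and s: "s < n" for r s
  proof (rule commutes_unitI[OF r s])
    fix a assume a: "a \<in> Idx n k"
    show "mat_op n k T (glact k n (unit_mat r s) (unit_vec a)) = glact k n (unit_mat r s) (mat_op n k T (unit_vec a))"
      using Feq[OF r s unit_vec_Mvec[OF a]] FT[OF glact_Mvec] FT[OF unit_vec_Mvec[OF a]] by simp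
  qed
  then have st: "exchange_inv n k (\<lambda>l. T (top_of l) (bottom_of l))" by (rule exchange_inv_if_commutes_unit)
  define x where "x d = (if d \<in> WB k
      then T (top_of (canonical_lab k d)) (bottom_of (canonical_lab k d)) else 0)" for d
  have "x \<in> Alg k" unfolding Alg_def x_def by auto
  moreover have "F v = phi k n x v" if v: "v \<in> Mvec n k" for v
  proof -
    have "T b a = (\<Sum>d\<in>WB k. x d * delta_ind k d a b)" if "a \<in> Idx n k" "b \<in> Idx n k" for a b
      using exchange_inv_eq_sum_canonical[OF nk st vlab_labellings[OF that]]
      unfolding x_def delta_ind_eq_edge_const_ind by simp
    then show ?thesis unfolding FT[OF v] mat_op_def phi_eq by (auto intro!: sum.cong)
  qed
  ultimately show ?thesis by blast
qed

section \<open>The centraliser algebra \<open>bB\<^sub>k\<^sub>,\<^sub>k(n)b\<close>\<close>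

locale stable_range =
  fixes k n :: nat
  assumes nk: "2 * k \<le> n"
begin

abbreviation B :: "diagram \<Rightarrow> complex" where "B \<equiv> b_elem k n"
abbreviation bdb :: "diagram \<Rightarrow> diagram \<Rightarrow>
    complex" where "bdb d \<equiv> dmul k n (dmul k n B (dbas d)) B"

lemma phi_B: "v \<in> Mvec n k \<Longrightarrow> phi k n B v = emap k n v"
proof (cases "k = 0")
  case True
  assume v: "v \<in> Mvec n k"
  have "B = dbas (idd k)" unfolding b_elem_def using True by simp
  then show ?thesis using phi_idd[OF v] True unfolding emap_def by simp
next
  case False
  then have "0 < n" using nk by simp
  then show "v \<in> Mvec n k \<Longrightarrow> ?thesis" using phi_b_elem by blast
qed

lemma emap_emap: "emap k n (emap k n v) = emap k n v"
proof (cases "k = 0")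
  case True then show ?thesis unfolding emap_def by simp
next
  case False then have "0 < n" using nk by simp
  then show ?thesis by (rule emap_idem)
qed

lemma emap_eM_fix: "v \<in> eM k n \<Longrightarrow> emap k n v = v"
  unfolding eM_def using emap_emap by auto

lemma eM_I: "v \<in> Mvec n k \<Longrightarrow> emap k n v = v \<Longrightarrow> v \<in> eM k n"
  unfolding eM_def by (metis image_eqI)

lemma emap_eM: "v \<in> Mvec n k \<Longrightarrow> emap k n v \<in> eM k n"
  unfolding eM_def by blast

lemma eM_add: "u \<in> eM k n \<Longrightarrow> w \<in> eM k n \<Longrightarrow> (\<lambda>a. u a + w a) \<in> eM k n"
proof -
  assume u: "u \<in> eM k n" and w: "w \<in> eM k n"
  have "(\<lambda>a. u a + w a) \<in> Mvec n k" using eM_Mvec[OF u] eM_Mvec[OF w] unfolding Mvec_def by auto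
  moreover have "emap k n (\<lambda>a. u a + w a) = (\<lambda>a. u a + w a)"
    using emap_add emap_eM_fix[OF u] emap_eM_fix[OF w] by simp
  ultimately show ?thesis by (rule eM_I)
qed

lemma eM_smult: "v \<in> eM k n \<Longrightarrow> (\<lambda>a. c * v a) \<in> eM k n"
proof -
  assume v: "v \<in> eM k n"
  have "(\<lambda>a. c * v a) \<in> Mvec n k" using eM_Mvec[OF v] unfolding Mvec_def by auto
  moreover have "emap k n (\<lambda>a. c * v a) = (\<lambda>a. c * v a)"
    using emap_smult emap_eM_fix[OF v] by simp
  ultimately show ?thesis by (rule eM_I)
qed

lemma emap_equivariant: "v \<in> Mvec n k \<Longrightarrow> emap k n (glact k n x v) = glact k n x (emap k n v)"
  using phi_B[OF glact_Mvec] phi_B phi_equivariant by metis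

lemma glact_eM: "v \<in> eM k n \<Longrightarrow> glact k n x v \<in> eM k n"
proof -
  assume v: "v \<in> eM k n"
  have "emap k n (glact k n x v) = glact k n x v"
    using emap_equivariant[OF eM_Mvec[OF v]] emap_eM_fix[OF v] by simp
  then show ?thesis using glact_Mvec eM_I by blast
qed

lemma phi_bxb: "v \<in> Mvec n k \<Longrightarrow> phi k n (dmul k n (dmul k n B x) B) v =
    emap k n (phi k n x (emap k n v))"
proof -
  assume v: "v \<in> Mvec n k"
  have "phi k n (dmul k n (dmul k n B x) B) v = phi k n B (phi k n x (phi k n B v))" by (simp add: phi_dmul)
  also have "\<dots> = emap k n (phi k n x (emap k n v))" using phi_B[OF v] phi_B[OF phi_Mvec] by simp
  finally show ?thesis .
qed

lemma phi_bxb_emap: "v \<in> Mvec n k \<Longrightarrow> phi k n (dmul k n (dmul k n B x) B) v =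
    phi k n (dmul k n (dmul k n B x) B) (emap k n v)"
  using phi_bxb emap_emap emap_Mvec by metis

lemma bBb_Alg: "\<beta> \<in> bBb k n \<Longrightarrow> \<beta> \<in> Alg k"
  unfolding bBb_def using dmul_Alg by auto

lemma bdb_forbidden_eq_0: "d \<in> WB k \<Longrightarrow> has_forbidden k d \<Longrightarrow> bdb d =
    (\<lambda>d'. 0)"
proof -
  assume d: "d \<in> WB k" and f: "has_forbidden k d"
  have "k \<noteq> 0" using f unfolding has_forbidden_def by auto
  then have n: "0 < n" using nk by simp
  show ?thesis
  proof (rule phi_zero_imp_zero[OF nk dmul_Alg])
    fix v assume v: "v \<in> Mvec n k"
    show "phi k n (bdb d) v = (\<lambda>b. 0)" using phi_bxb[OF v] emap_phi_forbidden[OF d f n v] by simp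
  qed
qed

definition no_forb :: "diagram set" where "no_forb = {d \<in> WB k. \<not> has_forbidden k d}"

lemma finite_no_forb: "finite no_forb" unfolding no_forb_def by simp

lemma no_forb_WB: "no_forb \<subseteq> WB k" unfolding no_forb_def by auto

lemma bBb_eq_span_bdb: "bBb k n = {(\<lambda>d'. \<Sum>d\<in>no_forb. c d * bdb d d') | c. True}"
proof
  show "bBb k n \<subseteq> {(\<lambda>d'. \<Sum>d\<in>no_forb. c d * bdb d d') | c. True}"
  proof
    fix \<beta> assume "\<beta> \<in> bBb k n"
    then obtain x where x: "x \<in> Alg k" "\<beta> = dmul k n (dmul k n B x) B" unfolding bBb_def by auto
    have "\<beta> = dmul k n (dmul k n B (\<lambda>d'. \<Sum>d\<in>WB k. x d * dbas d d')) B"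
      using x Alg_expand[OF x(1)] by simp
    also have "\<dots> = (\<lambda>d'. \<Sum>d\<in>WB k. x d * bdb d d')"
      by (simp add: dmul_sum_right dmul_sum_left)
    also have "\<dots> = (\<lambda>d'. \<Sum>d\<in>no_forb. x d * bdb d d')"
    proof
      fix d'
      show "(\<Sum>d\<in>WB k. x d * bdb d d') = (\<Sum>d\<in>no_forb. x d * bdb d d')"
        by (rule sum.mono_neutral_right) (auto simp: no_forb_def bdb_forbidden_eq_0)
    qed
    finally show "\<beta> \<in> {(\<lambda>d'. \<Sum>d\<in>no_forb. c d * bdb d d') | c. True}" by blast
  qed
next
  show "{(\<lambda>d'. \<Sum>d\<in>no_forb. c d * bdb d d') | c. True} \<subseteq> bBb k n"
  proof
    fix \<beta> assume "\<beta> \<in> {(\<lambda>d'. \<Sum>d\<in>no_forb. c d * bdb d d') | c. True}"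
    then obtain c where c: "\<beta> = (\<lambda>d'. \<Sum>d\<in>no_forb. c d * bdb d d')" by blast
    define x where "x = (\<lambda>d'. \<Sum>d\<in>no_forb. c d * dbas d d')"
    have xA: "x \<in> Alg k" unfolding x_def Alg_def dbas_def using no_forb_WB by (auto intro!: sum.neutral)
    have "dmul k n (dmul k n B x) B = \<beta>" unfolding x_def c by (simp add: dmul_sum_right dmul_sum_left)
    then show "\<beta> \<in> bBb k n" unfolding bBb_def using xA by blast
  qed
qed

lemma canonical_lab_pairs_distinct:
  assumes d0: "d0 \<in> no_forb" and j: "j < k"
  shows "bottom_of (canonical_lab k d0) j \<noteq> bottom_of (canonical_lab k d0) (k +
      j)" "top_of (canonical_lab k d0) j \<noteq> top_of (canonical_lab k d0) (k + j)"
proof -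
  have d: "d0 \<in> WB k" and nf: "\<not> has_forbidden k d0" using d0 unfolding no_forb_def by auto
  have P1: "(False, j) \<in> neg_verts k" and Q1: "(False, k + j) \<in> pos_verts k"
      and Q2: "(True, j) \<in> pos_verts k" and P2: "(True, k + j) \<in> neg_verts k"
    using j unfolding neg_verts_def pos_verts_def polarity_def verts_iff by auto
  have nQ: "(False, k + j) \<notin> neg_verts k" "(True, j) \<notin> neg_verts k"
    using Q1 Q2 neg_verts_not_pos by blast+
  show "bottom_of (canonical_lab k d0) j \<noteq> bottom_of (canonical_lab k d0) (k + j)"
  proof
    assume "bottom_of (canonical_lab k d0) j = bottom_of (canonical_lab k d0) (k + j)"
    then have e: "snd (d0 (False, k + j)) = j" using P1 Q1 nQ unfolding bottom_of_def canonical_lab_def by simp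
    have "d0 (False, k + j) \<in> neg_verts k" using WB_pos_to_neg[OF d Q1] .
    then have "d0 (False, k + j) = (False, j)" using inj_onD[OF inj_on_snd_neg_verts[of k] _ _ P1] e by simp
    then have "d0 (False, j) = (False, k + j)" using WB_involution[OF d] by metis
    then show False using nf j unfolding has_forbidden_def by auto
  qed
  show "top_of (canonical_lab k d0) j \<noteq> top_of (canonical_lab k d0) (k + j)"
  proof
    assume "top_of (canonical_lab k d0) j = top_of (canonical_lab k d0) (k + j)"
    then have e: "snd (d0 (True, j)) = k + j" using P2 Q2 nQ unfolding top_of_def canonical_lab_def by simp
    have "d0 (True, j) \<in> neg_verts k" using WB_pos_to_neg[OF d Q2] .
    then have "d0 (True, j) = (True, k + j)" using inj_onD[OF inj_on_snd_neg_verts[of k] _ _ P2] e by simp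
    then show False using nf j unfolding has_forbidden_def by auto
  qed
qed

lemma emap_unit_vec:
  assumes a: "\<And>j. j < k \<Longrightarrow> a j \<noteq> a (k + j)"
  shows "emap k n (unit_vec a) = unit_vec a"
  unfolding emap_def
proof (rule eprod_fix)
  fix j assume j: "j < k"
  show "pmap k n j (unit_vec a) = (\<lambda>b. 0)"
  proof
    fix b
    have "unit_vec a (pair_upd k j l b) = 0" for l
    proof -
      have "(pair_upd k j l b) j = l" "(pair_upd k j l b) (k + j) = l" unfolding pair_upd_def by auto
      then have "pair_upd k j l b \<noteq> a" using a[OF j] by auto
      then show ?thesis unfolding unit_vec_def by simp
    qed
    then show "pmap k n j (unit_vec a) b = 0" by (simp add: pmap_eq)
  qed
qed

lemma phi_bdb_canonical:
  assumes d0: "d0 \<in> no_forb" and d: "d \<in> WB k"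
  shows "phi k n (bdb d) (unit_vec (bottom_of (canonical_lab k d0))) (top_of (canonical_lab k d0)) =
      (if d = d0 then 1 else 0)"
proof -
  let ?l = "canonical_lab k d0"
  have d0W: "d0 \<in> WB k" using d0 no_forb_WB by auto
  have l: "?l \<in> labellings n k" using canonical_lab_labellings[OF d0W nk] .
  have a0: "bottom_of ?l \<in> Idx n k" and b0: "top_of ?l \<in> Idx n k"
    using bottom_of_Idx[OF l] top_of_Idx[OF l] by auto
  have ea: "emap k n (unit_vec (bottom_of ?l)) = unit_vec (bottom_of ?l)"
    by (rule emap_unit_vec) (use canonical_lab_pairs_distinct(1)[OF d0] in auto)
  have "phi k n (bdb d) (unit_vec (bottom_of ?l)) (top_of ?l) =
      emap k n (phi k n (dbas d) (unit_vec (bottom_of ?l))) (top_of ?l)"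
    using phi_bxb[OF unit_vec_Mvec[OF a0]] ea by simp
  also have "\<dots> = phi k n (dbas d) (unit_vec (bottom_of ?l)) (top_of ?l)"
    unfolding emap_def by (rule eprod_at) (use canonical_lab_pairs_distinct(2)[OF d0] in auto)
  also have "\<dots> = delta_ind k d (bottom_of ?l) (top_of ?l)"
    using phi_unit_vec[OF a0 b0, of "dbas d"] d
      by (simp add: dbas_def if_distrib[of "\<lambda>x. x * _"] sum.delta cong: if_cong)
  also have "\<dots> = (if d = d0 then 1 else 0)"
    using delta_ind_eq_edge_const_ind edge_const_ind_canonical[OF d d0W] by simp
  finally show ?thesis .
qed

lemma bdb_lin_indep:
  assumes z: "\<forall>d'. (\<Sum>d\<in>no_forb. c d * bdb d d') = 0"
  shows "\<forall>d\<in>no_forb. c d = 0"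
proof
  fix d0 assume d0: "d0 \<in> no_forb"
  let ?l = "canonical_lab k d0"
  have zf: "(\<lambda>d'. \<Sum>d\<in>no_forb. c d * bdb d d') = (\<lambda>d'. 0)" using z by auto
  have "phi k n (\<lambda>d'. \<Sum>d\<in>no_forb. c d *
      bdb d d') (unit_vec (bottom_of ?l)) (top_of ?l) = (\<Sum>d\<in>no_forb. c d * (if d = d0
      then 1 else 0))"
    unfolding phi_sum using phi_bdb_canonical[OF d0] no_forb_WB by (intro sum.cong refl) auto
  also have "\<dots> = c d0" using d0 finite_no_forb
    by (simp add: sum.delta' if_distrib[of "\<lambda>x. _ * x"] cong: if_cong)
  finally show "c d0 = 0" using zf phi_zero_alg by simp
qed

lemma inj_on_bdb: "inj_on bdb no_forb"
proof (rule inj_onI)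
  fix d1 d2 assume d1: "d1 \<in> no_forb" and d2: "d2 \<in> no_forb" and e: "bdb d1 = bdb d2"
  show "d1 = d2"
  proof (rule ccontr)
    assume ne: "d1 \<noteq> d2"
    define c where "c d = (if d = d1 then 1 else if d = d2 then -1 else (0::complex))" for d
    have "\<forall>d'. (\<Sum>d\<in>no_forb. c d * bdb d d') = 0"
    proof
      fix d'
      have "(\<Sum>d\<in>no_forb. c d * bdb d d') = (\<Sum>d\<in>no_forb. (if d = d1
          then bdb d d' else 0) - (if d = d2 then bdb d d' else 0))"
        unfolding c_def using ne by (intro sum.cong refl) auto
      also have "\<dots> = bdb d1 d' - bdb d2 d'" using d1 d2 finite_no_forb by (simp add: sum_subtractf sum.delta)
      finally show "(\<Sum>d\<in>no_forb. c d * bdb d d') = 0" using e by simp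
    qed
    then have "c d1 = 0" using bdb_lin_indep d1 by blast
    then show False unfolding c_def by simp
  qed
qed

lemma phi_restrict_Endg: "\<beta> \<in> bBb k n \<Longrightarrow> restrict (phi k n \<beta>) (eM k n) \<in> Endg k n"
proof -
  assume "\<beta> \<in> bBb k n"
  then obtain x where x: "x \<in> Alg k" "\<beta> = dmul k n (dmul k n B x) B" unfolding bBb_def by auto
  let ?f = "restrict (phi k n \<beta>) (eM k n)"
  show ?thesis unfolding Endg_def
  proof (intro CollectI conjI ballI allI)
    show "?f \<in> extensional (eM k n)" by simp
  next
    fix v assume v: "v \<in> eM k n"
    show "?f v \<in> eM k n" using v phi_bxb[OF eM_Mvec[OF v]] x(2) emap_eM[OF phi_Mvec] by simp
  next
    fix u v assume u: "u \<in> eM k n" and v: "v \<in> eM k n"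
    show "?f (\<lambda>a. u a + v a) = (\<lambda>a. ?f u a + ?f v a)" using u v eM_add[OF u v]
      by (simp add: phi_add_vec)
  next
    fix c v assume v: "v \<in> eM k n"
    show "?f (\<lambda>a. c * v a) = (\<lambda>a. c * ?f v a)" using v eM_smult[OF v] by (simp add: phi_smult_vec)
  next
    fix y v assume v: "v \<in> eM k n"
    show "?f (glact k n y v) = glact k n y (?f v)" using v glact_eM[OF v] by (simp add: phi_equivariant)
  qed
qed

lemma inj_on_phi_restrict: "inj_on (\<lambda>\<beta>. restrict (phi k n \<beta>) (eM k n)) (bBb k n)"
proof (rule inj_onI)
  fix \<beta>1 \<beta>2 assume b1: "\<beta>1 \<in> bBb k n" and b2: "\<beta>2 \<in> bBb k n"
    and e: "restrict (phi k n \<beta>1) (eM k n) = restrict (phi k n \<beta>2) (eM k n)"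
  obtain x1 where x1: "x1 \<in> Alg k" "\<beta>1 = dmul k n (dmul k n B x1) B" using b1 unfolding bBb_def by auto
  obtain x2 where x2: "x2 \<in> Alg k" "\<beta>2 = dmul k n (dmul k n B x2) B" using b2 unfolding bBb_def by auto
  have eq: "phi k n \<beta>1 v = phi k n \<beta>2 v" if v: "v \<in> Mvec n k" for v
  proof -
    have ev: "emap k n v \<in> eM k n" using emap_eM[OF v] .
    have "phi k n \<beta>1 v = phi k n \<beta>1 (emap k n v)" using phi_bxb_emap[OF v] x1 by simp
    also have "\<dots> = phi k n \<beta>2 (emap k n v)" using fun_cong[OF e, of "emap k n v"] ev by simp
    also have "\<dots> = phi k n \<beta>2 v" using phi_bxb_emap[OF v] x2 by simp
    finally show ?thesis .
  qed
  have "(\<lambda>d. \<beta>1 d - \<beta>2 d) \<in> Alg k" using bBb_Alg[OF b1] bBb_Alg[OF b2]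
    unfolding Alg_def by auto
  moreover have "phi k n (\<lambda>d. \<beta>1 d - \<beta>2 d) v = (\<lambda>b. 0)" if "v \<in> Mvec n k" for v
    using eq[OF that] by (simp add: phi_diff_alg)
  ultimately have "(\<lambda>d. \<beta>1 d - \<beta>2 d) = (\<lambda>d. 0)" using phi_zero_imp_zero[OF nk] by blast
  then show "\<beta>1 = \<beta>2" by (metis eq_iff_diff_eq_0 ext)
qed

lemma Endg_in_image_phi_restrict: "f \<in> Endg k n \<Longrightarrow> \<exists>\<beta>\<in>bBb k n. f =
    restrict (phi k n \<beta>) (eM k n)"
proof -
  assume f: "f \<in> Endg k n"
  have fext: "f \<in> extensional (eM k n)" and fM: "\<And>v. v \<in> eM k n \<Longrightarrow> f v \<in> eM k n"
    and fadd: "\<And>u v. u \<in> eM k n \<Longrightarrow> v \<in> eM k n \<Longrightarrow>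
        f (\<lambda>a. u a + v a) = (\<lambda>a. f u a + f v a)"
    and fsm: "\<And>c v. v \<in> eM k n \<Longrightarrow> f (\<lambda>a. c * v a) = (\<lambda>a. c * f v a)"
    and feq: "\<And>y v. v \<in> eM k n \<Longrightarrow> f (glact k n y v) = glact k n y (f v)"
    using f unfolding Endg_def by auto
  define F where "F v = f (emap k n v)" for v
  have FM: "F v \<in> Mvec n k" if "v \<in> Mvec n k" for v
    unfolding F_def using fM[OF emap_eM[OF that]] eM_Mvec by blast
  have Fadd: "F (\<lambda>a. u a + w a) = (\<lambda>b. F u b + F w b)"
      if "u \<in> Mvec n k" "w \<in> Mvec n k" for u w
    unfolding F_def emap_add using fadd[OF emap_eM[OF that(1)] emap_eM[OF that(2)]] .
  have Fsm: "F (\<lambda>a. c * v a) = (\<lambda>b. c * F v b)" if "v \<in> Mvec n k" for c v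
    unfolding F_def emap_smult using fsm[OF emap_eM[OF that]] .
  have Feq: "F (glact k n (unit_mat r s) v) = glact k n (unit_mat r s) (F v)"
      if "r < n" "s < n" "v \<in> Mvec n k" for r s v
    unfolding F_def using emap_equivariant[OF that(3)] feq[OF emap_eM[OF that(3)]] by simp
  obtain x where x: "x \<in> Alg k" "\<forall>v\<in>Mvec n k. F v = phi k n x v"
    using equivariant_eq_phi[OF nk FM Fadd Fsm Feq] by blast
  define \<beta> where "\<beta> = dmul k n (dmul k n B x) B"
  have \<beta>: "\<beta> \<in> bBb k n" unfolding bBb_def \<beta>_def using x(1) by blast
  have "f = restrict (phi k n \<beta>) (eM k n)"
  proof
    fix v show "f v = restrict (phi k n \<beta>) (eM k n) v"
    proof (cases "v \<in> eM k n")
      case False then show ?thesis using fext by (simp add: extensional_def)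
    next
      case True
      have vM: "v \<in> Mvec n k" using eM_Mvec[OF True] .
      have "phi k n \<beta> v = emap k n (phi k n x (emap k n v))" unfolding \<beta>_def using phi_bxb[OF vM] .
      also have "\<dots> = emap k n (F (emap k n v))" using x(2) emap_Mvec[OF vM] by simp
      also have "\<dots> = emap k n (f v)" unfolding F_def using emap_eM_fix[OF True] by simp
      also have "\<dots> = f v" using emap_eM_fix[OF fM[OF True]] .
      finally show ?thesis using True by simp
    qed
  qed
  then show ?thesis using \<beta> by blast
qed

lemma bij_betw_phi_restrict: "bij_betw (\<lambda>\<beta>. restrict (phi k n \<beta>) (eM k n)) (bBb k n) (Endg k n)"
  unfolding bij_betw_def
proof
  show "inj_on (\<lambda>\<beta>. restrict (phi k n \<beta>) (eM k n)) (bBb k n)" by (rule inj_on_phi_restrict)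
  show "(\<lambda>\<beta>. restrict (phi k n \<beta>) (eM k n)) ` bBb k n = Endg k n"
    using phi_restrict_Endg Endg_in_image_phi_restrict by blast
qed

end

theorem proposition3p3:
  fixes k n :: nat
  assumes "2 * k \<le> n"
  shows "bij_betw (\<lambda>\<beta>. restrict (phi k n \<beta>) (eM k n)) (bBb k n) (Endg k n)
   \<and> (\<forall>\<beta>1\<in>bBb k n. \<forall>\<beta>2\<in>bBb k n.
        restrict (phi k n (dmul k n \<beta>1 \<beta>2)) (eM k n) = restrict (phi k n \<beta>1 \<circ> phi k n \<beta>2) (eM k n))
   \<and> (\<forall>\<beta>1\<in>bBb k n. \<forall>\<beta>2\<in>bBb k n.
        restrict (phi k n (\<lambda>d. \<beta>1 d + \<beta>2 d)) (eM k n)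
          = restrict (\<lambda>v a. phi k n \<beta>1 v a + phi k n \<beta>2 v a) (eM k n))
   \<and> (\<forall>c. \<forall>\<beta>\<in>bBb k n.
        restrict (phi k n (\<lambda>d. c * \<beta> d)) (eM k n) = restrict (\<lambda>v a. c * phi k n \<beta> v a) (eM k n))
   \<and> restrict (phi k n (b_elem k n)) (eM k n) = restrict id (eM k n)
   \<and> inj_on (\<lambda>d. dmul k n (dmul k n (b_elem k n) (dbas d)) (b_elem k n))
        {d \<in> WB k. \<not> has_forbidden k d}
   \<and> (\<forall>c. (\<forall>d'. (\<Sum>d\<in>{d \<in> WB k. \<not> has_forbidden k d}.
              c d * dmul k n (dmul k n (b_elem k n) (dbas d)) (b_elem k n) d') = 0)
          \<longrightarrow> (\<forall>d\<in>{d \<in> WB k. \<not> has_forbidden k d}. c d = 0))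
   \<and> bBb k n = {(\<lambda>d'. \<Sum>d\<in>{d \<in> WB k. \<not> has_forbidden k d}.
              c d * dmul k n (dmul k n (b_elem k n) (dbas d)) (b_elem k n) d') | c. True}"
proof -
  interpret stable_range k n by unfold_locales (rule assms)
  have "restrict (phi k n (b_elem k n)) (eM k n) = restrict id (eM k n)"
    by (rule restrict_ext) (simp add: phi_B eM_Mvec emap_eM_fix)
  then show ?thesis
    unfolding no_forb_def[symmetric]
    using bij_betw_phi_restrict inj_on_bdb bdb_lin_indep bBb_eq_span_bdb
    by (auto intro!: restrict_ext simp: phi_dmul phi_add_alg phi_smult_alg)
qed

end
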